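(* Suppose $\mathcal M$ expands an ordered field. Let $\mathcal J=\bigcup_{g\in S}\{g\}\times J_g\subseteq M^{m+k}$ be an $A$-definable uniform family of supercones $J_g\subseteq M^k$, with $\mathcal L_A$-definable shell $Z\subseteq M^{m+k}$. Then there are an $A$-definable uniform family $\mathcal J'=\{J'_g\}_{g\in S}$ of supercones $J'_g\subseteq M^k$ having shell $\pi_m(Z)\times(0,1)^k$, and an $\mathcal L_A$-definable continuous injective map $F:Z\to M^{m+k}$, such that $F(\mathcal J)=\mathcal J'$.
   Context: Standing assumptions: $T$ is a complete o-minimal theory expanding the theory of ordered abelian groups with a distinguished positive element $1$, in a language $\mathcal L$; $\mathcal L(P)$ is $\mathcal L$ together with a unary predicate $P$; $\widetilde T$ is an $\mathcal L(P)$-theory extending $T$ such that every model $\langle \mathcal N,P\rangle\models\widetilde T$ satisfies: (I) $P$ is small; (II) every $A$-definable $X\subseteq N^n$ is a boolean combination of sets $\{x: \exists z\in P^m\,\varphi(x,z)\}$ with $\varphi$ an $\mathcal L_A$-formula; (III) for every parameter set $A$ with $A\setminus P$ $\mathrm{dcl}$-independent over $P$ and every $A$-definable $V\subseteq N^s$, the topological closure $cl(V)$ is $\mathcal L_A$-definable. $\widetilde{\mathcal M}=\langle\mathcal M,P\rangle$ is a fixed sufficiently saturated model of $\widetilde T$, $\mathcal M=\langle M,<,+,\dots\rangle$. "$A$-definable" means definable in $\widetilde{\mathcal M}$ with parameters from $A$; "$\mathcal L_A$-definable" means definable in $\mathcal M$ with parameters from $A$. $\pi_m$ is projection onto the first $m$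 coordinates, $\pi=\pi_{n-1}$ on $M^n$; for $X\subseteq M^m\times M^n$ and $a\in M^m$, $X_a=\{b\in M^n:(a,b)\in X\}$. A family $\{J_g\}_{g\in S}$ is identified with $\bigcup_{g\in S}\{g\}\times J_g$. Small: a definable $X\subseteq M^n$ is large if for some $m$ and some $\mathcal L$-definable $f:M^{nm}\to M$, $f(X^m)$ contains an open interval; otherwise small. A subset of an interval $I$ is co-small in $I$ if its complement in $I$ is small. Supercone: $M^0=\{0\}$ is a supercone; a definable $J\subseteq M^{n+1}$ is a supercone if $\pi(J)$ is a supercone and there are $\mathcal L$-definable continuous $h_1<h_2:M^n\to M\cup\{\pm\infty\}$ such that for every $a\in\pi(J)$, $J_a\subseteq(h_1(a),h_2(a))$ and $J_a$ is co-small in $(h_1(a),h_2(a))$. A supercone is $A$-definable if it is $A$-definable as a set and its closure is $\mathcal L_A$-definable. Uniform family: a definable family $\mathcal J=\bigcup_{g\in S}\{g\}\times J_g\subseteq M^{m+k}$ of supercones $J_g\subseteq M^k$ is uniform if there is a cell $V\subseteq M^{m+k}$ (a shell) with $\mathcal J\subseteq V$ and $cl(\pi_{m+j}(\mathcal J)_g)=cl(\pi_{m+j}(V)_g)$ for all $g\in S$, $0<j\le k$. Such a family is $A$-definable if it is an $A$-definable family and has an $\mathcal L_A$-definable shell. *)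

theory Defs
  imports Main
begin

text \<open>Tuples in M^n are lists of length n. A "structure" on the carrier 'a is given
geometrically (van den Dries): S n X means X is a 0-definable subset of M^n.\<close>

definition tuples :: "nat \<Rightarrow> 'a list set" where
  "tuples n = {x. length x = n}"

definition is_structure :: "(nat \<Rightarrow> 'a list set \<Rightarrow> bool) \<Rightarrow> bool" where
  "is_structure S \<longleftrightarrow>
     (\<forall>n X. S n X \<longrightarrow> X \<subseteq> tuples n) \<and>
     (\<forall>n. S n (tuples n)) \<and>
     (\<forall>n X. S n X \<longrightarrow> S n (tuples n - X)) \<and>
     (\<forall>n X Y. S n X \<longrightarrow> S n Y \<longrightarrow> S n (X \<inter> Y)) \<and>
     (\<forall>n X. S n X \<longrightarrow> S (Suc n) {x @ [y] | x y. x \<in> X}) \<and>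
     (\<forall>n X. S n X \<longrightarrow> S (Suc n) {y # x | x y. x \<in> X}) \<and>
     (\<forall>n X. S (Suc n) X \<longrightarrow> S n (take n ` X)) \<and>
     (\<forall>n i j. i < n \<longrightarrow> j < n \<longrightarrow> S n {x \<in> tuples n. x ! i = x ! j})"

text \<open>The structure generated by S together with a unary predicate P
 (the 0-definable sets of the expansion by P).\<close>

inductive gen :: "(nat \<Rightarrow> 'a list set \<Rightarrow> bool) \<Rightarrow> 'a set \<Rightarrow> nat \<Rightarrow> 'a list set \<Rightarrow> bool"
  for S :: "nat \<Rightarrow> 'a list set \<Rightarrow> bool" and P :: "'a set" where
  base: "S n X \<Longrightarrow> gen S P n X"
| pred: "gen S P 1 {[x] | x. x \<in> P}"
| univ: "gen S P n (tuples n)"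
| compl: "gen S P n X \<Longrightarrow> gen S P n (tuples n - X)"
| inter: "gen S P n X \<Longrightarrow> gen S P n Y \<Longrightarrow> gen S P n (X \<inter> Y)"
| prodr: "gen S P n X \<Longrightarrow> gen S P (Suc n) {x @ [y] | x y. x \<in> X}"
| prodl: "gen S P n X \<Longrightarrow> gen S P (Suc n) {y # x | x y. x \<in> X}"
| proj: "gen S P (Suc n) X \<Longrightarrow> gen S P n (take n ` X)"
| diag: "i < n \<Longrightarrow> j < n \<Longrightarrow> gen S P n {x \<in> tuples n. x ! i = x ! j}"

text \<open>Definable with parameters from B (parameters placed first).\<close>

definition defA :: "(nat \<Rightarrow> 'a list set \<Rightarrow> bool) \<Rightarrow> 'a set \<Rightarrow> nat \<Rightarrow> 'a list set \<Rightarrow> bool" where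
  "defA S B n X \<longleftrightarrow> (\<exists>a Y. set a \<subseteq> B \<and> S (length a + n) Y \<and>
      X = {x \<in> tuples n. a @ x \<in> Y})"

datatype 'a ext = MInf | Fin 'a | PInf

fun eless :: "'a::linorder ext \<Rightarrow> 'a ext \<Rightarrow> bool" where
  "eless MInf MInf = False"
| "eless MInf _ = True"
| "eless (Fin a) (Fin b) = (a < b)"
| "eless (Fin _) PInf = True"
| "eless (Fin _) MInf = False"
| "eless PInf _ = False"

definition eivl :: "'a::linorder ext \<Rightarrow> 'a ext \<Rightarrow> 'a set" where
  "eivl l u = {y. eless l (Fin y) \<and> eless (Fin y) u}"

definition box :: "'a::linorder list \<Rightarrow> 'a list \<Rightarrow> 'a list set" where
  "box lo hi = {y. length y = length lo \<and> length hi = length lo \<and>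
      (\<forall>i < length lo. lo ! i < y ! i \<and> y ! i < hi ! i)}"

definition cl :: "nat \<Rightarrow> 'a::linorder list set \<Rightarrow> 'a list set" where
  "cl n X = {x \<in> tuples n. \<forall>lo hi. x \<in> box lo hi \<longrightarrow> box lo hi \<inter> X \<noteq> {}}"

text \<open>Continuity on D of a map into M \<union> {\<plusminus>\<infinity>} (order topology, via the subbasis of open rays).\<close>

definition econt_on :: "'a::linorder list set \<Rightarrow> ('a list \<Rightarrow> 'a ext) \<Rightarrow> bool" where
  "econt_on D h \<longleftrightarrow> (\<forall>x\<in>D. \<forall>c.
     (eless (Fin c) (h x) \<longrightarrow> (\<exists>lo hi. x \<in> box lo hi \<and> (\<forall>y\<in>D \<inter> box lo hi. eless (Fin c) (h y)))) \<and>
     (eless (h x) (Fin c) \<longrightarrow> (\<exists>lo hi. x \<in> box lo hi \<and> (\<forall>y\<in>D \<inter> box lo hi. eless (h y) (Fin c)))))"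

definition cont_on :: "'a::linorder list set \<Rightarrow> nat \<Rightarrow> ('a list \<Rightarrow> 'a list) \<Rightarrow> bool" where
  "cont_on D k F \<longleftrightarrow> (\<forall>i<k. econt_on D (\<lambda>x. Fin (F x ! i)))"

definition edef :: "(nat \<Rightarrow> 'a list set \<Rightarrow> bool) \<Rightarrow> 'a set \<Rightarrow> nat \<Rightarrow> 'a list set \<Rightarrow> ('a list \<Rightarrow> 'a ext) \<Rightarrow> bool" where
  "edef S B n D h \<longleftrightarrow> defA S B n D \<and>
     defA S B (Suc n) {x @ [v] | x v. x \<in> D \<and> h x = Fin v} \<and>
     defA S B n {x \<in> D. h x = PInf} \<and> defA S B n {x \<in> D. h x = MInf}"

definition fdef :: "(nat \<Rightarrow> 'a list set \<Rightarrow> bool) \<Rightarrow> 'a set \<Rightarrow> nat \<Rightarrow> nat \<Rightarrow> 'a list set \<Rightarrow> ('a list \<Rightarrow> 'a list) \<Rightarrow> bool" where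
  "fdef S B n k D F \<longleftrightarrow> D \<subseteq> tuples n \<and> (\<forall>x\<in>D. length (F x) = k) \<and>
     defA S B (n + k) {x @ F x | x. x \<in> D}"

text \<open>Large / small (SL = the L-definable sets; L-definable functions may use parameters).\<close>

definition large :: "(nat \<Rightarrow> 'a list set \<Rightarrow> bool) \<Rightarrow> nat \<Rightarrow> 'a::linorder list set \<Rightarrow> bool" where
  "large SL n X \<longleftrightarrow> (\<exists>m f. defA SL UNIV (n * m + 1) {x @ [f x] | x. length x = n * m} \<and>
      (\<exists>a b. a < b \<and> {a<..<b} \<subseteq> {f (concat xs) | xs. length xs = m \<and> set xs \<subseteq> X}))"

definition small :: "(nat \<Rightarrow> 'a list set \<Rightarrow> bool) \<Rightarrow> nat \<Rightarrow> 'a::linorder list set \<Rightarrow> bool" where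
  "small SL n X \<longleftrightarrow> \<not> large SL n X"

definition fiber :: "'a list set \<Rightarrow> 'a list \<Rightarrow> 'a list set" where
  "fiber X g = {y. g @ y \<in> X}"

text \<open>Supercones in M^n. SL: L-definable sets, SP: L(P)-definable sets.\<close>

fun supercone :: "(nat \<Rightarrow> 'a list set \<Rightarrow> bool) \<Rightarrow> (nat \<Rightarrow> 'a list set \<Rightarrow> bool) \<Rightarrow> nat \<Rightarrow> 'a::linorder list set \<Rightarrow> bool" where
  "supercone SL SP 0 J \<longleftrightarrow> J = {[]}"
| "supercone SL SP (Suc n) J \<longleftrightarrow> defA SP UNIV (Suc n) J \<and> supercone SL SP n (take n ` J) \<and>
     (\<exists>h1 h2. edef SL UNIV n (tuples n) h1 \<and> edef SL UNIV n (tuples n) h2 \<and>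
        econt_on (tuples n) h1 \<and> econt_on (tuples n) h2 \<and>
        (\<forall>x\<in>tuples n. eless (h1 x) (h2 x)) \<and>
        (\<forall>a\<in>take n ` J. {y. a @ [y] \<in> J} \<subseteq> eivl (h1 a) (h2 a) \<and>
            small SL 1 {[y] | y. y \<in> eivl (h1 a) (h2 a) - {y. a @ [y] \<in> J}}))"

definition bound_fn :: "(nat \<Rightarrow> 'a list set \<Rightarrow> bool) \<Rightarrow> nat \<Rightarrow> 'a::linorder list set \<Rightarrow> ('a list \<Rightarrow> 'a ext) \<Rightarrow> bool" where
  "bound_fn SL n D h \<longleftrightarrow> (\<forall>x\<in>D. h x = MInf) \<or> (\<forall>x\<in>D. h x = PInf) \<or>
     ((\<forall>x\<in>D. \<exists>v. h x = Fin v) \<and> edef SL UNIV n D h \<and> econt_on D h)"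

fun cell :: "(nat \<Rightarrow> 'a list set \<Rightarrow> bool) \<Rightarrow> nat \<Rightarrow> 'a::linorder list set \<Rightarrow> bool" where
  "cell SL 0 C \<longleftrightarrow> C = {[]}"
| "cell SL (Suc n) C \<longleftrightarrow>
     (\<exists>D f. cell SL n D \<and> edef SL UNIV n D (\<lambda>x. Fin (f x)) \<and> econt_on D (\<lambda>x. Fin (f x)) \<and>
        C = {x @ [f x] | x. x \<in> D}) \<or>
     (\<exists>D h1 h2. cell SL n D \<and> bound_fn SL n D h1 \<and> bound_fn SL n D h2 \<and>
        (\<forall>x\<in>D. eless (h1 x) (h2 x)) \<and>
        C = {x @ [y] | x y. x \<in> D \<and> y \<in> eivl (h1 x) (h2 x)})"

definition supercone_family :: "(nat \<Rightarrow> 'a list set \<Rightarrow> bool) \<Rightarrow> (nat \<Rightarrow> 'a list set \<Rightarrow> bool) \<Rightarrow> nat \<Rightarrow> nat \<Rightarrow> 'a list set \<Rightarrow> 'a::linorder list set \<Rightarrow> bool" where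
  "supercone_family SL SP m k S J \<longleftrightarrow> S \<subseteq> tuples m \<and>
     J = {g @ y | g y. g \<in> S \<and> y \<in> fiber J g} \<and> J \<subseteq> tuples (m + k) \<and>
     defA SP UNIV (m + k) J \<and> (\<forall>g\<in>S. supercone SL SP k (fiber J g))"

definition is_shell :: "(nat \<Rightarrow> 'a list set \<Rightarrow> bool) \<Rightarrow> nat \<Rightarrow> nat \<Rightarrow> 'a list set \<Rightarrow> 'a list set \<Rightarrow> 'a::linorder list set \<Rightarrow> bool" where
  "is_shell SL m k S J V \<longleftrightarrow> cell SL (m + k) V \<and> J \<subseteq> V \<and>
     (\<forall>g\<in>S. \<forall>j. 0 < j \<and> j \<le> k \<longrightarrow>
        cl j (fiber (take (m + j) ` J) g) = cl j (fiber (take (m + j) ` V) g))"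

definition A_uniform_family_shell :: "(nat \<Rightarrow> 'a list set \<Rightarrow> bool) \<Rightarrow> (nat \<Rightarrow> 'a list set \<Rightarrow> bool) \<Rightarrow> 'a set \<Rightarrow> nat \<Rightarrow> nat \<Rightarrow> 'a list set \<Rightarrow> 'a list set \<Rightarrow> 'a::linorder list set \<Rightarrow> bool" where
  "A_uniform_family_shell SL SP A m k S J V \<longleftrightarrow>
     supercone_family SL SP m k S J \<and> is_shell SL m k S J V \<and>
     defA SP A (m + k) J \<and> defA SL A (m + k) V"

definition o_minimal :: "(nat \<Rightarrow> 'a::linorder list set \<Rightarrow> bool) \<Rightarrow> bool" where
  "o_minimal SL \<longleftrightarrow> (\<forall>X. defA SL UNIV 1 X \<longrightarrow>
     (\<exists>F. finite F \<and> {x. [x] \<in> X} = \<Union>F \<and>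
        (\<forall>I\<in>F. (\<exists>c. I = {c}) \<or> (\<exists>a b. I = eivl a b))))"

definition expands_ordered_field :: "(nat \<Rightarrow> 'a::linordered_field list set \<Rightarrow> bool) \<Rightarrow> bool" where
  "expands_ordered_field SL \<longleftrightarrow>
     SL 2 {[x, y] | x y. x < y} \<and> SL 3 {[x, y, x + y] | x y. True} \<and>
     SL 3 {[x, y, x * y] | x y. True} \<and> SL 1 {[1]}"

definition dcl :: "(nat \<Rightarrow> 'a list set \<Rightarrow> bool) \<Rightarrow> 'a set \<Rightarrow> 'a set" where
  "dcl SL B = {b. defA SL B 1 {[b]}}"

definition dcl_indep_over :: "(nat \<Rightarrow> 'a list set \<Rightarrow> bool) \<Rightarrow> 'a set \<Rightarrow> 'a set \<Rightarrow> bool" where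
  "dcl_indep_over SL P C \<longleftrightarrow> (\<forall>a\<in>C. a \<notin> dcl SL ((C - {a}) \<union> P))"

definition basicP :: "(nat \<Rightarrow> 'a list set \<Rightarrow> bool) \<Rightarrow> 'a set \<Rightarrow> 'a set \<Rightarrow> nat \<Rightarrow> 'a list set \<Rightarrow> bool" where
  "basicP SL P A n X \<longleftrightarrow> (\<exists>l Y. defA SL A (n + l) Y \<and>
     X = {x \<in> tuples n. \<exists>z. length z = l \<and> set z \<subseteq> P \<and> x @ z \<in> Y})"

inductive bcomb :: "('a list set \<Rightarrow> bool) \<Rightarrow> nat \<Rightarrow> 'a list set \<Rightarrow> bool"
  for B :: "'a list set \<Rightarrow> bool" and n :: nat where
  bbase: "B X \<Longrightarrow> bcomb B n X"
| bcompl: "bcomb B n X \<Longrightarrow> bcomb B n (tuples n - X)"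
| binter: "bcomb B n X \<Longrightarrow> bcomb B n Y \<Longrightarrow> bcomb B n (X \<inter> Y)"

definition saturated :: "(nat \<Rightarrow> 'a list set \<Rightarrow> bool) \<Rightarrow> 'b set \<Rightarrow> bool" where
  "saturated SP K \<longleftrightarrow> (\<forall>(B::'a set) n (F::'a list set set). (card_of B, card_of K) \<in> ordLess \<longrightarrow>
     (\<forall>X\<in>F. defA SP B n X) \<longrightarrow>
     (\<forall>G. finite G \<longrightarrow> G \<subseteq> F \<longrightarrow> tuples n \<inter> \<Inter>G \<noteq> {}) \<longrightarrow>
     tuples n \<inter> \<Inter>F \<noteq> {})"

definition standing_assumptions :: "(nat \<Rightarrow> 'a::linordered_field list set \<Rightarrow> bool) \<Rightarrow> 'a set \<Rightarrow> bool" where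
  "standing_assumptions SL P \<longleftrightarrow>
     is_structure SL \<and> expands_ordered_field SL \<and> o_minimal SL \<and>
     \<comment> \<open>(I)\<close> small SL 1 {[x] | x. x \<in> P} \<and>
     \<comment> \<open>(II)\<close> (\<forall>A n X. defA (gen SL P) A n X \<longrightarrow> bcomb (basicP SL P A n) n X) \<and>
     \<comment> \<open>(III)\<close> (\<forall>A. dcl_indep_over SL P (A - P) \<longrightarrow>
          (\<forall>s V. defA (gen SL P) A s V \<longrightarrow> defA SL A s (cl s V))) \<and>
     \<comment> \<open>sufficient saturation: \<kappa>-saturated for some \<kappa> > |L|\<close>
     (\<exists>K::'a set. (card_of {(n, X). SL n X}, card_of K) \<in> ordLess \<and> saturated (gen SL P) K)"

end

theory Submission
  imports Defs
begin

(*
  A fibre of J contains a supercone, whose levels have many points over a single base point,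
  so every level of the cell Z above the first m coordinates is an open interval cell between
  continuous L-definable bounds hL j < hU j rather than a graph.  Compose the j-th coordinate
  with the order isomorphism psi of M \<union> {\<plusminus>\<infinity>} onto [0,1] and rescale affinely so that
  psi(hL j) and psi(hU j) go to 0 and 1.  The resulting coordinate T_j is continuous, strictly
  increasing in y_j and maps each fibre of level j + 1 onto (0,1), so
  F(g, y) = (g, T_0, ..., T_(k-1)) is a continuous injection of Z onto the box shell over
  \<pi>_m(Z).  On each fibre T_j is an injective definable map, so it carries co-small fibres of J
  to co-small subsets of (0,1), and continuity transports the closure condition of the shell.
  F is L_A-definable although hL and hU need not be: psi(hL j x) and psi(hU j x) are the
  infimum and supremum of psi over the shell fibre above x.
*)

section \<open>Structures and definability\<close>

lemma tuples_iff [simp]: "x \<in> tuples n \<longleftrightarrow> length x = n"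
  by (simp add: tuples_def)

lemma
  assumes "is_structure S"
  shows structure_subset: "S n X \<Longrightarrow> X \<subseteq> tuples n"
    and structure_tuples: "S n (tuples n)"
    and structure_compl: "S n X \<Longrightarrow> S n (tuples n - X)"
    and structure_inter: "S n X \<Longrightarrow> S n Y \<Longrightarrow> S n (X \<inter> Y)"
    and structure_Cons: "S n X \<Longrightarrow> S (Suc n) {y # x | x y. x \<in> X}"
    and structure_take_Suc: "S (Suc n) X \<Longrightarrow> S n (take n ` X)"
    and structure_diag: "i < n \<Longrightarrow> j < n \<Longrightarrow> S n {x \<in> tuples n. x ! i = x ! j}"
  using assms by (simp_all add: is_structure_def)

lemma structure_prefix:
  assumes "is_structure S" "S p Y"
  shows "S (n + p) {ys @ y | ys y. length ys = n \<and> y \<in> Y}"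
proof (induction n)
  case 0
  then show ?case using assms by simp
next
  case (Suc n)
  have "S (Suc (n+p)) {z # x | x z. x \<in> {ys @ y | ys y. length ys = n \<and> y \<in> Y}}"
    using structure_Cons[OF assms(1) Suc] .
  moreover have "{z # x | x z. x \<in> {ys @ y | ys y. length ys = n \<and> y \<in> Y}}
     = {ys @ y | ys y. length ys = Suc n \<and> y \<in> Y}"
  proof (rule set_eqI, rule iffI)
    fix w assume "w \<in> {z # x | x z. x \<in> {ys @ y | ys y. length ys = n \<and> y \<in> Y}}"
    then obtain z ys y where A: "w = (z # ys) @ y" "length ys = n" "y \<in> Y" by auto
    then have "length (z # ys) = Suc n" by simp
    then show "w \<in> {ys @ y | ys y. length ys = Suc n \<and> y \<in> Y}" using A by blast
  next
    fix w assume "w \<in> {ys @ y | ys y. length ys = Suc n \<and> y \<in> Y}"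
    then obtain ys y where "w = ys @ y" "length ys = Suc n" "y \<in> Y" by auto
    then show "w \<in> {z # x | x z. x \<in> {ys @ y | ys y. length ys = n \<and> y \<in> Y}}"
      by (cases ys) auto
  qed
  ultimately show ?case by simp
qed

lemma structure_take:
  assumes "is_structure S" "S (n + p) X"
  shows "S n (take n ` X)"
  using assms(2)
proof (induction p arbitrary: X)
  case 0
  have "X \<subseteq> tuples n" using structure_subset[OF assms(1)] 0 by simp
  then have "take n ` X = X" by (force simp: image_iff)
  then show ?case using 0 by simp
next
  case (Suc p)
  have "S (n + p) (take (n+p) ` X)" using structure_take_Suc[OF assms(1)] Suc.prems by simp
  from Suc.IH[OF this] have "S n (take n ` take (n + p) ` X)" .
  moreover have "take n ` take (n + p) ` X = take n ` X"
    by (simp add: image_image min_def)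
  ultimately show ?case by simp
qed

lemma structure_Inter_list:
  assumes "is_structure S" "\<forall>X\<in>set Xs. S n X"
  shows "S n (tuples n \<inter> \<Inter>(set Xs))"
  using assms(2)
proof (induction Xs)
  case Nil
  then show ?case using structure_tuples[OF assms(1)] by simp
next
  case (Cons X Xs)
  have "S n (X \<inter> (tuples n \<inter> \<Inter>(set Xs)))" using Cons structure_inter[OF assms(1)] by simp
  moreover have "X \<inter> (tuples n \<inter> \<Inter>(set Xs)) = tuples n \<inter> \<Inter>(set (X # Xs))" by auto
  ultimately show ?case by simp
qed

lemma structure_reindex:
  fixes S :: "nat \<Rightarrow> 'a list set \<Rightarrow> bool"
  assumes st: "is_structure S" and Y: "S p Y" and len: "length vs = p"
    and vs: "\<forall>v\<in>set vs. v < n"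
  shows "S n {z \<in> tuples n. map (nth z) vs \<in> Y}"
proof -
  define W where "W = {ys @ y | ys y. length ys = n \<and> y \<in> Y}"
  have W: "S (n+p) W" unfolding W_def by (rule structure_prefix[OF st Y])
  define Ds :: "'a list set list" where "Ds = map (\<lambda>i. {x \<in> tuples (n+p). x ! (n+i) = x ! (vs!i)}) [0..<p]"
  have "\<forall>X\<in>set Ds. S (n+p) X"
  proof
    fix X assume "X \<in> set Ds"
    then obtain i where i: "i < p" "X = {x \<in> tuples (n+p). x ! (n+i) = x ! (vs!i)}"
      unfolding Ds_def by auto
    have "vs ! i < n" using vs i len by simp
    then show "S (n+p) X" unfolding i(2) by (intro structure_diag[OF st]) (use i(1) in auto)
  qed
  then have D: "S (n+p) (tuples (n+p) \<inter> \<Inter>(set Ds))" by (rule structure_Inter_list[OF st])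
  have "S n (take n ` (W \<inter> (tuples (n+p) \<inter> \<Inter>(set Ds))))"
    by (rule structure_take[OF st structure_inter[OF st W D]])
  moreover have "take n ` (W \<inter> (tuples (n+p) \<inter> \<Inter>(set Ds))) = {z \<in> tuples n. map (nth z) vs \<in> Y}"
  proof (rule set_eqI, rule iffI)
    fix z assume "z \<in> take n ` (W \<inter> (tuples (n+p) \<inter> \<Inter>(set Ds)))"
    then obtain ys y where A: "z = take n (ys @ y)" "length ys = n" "y \<in> Y"
      "\<forall>i<p. (ys @ y) ! (n+i) = (ys @ y) ! (vs!i)"
      unfolding W_def Ds_def by auto
    have ly: "length y = p" using structure_subset[OF st Y] A(3) by auto
    have z: "z = ys" using A by simp
    have "map (nth z) vs = y"
    proof (rule nth_equalityI)
      show "length (map (nth z) vs) = length y" using ly len by simp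
      fix i assume "i < length (map (nth z) vs)"
      then have i: "i < p" using len by simp
      have "(ys @ y) ! (n+i) = y ! i" using A(2) by (simp add: nth_append)
      moreover have "(ys @ y) ! (vs!i) = ys ! (vs!i)" using A(2) vs len i by (simp add: nth_append)
      ultimately show "map (nth z) vs ! i = y ! i" using A(4) i z len by simp
    qed
    then show "z \<in> {z \<in> tuples n. map (nth z) vs \<in> Y}" using A z by simp
  next
    fix z assume "z \<in> {z \<in> tuples n. map (nth z) vs \<in> Y}"
    then have z: "length z = n" "map (nth z) vs \<in> Y" by auto
    let ?w = "z @ map (nth z) vs"
    have "?w \<in> W" unfolding W_def using z by blast
    moreover have "?w \<in> tuples (n+p) \<inter> \<Inter>(set Ds)"
      unfolding Ds_def using z len vs by (auto simp: nth_append)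
    moreover have "z = take n ?w" using z by simp
    ultimately show "z \<in> take n ` (W \<inter> (tuples (n+p) \<inter> \<Inter>(set Ds)))" by blast
  qed
  ultimately show ?thesis by simp
qed

lemma defA_subset: "defA S B n X \<Longrightarrow> X \<subseteq> tuples n"
  by (auto simp: defA_def)

lemma defA_of_structure: "S n X \<Longrightarrow> is_structure S \<Longrightarrow> defA S B n X"
proof -
  assume a: "S n X" "is_structure S"
  have "X \<subseteq> tuples n" using structure_subset[OF a(2) a(1)] .
  then have "X = {x \<in> tuples n. [] @ x \<in> X}" by auto
  then show ?thesis unfolding defA_def using a(1) by (intro exI[of _ "[]"] exI[of _ X]) auto
qed

lemma defA_mono: "defA S B n X \<Longrightarrow> B \<subseteq> B' \<Longrightarrow> defA S B' n X"
  unfolding defA_def by blast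

lemma defA_reindex:
  assumes st: "is_structure S" and Y: "defA S B p Y" and len: "length vs = p"
    and vs: "\<forall>v\<in>set vs. v < n"
  shows "defA S B n {z \<in> tuples n. map (nth z) vs \<in> Y}"
proof -
  obtain a Y0 where a: "set a \<subseteq> B" "S (length a + p) Y0" "Y = {x \<in> tuples p. a @ x \<in> Y0}"
    using Y unfolding defA_def by blast
  define idx where "idx = [0..<length a] @ map (\<lambda>v. length a + v) vs"
  have "S (length a + n) {w \<in> tuples (length a + n). map (nth w) idx \<in> Y0}"
    by (rule structure_reindex[OF st a(2)]) (use len vs in \<open>auto simp: idx_def\<close>)
  moreover have "{z \<in> tuples n. map (nth z) vs \<in> Y} =
     {z \<in> tuples n. a @ z \<in> {w \<in> tuples (length a + n). map (nth w) idx \<in> Y0}}"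
  proof -
    have "\<And>z. length z = n \<Longrightarrow> map (nth (a @ z)) idx = a @ map (nth z) vs"
    proof -
      fix z :: "'a list" assume "length z = n"
      have "map (nth (a @ z)) [0..<length a] = a"
        by (rule nth_equalityI) (auto simp: nth_append)
      moreover have "map (nth (a @ z)) (map (\<lambda>v. length a + v) vs) = map (nth z) vs"
        by (auto simp: nth_append)
      ultimately show "map (nth (a @ z)) idx = a @ map (nth z) vs" by (simp add: idx_def)
    qed
    then show ?thesis using a(3) len by auto
  qed
  ultimately show ?thesis unfolding defA_def using a(1) by blast
qed

lemma defA_inter:
  assumes st: "is_structure S" and X: "defA S B n X" and Y: "defA S B n Y"
  shows "defA S B n (X \<inter> Y)"
proof -
  obtain a1 Y1 where a1: "set a1 \<subseteq> B" "S (length a1 + n) Y1" "X = {x \<in> tuples n. a1 @ x \<in> Y1}"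
    using X unfolding defA_def by blast
  obtain a2 Y2 where a2: "set a2 \<subseteq> B" "S (length a2 + n) Y2" "Y = {x \<in> tuples n. a2 @ x \<in> Y2}"
    using Y unfolding defA_def by blast
  let ?N = "length a1 + length a2 + n"
  define i1 where "i1 = [0..<length a1] @ [length a1 + length a2..<?N]"
  define i2 where "i2 = [length a1..<?N]"
  have S1: "S ?N {w \<in> tuples ?N. map (nth w) i1 \<in> Y1}"
    by (rule structure_reindex[OF st a1(2)]) (auto simp: i1_def)
  have S2: "S ?N {w \<in> tuples ?N. map (nth w) i2 \<in> Y2}"
    by (rule structure_reindex[OF st a2(2)]) (auto simp: i2_def)
  have S12: "S (length (a1 @ a2) + n) ({w \<in> tuples ?N. map (nth w) i1 \<in> Y1} \<inter> {w \<in> tuples ?N. map (nth w) i2 \<in> Y2})"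
    using structure_inter[OF st S1 S2] by simp
  have e1: "map (nth (a1 @ a2 @ z)) i1 = a1 @ z" if "length z = n" for z :: "'a list"
  proof (rule nth_equalityI)
    show "length (map (nth (a1 @ a2 @ z)) i1) = length (a1 @ z)" using that by (simp add: i1_def)
    fix i assume "i < length (map (nth (a1 @ a2 @ z)) i1)"
    then show "map (nth (a1 @ a2 @ z)) i1 ! i = (a1 @ z) ! i" using that
      by (auto simp: i1_def nth_append)
  qed
  have e2: "map (nth (a1 @ a2 @ z)) i2 = a2 @ z" if "length z = n" for z :: "'a list"
  proof (rule nth_equalityI)
    show "length (map (nth (a1 @ a2 @ z)) i2) = length (a2 @ z)" using that by (simp add: i2_def)
    fix i assume "i < length (map (nth (a1 @ a2 @ z)) i2)"
    then show "map (nth (a1 @ a2 @ z)) i2 ! i = (a2 @ z) ! i" using that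
      by (auto simp: i2_def nth_append)
  qed
  have "X \<inter> Y = {z \<in> tuples n. (a1 @ a2) @ z \<in>
     ({w \<in> tuples ?N. map (nth w) i1 \<in> Y1} \<inter> {w \<in> tuples ?N. map (nth w) i2 \<in> Y2})}"
    using a1(3) a2(3) e1 e2 by auto
  then show ?thesis unfolding defA_def using S12 a1(1) a2(1) by (intro exI[of _ "a1 @ a2"]) auto
qed

lemma defA_compl:
  assumes st: "is_structure S" and X: "defA S B n X"
  shows "defA S B n (tuples n - X)"
proof -
  obtain a Y where a: "set a \<subseteq> B" "S (length a + n) Y" "X = {x \<in> tuples n. a @ x \<in> Y}"
    using X unfolding defA_def by blast
  have "tuples n - X = {x \<in> tuples n. a @ x \<in> tuples (length a + n) - Y}" using a(3) by auto
  then show ?thesis unfolding defA_def using a structure_compl[OF st a(2)] by blast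
qed

lemma defA_take_Suc:
  assumes st: "is_structure S" and X: "defA S B (Suc n) X"
  shows "defA S B n (take n ` X)"
proof -
  obtain a Y where a: "set a \<subseteq> B" "S (length a + Suc n) Y" "X = {x \<in> tuples (Suc n). a @ x \<in> Y}"
    using X unfolding defA_def by blast
  have Y: "Y \<subseteq> tuples (length a + Suc n)" using structure_subset[OF st a(2)] .
  have "S (length a + n) (take (length a + n) ` Y)" using structure_take_Suc[OF st] a(2) by simp
  moreover have "take n ` X = {x \<in> tuples n. a @ x \<in> take (length a + n) ` Y}"
  proof (rule set_eqI, rule iffI)
    fix x assume "x \<in> take n ` X"
    then obtain z where "z \<in> X" "x = take n z" by auto
    then show "x \<in> {x \<in> tuples n. a @ x \<in> take (length a + n) ` Y}" using a(3)
      by (auto intro!: image_eqI[of _ _ "a @ z"])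
  next
    fix x assume "x \<in> {x \<in> tuples n. a @ x \<in> take (length a + n) ` Y}"
    then obtain w where w: "w \<in> Y" "a @ x = take (length a + n) w" "length x = n" by auto
    have lw: "length w = length a + Suc n" using Y w(1) by auto
    have "w = a @ x @ [last w]"
    proof -
      note w2 = w(2)
      have "w = take (length a + n) w @ [w ! (length a + n)]"
        using lw by (metis add_Suc_right id_take_nth_drop lessI append_take_drop_id
            drop_eq_Nil le_refl Cons_nth_drop_Suc)
      moreover have "w ! (length a + n) = last w"
      proof -
        have "w \<noteq> []" using lw by auto
        then show ?thesis using lw by (simp add: last_conv_nth)
      qed
      ultimately show ?thesis using w2 by (metis append.assoc)
    qed
    then have "x @ [last w] \<in> X" using a(3) w by auto
    then show "x \<in> take n ` X" using w(3) by (auto intro!: image_eqI[of _ _ "x @ [last w]"])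
  qed
  ultimately show ?thesis unfolding defA_def using a(1) by blast
qed

lemma defA_take:
  assumes st: "is_structure S" and X: "defA S B (n + p) X"
  shows "defA S B n (take n ` X)"
  using X
proof (induction p arbitrary: X)
  case 0
  have "X \<subseteq> tuples n" using defA_subset[OF 0[simplified]] .
  then have "take n ` X = X" by (force simp: image_iff)
  then show ?case using 0 by simp
next
  case (Suc p)
  have "defA S B (n + p) (take (n+p) ` X)" using defA_take_Suc[OF st] Suc.prems by simp
  from Suc.IH[OF this] have "defA S B n (take n ` take (n + p) ` X)" .
  moreover have "take n ` take (n + p) ` X = take n ` X"
    by (simp add: image_image min_def)
  ultimately show ?case by simp
qed

lemma defA_empty: "is_structure S \<Longrightarrow> defA S B n {}"
proof -
  assume st: "is_structure S"
  have "defA S B n (tuples n)" by (rule defA_of_structure[OF structure_tuples[OF st] st])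
  then have "defA S B n (tuples n - tuples n)" by (rule defA_compl[OF st])
  then show ?thesis by simp
qed

lemma defA_fiber:
  assumes X: "defA S B (length g + n) X" and g: "set g \<subseteq> B"
  shows "defA S B n (fiber X g)"
proof -
  obtain a Y where a: "set a \<subseteq> B" "S (length a + (length g + n)) Y"
     "X = {x \<in> tuples (length g + n). a @ x \<in> Y}"
    using X unfolding defA_def by blast
  have "fiber X g = {x \<in> tuples n. (a @ g) @ x \<in> Y}" using a(3) by (auto simp: fiber_def)
  then show ?thesis unfolding defA_def using a g by (intro exI[of _ "a @ g"]) (auto simp: add.assoc)
qed

lemma is_structure_gen: "is_structure SL \<Longrightarrow> is_structure (gen SL P)"
proof -
  assume st: "is_structure SL"
  have sub: "gen SL P n X \<Longrightarrow> X \<subseteq> tuples n" for n X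
  proof (induction rule: gen.induct)
    case (base n X) then show ?case using structure_subset[OF st] by blast
  next
    case pred then show ?case by auto
  next
    case (proj n X) then show ?case by auto
  next
    case (prodr n X) then show ?case by auto
  next
    case (prodl n X) then show ?case by auto
  qed (auto simp: tuples_def)
  show ?thesis unfolding is_structure_def
    apply (intro conjI allI impI)
    using sub apply blast
           apply (rule gen.univ)
          apply (erule gen.compl)
         apply (erule (1) gen.inter)
        apply (erule gen.prodr)
       apply (erule gen.prodl)
      apply (erule gen.proj)
     apply (erule (1) gen.diag)
    done
qed

lemma defA_gen: "is_structure SL \<Longrightarrow> defA SL B n X \<Longrightarrow> defA (gen SL P) B n X"
  unfolding defA_def by (auto intro: gen.base)

section \<open>Formulas\<close>

text \<open>\<open>At X vs\<close> says that the variables with indices \<open>vs\<close> form a tuple in \<open>X\<close>; \<open>Ex\<close> binds the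
  variable whose index is the current length of the assignment.\<close>

datatype 'a fm = At "'a list set" "nat list" | Neg "'a fm" | Conj "'a fm" "'a fm" | Ex "'a fm"

fun sem :: "'a fm \<Rightarrow> 'a list \<Rightarrow> bool" where
  "sem (At X vs) x = (map (nth x) vs \<in> X)"
| "sem (Neg f) x = (\<not> sem f x)"
| "sem (Conj f g) x = (sem f x \<and> sem g x)"
| "sem (Ex f) x = (\<exists>y. sem f (x @ [y]))"

fun fm_ok :: "(nat \<Rightarrow> 'a list set \<Rightarrow> bool) \<Rightarrow> 'a set \<Rightarrow> nat \<Rightarrow> 'a fm \<Rightarrow> bool" where
  "fm_ok S B n (At X vs) = (defA S B (length vs) X \<and> (\<forall>v\<in>set vs. v < n))"
| "fm_ok S B n (Neg f) = fm_ok S B n f"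
| "fm_ok S B n (Conj f g) = (fm_ok S B n f \<and> fm_ok S B n g)"
| "fm_ok S B n (Ex f) = fm_ok S B (Suc n) f"

lemma defA_fm:
  assumes st: "is_structure S"
  shows "fm_ok S B n f \<Longrightarrow> defA S B n {x \<in> tuples n. sem f x}"
proof (induction f arbitrary: n)
  case (At X vs)
  then show ?case using defA_reindex[OF st, of B "length vs" X vs n] by simp
next
  case (Neg f)
  have "{x \<in> tuples n. sem (Neg f) x} = tuples n - {x \<in> tuples n. sem f x}" by auto
  then show ?case using Neg defA_compl[OF st] by simp
next
  case (Conj f g)
  have "{x \<in> tuples n. sem (Conj f g) x} = {x \<in> tuples n. sem f x} \<inter> {x \<in> tuples n. sem g x}" by auto
  then show ?case using Conj defA_inter[OF st] by simp
next
  case (Ex f)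
  have "{x \<in> tuples n. sem (Ex f) x} = take n ` {x \<in> tuples (Suc n). sem f x}"
  proof (rule set_eqI, rule iffI)
    fix x assume "x \<in> {x \<in> tuples n. sem (Ex f) x}"
    then obtain y where "length x = n" "sem f (x @ [y])" by auto
    then show "x \<in> take n ` {x \<in> tuples (Suc n). sem f x}" by (auto intro!: image_eqI[of _ _ "x@[y]"])
  next
    fix x assume "x \<in> take n ` {x \<in> tuples (Suc n). sem f x}"
    then obtain z where z: "length z = Suc n" "sem f z" "x = take n z" by auto
    then have "z = x @ [last z]"
      by (metis append_butlast_last_id butlast_conv_take diff_Suc_1 list.size(3) nat.distinct(1))
    then show "x \<in> {x \<in> tuples n. sem (Ex f) x}" using z by (auto intro!: exI[of _ "last z"])
  qed
  then show ?case using Ex defA_take_Suc[OF st] by simp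
qed

definition TT :: "'a fm" where "TT = At {[]} []"

definition Disj :: "'a fm \<Rightarrow> 'a fm \<Rightarrow> 'a fm" where "Disj f g = Neg (Conj (Neg f) (Neg g))"

definition Imp :: "'a fm \<Rightarrow> 'a fm \<Rightarrow> 'a fm" where "Imp f g = Neg (Conj f (Neg g))"

definition All :: "'a fm \<Rightarrow> 'a fm" where "All f = Neg (Ex (Neg f))"

lemma sem_derived[simp]:
  "sem TT x" "sem (Disj f g) x = (sem f x \<or> sem g x)" "sem (Imp f g) x = (sem f x \<longrightarrow> sem g x)"
  "sem (All f) x = (\<forall>y. sem f (x @ [y]))"
  by (auto simp: TT_def Disj_def Imp_def All_def)

lemma fm_ok_TT: "is_structure S \<Longrightarrow> fm_ok S B n TT"
proof -
  assume st: "is_structure S"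
  have "{[]} = tuples 0" by (auto simp: tuples_def)
  then have "defA S B 0 {[]}" using defA_of_structure[of S 0 "tuples 0" B] structure_tuples[OF st, of 0] st by metis
  then show ?thesis by (simp add: TT_def)
qed

lemma fm_ok_derived[simp]:
  "fm_ok S B n (Disj f g) = (fm_ok S B n f \<and> fm_ok S B n g)"
  "fm_ok S B n (Imp f g) = (fm_ok S B n f \<and> fm_ok S B n g)"
  "fm_ok S B n (All f) = fm_ok S B (Suc n) f"
  by (auto simp: Disj_def Imp_def All_def)

fun ExN :: "nat \<Rightarrow> 'a fm \<Rightarrow> 'a fm" where
  "ExN 0 f = f" | "ExN (Suc p) f = ExN p (Ex f)"

lemma sem_ExN: "sem (ExN p f) x = (\<exists>ys. length ys = p \<and> sem f (x @ ys))"
proof (induction p arbitrary: f x)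
  case 0
  then show ?case by simp
next
  case (Suc p)
  have IH: "sem (ExN p (Ex f)) x = (\<exists>ys. length ys = p \<and> sem (Ex f) (x @ ys))"
    by (rule Suc.IH)
  have "(\<exists>ys. length ys = p \<and> sem (Ex f) (x @ ys)) = (\<exists>ys. length ys = Suc p \<and> sem f (x @ ys))"
  proof
    assume "\<exists>ys. length ys = p \<and> sem (Ex f) (x @ ys)"
    then obtain ys y where ys: "length ys = p" "sem f ((x @ ys) @ [y])" by auto
    then show "\<exists>ys. length ys = Suc p \<and> sem f (x @ ys)"
      by (intro exI[of _ "ys @ [y]"]) simp
  next
    assume "\<exists>ys. length ys = Suc p \<and> sem f (x @ ys)"
    then obtain ys where ys: "length ys = Suc p" "sem f (x @ ys)" by blast
    obtain zs z where e: "ys = zs @ [z]"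
      using ys(1) by (metis append_butlast_last_id list.size(3) nat.distinct(1))
    have "length zs = p" using ys(1) e by simp
    moreover have "sem (Ex f) (x @ zs)" using ys(2) e by auto
    ultimately show "\<exists>ys. length ys = p \<and> sem (Ex f) (x @ ys)" by blast
  qed
  then show ?case using IH by simp
qed

lemma fm_ok_ExN[simp]: "fm_ok S B n (ExN p f) = fm_ok S B (n + p) f"
  by (induction p arbitrary: f n) auto

definition BigConj :: "'a fm list \<Rightarrow> 'a fm" where "BigConj fs = foldr Conj fs TT"

lemma sem_BigConj[simp]: "sem (BigConj fs) x = (\<forall>f\<in>set fs. sem f x)"
  by (induction fs) (auto simp: BigConj_def)

lemma fm_ok_BigConj: "is_structure S \<Longrightarrow> (\<forall>f\<in>set fs. fm_ok S B n f) \<Longrightarrow> fm_ok S B n (BigConj fs)"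
  by (induction fs) (auto simp: BigConj_def fm_ok_TT)

definition field_structure :: "(nat \<Rightarrow> 'a::linordered_field list set \<Rightarrow> bool) \<Rightarrow> bool" where
  "field_structure S \<longleftrightarrow> is_structure S \<and> expands_ordered_field S"

lemma field_structure_is_structure: "field_structure S \<Longrightarrow> is_structure S"
  by (simp add: field_structure_def)

lemma map_nth_upt: "n \<le> length w \<Longrightarrow> map (nth w) [0..<n] = take n w"
  by (rule nth_equalityI) auto

lemma map_nth_append_upt [simp]: "n \<le> length x \<Longrightarrow> map (nth (x @ ys)) [0..<n] = take n x"
  by (rule nth_equalityI) (auto simp: nth_append)

lemma map_nth_append_upt_add [simp]: "length x = n \<Longrightarrow> map (nth (x @ y)) [n..<n + length y] = y"
  by (rule nth_equalityI) (auto simp: nth_append)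

definition fun_graph :: "nat \<Rightarrow> ('a list \<Rightarrow> 'a) \<Rightarrow> 'a list set" where
  "fun_graph n f = {w. length w = Suc n \<and> w ! n = f (take n w)}"

lemma fun_graph_snoc [simp]: "length x = n \<Longrightarrow> x @ [a] \<in> fun_graph n f \<longleftrightarrow> a = f x"
  by (auto simp: fun_graph_def nth_append)

lemma defA_fun_graph_binop:
  assumes st: "is_structure S" and op: "defA S B 3 {[a, b, op a b] | a b. True}"
    and f: "defA S B (Suc n) (fun_graph n f)" and g: "defA S B (Suc n) (fun_graph n g)"
  shows "defA S B (Suc n) (fun_graph n (\<lambda>x. op (f x) (g x)))"
proof -
  let ?phi = "Ex (Ex (Conj (At (fun_graph n f) ([0..<n] @ [Suc n]))
    (Conj (At (fun_graph n g) ([0..<n] @ [Suc (Suc n)])) (At {[a, b, op a b] | a b. True} [Suc n, Suc (Suc n), n]))))"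
  have ok: "fm_ok S B (Suc n) ?phi"
    using f g op by (simp add: numeral_eq_Suc)
  have "fun_graph n (\<lambda>x. op (f x) (g x)) = {w \<in> tuples (Suc n). sem ?phi w}"
  proof (rule set_eqI)
    fix w :: "'a list"
    show "w \<in> fun_graph n (\<lambda>x. op (f x) (g x)) \<longleftrightarrow> w \<in> {w \<in> tuples (Suc n). sem ?phi w}"
    proof (cases "length w = Suc n")
      case True
      then obtain x c where w: "w = x @ [c]" "length x = n" by (metis length_Suc_conv_rev)
      have "map (nth (x @ [c, a, b])) ([0..<n] @ [Suc n]) = x @ [a]"
        "map (nth (x @ [c, a, b])) ([0..<n] @ [Suc (Suc n)]) = x @ [b]" for a b
        using w(2) by (auto simp: nth_append)
      then show ?thesis using w by (auto simp: nth_append)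
    qed (auto simp: fun_graph_def)
  qed
  then show ?thesis using defA_fm[OF st ok] by simp
qed

lemma defA_fun_graph_const:
  assumes st: "is_structure S" and c: "defA S B 1 {[c]}"
  shows "defA S B (Suc n) (fun_graph n (\<lambda>_. c))"
proof -
  have "fun_graph n (\<lambda>_. c) = {w \<in> tuples (Suc n). map (nth w) [n] \<in> {[c]}}"
    by (auto simp: fun_graph_def)
  then show ?thesis using defA_reindex[OF st c, of "[n]" "Suc n"] by simp
qed

lemma defA_field_ops:
  assumes "field_structure S"
  shows defA_plus: "defA S B 3 {[a, b, a + b] | a b. True}"
    and defA_times: "defA S B 3 {[a, b, a * b] | a b. True}"
    and defA_less: "defA S B 2 {[a, b] | a b. a < b}"
    and defA_one: "defA S B 1 {[1]}"
    and defA_minus: "defA S B 3 {[a, b, a - b] | a b. True}"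
    and defA_zero: "defA S B 1 {[0]}"
proof -
  have st: "is_structure S" using assms by (rule field_structure_is_structure)
  show plus: "defA S B 3 {[a, b, a + b] | a b. True}" and "defA S B 3 {[a, b, a * b] | a b. True}"
    and "defA S B 2 {[a, b] | a b. a < b}" and "defA S B 1 {[1]}"
    using assms by (auto simp: field_structure_def expands_ordered_field_def intro: defA_of_structure)
  have "{[a, b, a - b :: 'a] | a b. True} = {w \<in> tuples 3. map (nth w) [1, 2, 0] \<in> {[a, b, a + b] | a b. True}}"
  proof (intro set_eqI iffI)
    fix w :: "'a list"
    assume "w \<in> {w \<in> tuples 3. map (nth w) [1, 2, 0] \<in> {[a, b, a + b] | a b. True}}"
    then obtain a b c where "w = [a, b, c]" "a = b + c" by (auto simp: numeral_eq_Suc length_Suc_conv)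
    then show "w \<in> {[a, b, a - b] | a b. True}" by auto
  qed auto
  then show "defA S B 3 {[a, b, a - b] | a b. True}"
    using defA_reindex[OF st plus, of "[1, 2, 0]" 3] by simp
  have "{[0 :: 'a]} = {w \<in> tuples 1. map (nth w) [0, 0, 0] \<in> {[a, b, a + b] | a b. True}}"
    by (auto simp: length_Suc_conv)
  then show "defA S B 1 {[0]}"
    using defA_reindex[OF st plus, of "[0, 0, 0]" 1] by simp
qed

datatype tm = V nat | C0 | C1 | Pl tm tm | Mi tm tm | Mu tm tm

fun tm_eval :: "tm \<Rightarrow> 'a::linordered_field list \<Rightarrow> 'a" where
  "tm_eval (V i) x = x ! i"
| "tm_eval C0 x = 0"
| "tm_eval C1 x = 1"
| "tm_eval (Pl s t) x = tm_eval s x + tm_eval t x"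
| "tm_eval (Mi s t) x = tm_eval s x - tm_eval t x"
| "tm_eval (Mu s t) x = tm_eval s x * tm_eval t x"

fun tm_ok :: "nat \<Rightarrow> tm \<Rightarrow> bool" where
  "tm_ok n (V i) = (i < n)"
| "tm_ok n (Pl s t) = (tm_ok n s \<and> tm_ok n t)"
| "tm_ok n (Mi s t) = (tm_ok n s \<and> tm_ok n t)"
| "tm_ok n (Mu s t) = (tm_ok n s \<and> tm_ok n t)"
| "tm_ok n _ = True"

lemma defA_tm_graph:
  fixes S :: "nat \<Rightarrow> 'a::linordered_field list set \<Rightarrow> bool"
  assumes fs: "field_structure S" and t: "tm_ok n t"
  shows "defA S B (Suc n) (fun_graph n (tm_eval t))"
  using t
proof (induction t)
  have st: "is_structure S" using fs by (rule field_structure_is_structure)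
  note binop = defA_fun_graph_binop[OF st] and const = defA_fun_graph_const[OF st]
  {
    case (V i)
    have "fun_graph n (tm_eval (V i) :: 'a list \<Rightarrow> 'a) = {w \<in> tuples (Suc n). w ! n = w ! i}"
      using V by (auto simp: fun_graph_def)
    moreover have "defA S B (Suc n) {w \<in> tuples (Suc n). w ! n = w ! i}"
      using defA_of_structure[OF structure_diag[OF st, of n "Suc n" i] st] V by simp
    ultimately show ?case by (simp only:)
  next
    case C0
    show ?case using const[OF defA_zero[OF fs]] by simp
  next
    case C1
    show ?case using const[OF defA_one[OF fs]] by simp
  next
    case (Pl s t)
    then show ?case using binop[OF defA_plus[OF fs]] by simp
  next
    case (Mi s t)
    then show ?case using binop[OF defA_minus[OF fs]] by simp
  next
    case (Mu s t)
    then show ?case using binop[OF defA_times[OF fs]] by simp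
  }
qed

definition fm_eq :: "nat \<Rightarrow> tm \<Rightarrow> tm \<Rightarrow> 'a::linordered_field fm" where
  "fm_eq n s t = Ex (Conj (At (fun_graph n (tm_eval s)) [0..<Suc n]) (At (fun_graph n (tm_eval t)) [0..<Suc n]))"

definition fm_less :: "nat \<Rightarrow> tm \<Rightarrow> tm \<Rightarrow> 'a::linordered_field fm" where
  "fm_less n s t = Ex (Ex (Conj (At (fun_graph n (tm_eval s)) ([0..<n] @ [n]))
     (Conj (At (fun_graph n (tm_eval t)) ([0..<n] @ [Suc n])) (At {[a, b] | a b. a < b} [n, Suc n]))))"

lemma sem_fm_eq [simp]: "length x = n \<Longrightarrow> sem (fm_eq n s t) x \<longleftrightarrow> tm_eval s x = tm_eval t x"
proof -
  assume l: "length x = n"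
  have "map (nth (x @ [a])) [0..<Suc n] = x @ [a]" for a
    using l by (simp add: map_nth_upt del: upt_Suc)
  then show ?thesis using l by (simp add: fm_eq_def del: upt_Suc)
qed

lemma sem_fm_less [simp]: "length x = n \<Longrightarrow> sem (fm_less n s t) x \<longleftrightarrow> tm_eval s x < tm_eval t x"
proof -
  assume l: "length x = n"
  have "map (nth ((x @ [a]) @ [b])) ([0..<n] @ [n]) = x @ [a]"
     "map (nth ((x @ [a]) @ [b])) ([0..<n] @ [Suc n]) = x @ [b]" for a b
    using l by (auto simp: nth_append)
  then show ?thesis using l by (simp add: fm_less_def nth_append)
qed

lemma fm_ok_cmp [simp]:
  assumes "field_structure S" "tm_ok n s" "tm_ok n t"
  shows "fm_ok S B n (fm_eq n s t)" "fm_ok S B n (fm_less n s t)"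
  using assms defA_tm_graph[OF assms(1)] defA_less[OF assms(1)]
  by (auto simp: fm_eq_def fm_less_def numeral_eq_Suc)

lemma fdef_gen: "is_structure SL \<Longrightarrow> fdef SL B n p D F \<Longrightarrow> fdef (gen SL P) B n p D F"
  by (simp add: fdef_def defA_gen)

lemma defA_graph_reindex:
  assumes st: "is_structure S" and G: "defA S B (Suc r) {w @ [f w] | w. w \<in> E}"
    and D: "defA S B n D" and vs: "length vs = r" "\<forall>v\<in>set vs. v < n"
    and DE: "\<forall>x\<in>D. map (nth x) vs \<in> E"
  shows "defA S B (Suc n) {x @ [f (map (nth x) vs)] | x. x \<in> D}"
proof -
  have E: "E \<subseteq> tuples r" using defA_subset[OF G] by auto
  let ?D' = "{w \<in> tuples (Suc n). map (nth w) [0..<n] \<in> D}"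
  let ?G' = "{w \<in> tuples (Suc n). map (nth w) (vs @ [n]) \<in> {w @ [f w] | w. w \<in> E}}"
  have "defA S B (Suc n) ?D'" by (rule defA_reindex[OF st D]) auto
  moreover have "defA S B (Suc n) ?G'" by (rule defA_reindex[OF st G]) (use vs in auto)
  ultimately have "defA S B (Suc n) (?D' \<inter> ?G')" by (rule defA_inter[OF st])
  moreover have "?D' \<inter> ?G' = {x @ [f (map (nth x) vs)] | x. x \<in> D}"
  proof (intro set_eqI iffI)
    fix w assume w: "w \<in> ?D' \<inter> ?G'"
    then have "length w = Suc n" by simp
    then obtain x c where x: "w = x @ [c]" "length x = n" by (metis length_Suc_conv_rev)
    have m: "map (nth (x @ [c])) vs = map (nth x) vs" using x vs by (auto simp: nth_append)
    show "w \<in> {x @ [f (map (nth x) vs)] | x. x \<in> D}" using w x E by (auto simp: m)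
  next
    fix w assume "w \<in> {x @ [f (map (nth x) vs)] | x. x \<in> D}"
    then obtain x where x: "w = x @ [f (map (nth x) vs)]" "x \<in> D" by blast
    moreover have m: "map (nth (x @ [c])) vs = map (nth x) vs" for c
      using x defA_subset[OF D] vs by (auto simp: nth_append)
    ultimately show "w \<in> ?D' \<inter> ?G'" using defA_subset[OF D] vs DE by (auto simp: m nth_append)
  qed
  ultimately show ?thesis by simp
qed

lemma defA_graph_nth:
  assumes st: "is_structure S" and D: "defA S B n D" and i: "i < n"
  shows "defA S B (Suc n) {x @ [x ! i] | x. x \<in> D}"
proof -
  let ?D' = "{w \<in> tuples (Suc n). map (nth w) [0..<n] \<in> D}"
  have "{x @ [x ! i] | x. x \<in> D} = ?D' \<inter> {w \<in> tuples (Suc n). w ! n = w ! i}"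
  proof (intro set_eqI iffI)
    fix w assume "w \<in> {x @ [x ! i] | x. x \<in> D}"
    then show "w \<in> ?D' \<inter> {w \<in> tuples (Suc n). w ! n = w ! i}"
      using defA_subset[OF D] i by (auto simp: nth_append)
  next
    fix w assume w: "w \<in> ?D' \<inter> {w \<in> tuples (Suc n). w ! n = w ! i}"
    then have "length w = Suc n" by simp
    then obtain x c where "w = x @ [c]" "length x = n" by (metis length_Suc_conv_rev)
    then show "w \<in> {x @ [x ! i] | x. x \<in> D}" using w i by (auto simp: nth_append)
  qed
  then show ?thesis
    using defA_inter[OF st defA_reindex[OF st D] defA_of_structure[OF structure_diag[OF st] st]] i
    by (simp add: map_nth_upt)
qed

lemma defA_graph_tuple:
  assumes st: "is_structure S" and D: "defA S B n D"
    and coords: "\<And>i. i < p \<Longrightarrow> defA S B (Suc n) {x @ [f i x] | x. x \<in> D}"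
  shows "defA S B (n + p) {x @ map (\<lambda>i. f i x) [0..<p] | x. x \<in> D}"
proof -
  let ?G = "\<lambda>i. {x @ [f i x] | x. x \<in> D}"
  let ?phi = "Conj (At D [0..<n]) (BigConj (map (\<lambda>i. At (?G i) ([0..<n] @ [n + i])) [0..<p]))"
  have "fm_ok S B (n + p) ?phi" using D coords by (auto intro!: fm_ok_BigConj[OF st])
  then have phi: "defA S B (n + p) {w \<in> tuples (n + p). sem ?phi w}" by (rule defA_fm[OF st])
  have G: "x @ [c] \<in> ?G i \<longleftrightarrow> x \<in> D \<and> c = f i x" if "length x = n" for x c i
    using that defA_subset[OF D] by auto
  have sem_phi: "sem ?phi (x @ y) \<longleftrightarrow> x \<in> D \<and> y = map (\<lambda>i. f i x) [0..<p]"
    if "length x = n" "length y = p" for x y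
  proof -
    have "map (nth (x @ y)) ([0..<n] @ [n + i]) = x @ [y ! i]" if "i < p" for i
      using \<open>length x = n\<close> by (simp add: nth_append)
    then have "sem ?phi (x @ y) \<longleftrightarrow> x \<in> D \<and> (\<forall>i<p. y ! i = f i x)"
      using that G by auto
    also have "\<dots> \<longleftrightarrow> x \<in> D \<and> y = map (\<lambda>i. f i x) [0..<p]"
      using that by (auto simp: list_eq_iff_nth_eq)
    finally show ?thesis .
  qed
  have "{w \<in> tuples (n + p). sem ?phi w} = {x @ map (\<lambda>i. f i x) [0..<p] | x. x \<in> D}"
  proof (intro set_eqI iffI)
    fix w assume w: "w \<in> {w \<in> tuples (n + p). sem ?phi w}"
    then have len: "length (take n w) = n" "length (drop n w) = p" by auto
    have "sem ?phi (take n w @ drop n w)" using w by simp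
    then have "take n w \<in> D \<and> drop n w = map (\<lambda>i. f i (take n w)) [0..<p]"
      using sem_phi[OF len] by blast
    then show "w \<in> {x @ map (\<lambda>i. f i x) [0..<p] | x. x \<in> D}"
      by (intro CollectI exI[of _ "take n w"]) (metis append_take_drop_id)
  next
    fix w assume "w \<in> {x @ map (\<lambda>i. f i x) [0..<p] | x. x \<in> D}"
    then obtain x where "w = x @ map (\<lambda>i. f i x) [0..<p]" "x \<in> D" by blast
    moreover have "length x = n" using \<open>x \<in> D\<close> defA_subset[OF D] by auto
    moreover have "sem ?phi (x @ map (\<lambda>i. f i x) [0..<p])"
      by (rule sem_phi[THEN iffD2]) (use calculation in auto)
    ultimately show "w \<in> {w \<in> tuples (n + p). sem ?phi w}" by simp
  qed
  then show ?thesis using phi by simp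
qed

lemma fdef_id:
  assumes st: "is_structure S" and D: "defA S B n D"
  shows "fdef S B n n D (\<lambda>x. x)"
proof -
  have "defA S B (n + n) {x @ map (\<lambda>i. x ! i) [0..<n] | x. x \<in> D}"
    by (rule defA_graph_tuple[OF st D defA_graph_nth[OF st D]])
  moreover have "map (\<lambda>i. x ! i) [0..<n] = x" if "x \<in> D" for x
    using that defA_subset[OF D] by (auto simp: map_nth_upt)
  then have "{x @ map (\<lambda>i. x ! i) [0..<n] | x. x \<in> D} = {x @ x | x. x \<in> D}"
    by (metis (no_types, lifting))
  ultimately show ?thesis using defA_subset[OF D] by (auto simp: fdef_def)
qed

lemma defA_graph_comp:
  assumes st: "is_structure S" and g: "fdef S B n p D g"
    and f: "defA S B (Suc p) {y @ [f y] | y. y \<in> E}" and DE: "\<forall>x\<in>D. g x \<in> E"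
  shows "defA S B (Suc n) {x @ [f (g x)] | x. x \<in> D}"
proof -
  let ?G = "{x @ g x | x. x \<in> D}" and ?F = "{y @ [f y] | y. y \<in> E}"
  let ?phi = "ExN p (Conj (At ?G ([0..<n] @ [Suc n..<Suc n + p])) (At ?F ([Suc n..<Suc n + p] @ [n])))"
  have D: "D \<subseteq> tuples n" and len: "\<forall>x\<in>D. length (g x) = p" using g by (auto simp: fdef_def)
  have E: "E \<subseteq> tuples p" using defA_subset[OF f] by auto
  have "fm_ok S B (Suc n) ?phi" using g f by (auto simp: fdef_def simp del: upt_Suc)
  then have phi: "defA S B (Suc n) {w \<in> tuples (Suc n). sem ?phi w}" by (rule defA_fm[OF st])
  have sem_phi: "sem ?phi (x @ [c]) \<longleftrightarrow> x \<in> D \<and> c = f (g x)" if x: "length x = n" for x c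
  proof -
    have "map (nth (x @ [c] @ y)) ([0..<n] @ [Suc n..<Suc n + p]) = x @ y"
      "map (nth (x @ [c] @ y)) ([Suc n..<Suc n + p] @ [n]) = y @ [c]" if "length y = p" for y
      using map_nth_append_upt_add[of "x @ [c]" "Suc n" y] x that
      by (simp_all add: nth_append del: upt_Suc map_nth_append_upt_add)
    then have "length y = p \<and> sem (Conj (At ?G ([0..<n] @ [Suc n..<Suc n + p]))
        (At ?F ([Suc n..<Suc n + p] @ [n]))) ((x @ [c]) @ y) \<longleftrightarrow> length y = p \<and> x @ y \<in> ?G \<and> y @ [c] \<in> ?F" for y
      by (cases "length y = p") (simp_all del: upt_Suc)
    then have "sem ?phi (x @ [c]) \<longleftrightarrow> (\<exists>y. length y = p \<and> x @ y \<in> ?G \<and> y @ [c] \<in> ?F)"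
      by (simp only: sem_ExN)
    also have "\<dots> \<longleftrightarrow> x \<in> D \<and> c = f (g x)"
    proof
      assume "\<exists>y. length y = p \<and> x @ y \<in> ?G \<and> y @ [c] \<in> ?F"
      then obtain y x' y' where y: "x @ y = x' @ g x'" "x' \<in> D" "y @ [c] = y' @ [f y']" by blast
      then have "length x' = n" using D by auto
      then have "x = x' \<and> y = g x'" using y(1) x by (simp add: append_eq_append_conv)
      then show "x \<in> D \<and> c = f (g x)" using y by simp
    next
      assume "x \<in> D \<and> c = f (g x)"
      then show "\<exists>y. length y = p \<and> x @ y \<in> ?G \<and> y @ [c] \<in> ?F"
        using DE len by (intro exI[of _ "g x"]) auto
    qed
    finally show ?thesis .
  qed
  have "{w \<in> tuples (Suc n). sem ?phi w} = {x @ [f (g x)] | x. x \<in> D}"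
  proof (intro set_eqI iffI)
    fix w assume w: "w \<in> {w \<in> tuples (Suc n). sem ?phi w}"
    then have "length w = Suc n" by simp
    then obtain x c where "w = x @ [c]" "length x = n" by (metis length_Suc_conv_rev)
    then show "w \<in> {x @ [f (g x)] | x. x \<in> D}" using w sem_phi by blast
  next
    fix w assume "w \<in> {x @ [f (g x)] | x. x \<in> D}"
    then obtain x where "w = x @ [f (g x)]" "x \<in> D" by blast
    then show "w \<in> {w \<in> tuples (Suc n). sem ?phi w}" using sem_phi D by auto
  qed
  then show ?thesis using phi by simp
qed

lemma defA_graph_map:
  assumes st: "is_structure S" and \<tau>: "defA S B 2 {[y, \<tau> y] | y. True}"
    and f: "defA S B (Suc m) {x @ [f x] | x. x \<in> tuples m}"
  shows "defA S B (Suc m) {x @ [f (map \<tau> x)] | x. x \<in> tuples m}"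
proof -
  have T: "defA S B m (tuples m)" by (rule defA_of_structure[OF structure_tuples[OF st] st])
  have "{[y, \<tau> y] | y. True} = {w @ [\<tau> (hd w)] | w. w \<in> tuples 1}"
    by (auto simp: length_Suc_conv)
  then have \<tau>1: "defA S B (Suc 1) {w @ [\<tau> (hd w)] | w. w \<in> tuples 1}"
    using \<tau> by (simp add: numeral_2_eq_2)
  have "defA S B (Suc m) {x @ [\<tau> (hd (map (nth x) [i]))] | x. x \<in> tuples m}" if "i < m" for i
    by (rule defA_graph_reindex[OF st \<tau>1 T]) (use that in auto)
  then have graph: "defA S B (m + m) {x @ map (\<lambda>i. \<tau> (x ! i)) [0..<m] | x. x \<in> tuples m}"
    by (intro defA_graph_tuple[OF st T]) simp
  have "map (\<lambda>i. \<tau> (x ! i)) [0..<m] = map \<tau> x" if "x \<in> tuples m" for x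
    using that by (auto intro: nth_equalityI)
  then have "{x @ map (\<lambda>i. \<tau> (x ! i)) [0..<m] | x. x \<in> tuples m} = {x @ map \<tau> x | x. x \<in> tuples m}"
    by (metis (no_types, lifting))
  then have "fdef S B m m (tuples m) (map \<tau>)" using graph by (simp add: fdef_def)
  then show ?thesis by (rule defA_graph_comp[OF st _ f]) simp
qed

lemma defA_image:
  assumes st: "is_structure S" and F: "fdef S B n p D F" and J: "defA S B n J" and JD: "J \<subseteq> D"
  shows "defA S B p (F ` J)"
proof -
  let ?G = "{x @ F x | x. x \<in> D}"
  let ?phi = "ExN n (Conj (At J [p..<p + n]) (At ?G ([p..<p + n] @ [0..<p])))"
  have "fm_ok S B p ?phi" using F J by (auto simp: fdef_def)
  then have phi: "defA S B p {w \<in> tuples p. sem ?phi w}" by (rule defA_fm[OF st])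
  have D: "D \<subseteq> tuples n" and len: "\<forall>x\<in>D. length (F x) = p" using F by (auto simp: fdef_def)
  have "sem ?phi w \<longleftrightarrow> w \<in> F ` J" if "length w = p" for w
  proof -
    have M: "map (nth (w @ x)) [p..<p + n] = x" if "length x = n" for x
      using \<open>length w = p\<close> that by (intro nth_equalityI) (auto simp: nth_append)
    have "length x = n \<and> sem (Conj (At J [p..<p + n]) (At ?G ([p..<p + n] @ [0..<p]))) (w @ x) \<longleftrightarrow>
        length x = n \<and> x \<in> J \<and> x @ w \<in> ?G" for x
      by (cases "length x = n") (simp_all add: M that)
    then have "sem ?phi w \<longleftrightarrow> (\<exists>x. length x = n \<and> x \<in> J \<and> x @ w \<in> ?G)"
      by (simp only: sem_ExN)
    also have "\<dots> \<longleftrightarrow> w \<in> F ` J"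
    proof
      assume "\<exists>x. length x = n \<and> x \<in> J \<and> x @ w \<in> ?G"
      then obtain x x' where x: "length x = n" "x \<in> J" "x @ w = x' @ F x'" "x' \<in> D" by blast
      then have "x = x' \<and> w = F x'" using D by (simp add: append_eq_append_conv subset_iff)
      then show "w \<in> F ` J" using x by blast
    next
      assume "w \<in> F ` J"
      then show "\<exists>x. length x = n \<and> x \<in> J \<and> x @ w \<in> ?G" using JD D by fastforce
    qed
    finally show ?thesis .
  qed
  moreover have "F ` J \<subseteq> tuples p" using len JD by auto
  ultimately have "{w \<in> tuples p. sem ?phi w} = F ` J" by auto
  then show ?thesis using phi by simp
qed

lemma edef_const:
  assumes st: "is_structure S" and c: "defA S B 1 {[c]}" and D: "defA S B n D"
  shows "edef S B n D (\<lambda>_. Fin c)"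
proof -
  have "defA S B (Suc 0) {w @ [c] | w. w \<in> {[]}}" using c by simp
  then have "defA S B (Suc n) {x @ [c] | x. x \<in> D}"
    using defA_graph_reindex[OF st _ D, of 0 "\<lambda>_. c" "{[]}" "[]"] by simp
  moreover have "{x @ [v] | x v. x \<in> D \<and> Fin c = Fin v} = {x @ [c] | x. x \<in> D}" by auto
  ultimately show ?thesis using D defA_empty[OF st] by (simp add: edef_def)
qed

section \<open>An order isomorphism onto the unit interval\<close>

definition psi :: "'a::linordered_field \<Rightarrow> 'a" where
  "psi y = (if 0 \<le> y then (1 + 2 * y) / (2 + 2 * y) else 1 / (2 - 2 * y))"

lemma psi_nonneg: "0 \<le> y \<Longrightarrow> psi y = 1 - 1 / (2 + 2 * y)"
proof -
  assume y: "0 \<le> y"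
  have "0 < 2 + 2 * y" using y by (simp add: add_pos_nonneg)
  then have "2 + 2 * y \<noteq> 0" by simp
  then show ?thesis using y by (simp add: psi_def field_simps)
qed

lemma psi_neg: "y < 0 \<Longrightarrow> psi y = 1 / (2 - 2 * y)"
  by (simp add: psi_def)

lemma psi_bounds: "0 < psi (y::'a::linordered_field)" "psi y < 1"
proof -
  show "0 < psi y"
  proof (cases "0 \<le> y")
    case True
    have "0 < 2 + 2 * y" using True by (simp add: add_pos_nonneg)
    moreover have "0 < 1 + 2 * y" using True by (simp add: add_pos_nonneg)
    ultimately show ?thesis using True by (simp add: psi_def)
  next
    case False
    have "0 < 2 - 2 * y" using False by simp
    then show ?thesis using False by (simp add: psi_def)
  qed
  show "psi y < 1"
  proof (cases "0 \<le> y")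
    case True
    have "0 < 2 + 2 * y" using True by (simp add: add_pos_nonneg)
    then show ?thesis using True by (simp add: psi_nonneg)
  next
    case False
    have "2 < 2 - 2 * y" using False by simp
    then have "1 / (2 - 2 * y) < 1 / 2" by (intro divide_strict_left_mono) auto
    then show ?thesis using False by (simp add: psi_def)
  qed
qed

lemma psi_half: "0 \<le> y \<Longrightarrow> 1/2 \<le> psi (y::'a::linordered_field)" "y < 0 \<Longrightarrow> psi y < 1/2"
proof -
  assume y: "0 \<le> y"
  have "2 \<le> 2 + 2 * y" using y by simp
  then have "1 / (2 + 2 * y) \<le> 1 / 2" by (intro divide_left_mono) auto
  then show "1/2 \<le> psi y" using y by (simp add: psi_nonneg)
next
  assume y: "y < 0"
  have "2 < 2 - 2 * y" using y by simp
  then have "1 / (2 - 2 * y) < 1 / 2" by (intro divide_strict_left_mono) auto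
  then show "psi y < 1/2" using y by (simp add: psi_def)
qed

lemma psi_mono: "y < z \<Longrightarrow> psi y < psi (z::'a::linordered_field)"
proof -
  assume yz: "y < z"
  show ?thesis
  proof (cases "0 \<le> y")
    case True
    then have z: "0 \<le> z" using yz by simp
    have "2 + 2 * y < 2 + 2 * z" using yz by simp
    moreover have "0 < 2 + 2 * y" using True by (simp add: add_pos_nonneg)
    ultimately have "1 / (2 + 2 * z) < 1 / (2 + 2 * y)" by (intro divide_strict_left_mono) auto
    then show ?thesis using True z by (simp add: psi_nonneg)
  next
    case False
    show ?thesis
    proof (cases "0 \<le> z")
      case True
      then show ?thesis using False psi_half[of y] psi_half[of z] by simp
    next
      case F2: False
      have "2 - 2 * z < 2 - 2 * y" using yz by simp
      moreover have "0 < 2 - 2 * z" using F2 by simp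
      ultimately have "1 / (2 - 2 * y) < 1 / (2 - 2 * z)" by (intro divide_strict_left_mono) auto
      then show ?thesis using False F2 by (simp add: psi_def)
    qed
  qed
qed

lemma psi_less_iff[simp]: "psi y < psi z \<longleftrightarrow> y < (z::'a::linordered_field)"
  by (metis linorder_neq_iff order_less_asym psi_mono)

lemma psi_surj: "0 < c \<Longrightarrow> c < 1 \<Longrightarrow> \<exists>y. psi y = (c::'a::linordered_field)"
proof -
  assume c: "0 < c" "c < 1"
  show ?thesis
  proof (cases "1/2 \<le> c")
    case True
    define y where "y = 1 / (2 * (1 - c)) - 1"
    have d: "0 < 2 * (1 - c)" "2 * (1 - c) \<le> 1" using c True by auto
    have "1 \<le> 1 / (2 * (1 - c))" using d by (simp add: le_divide_eq)
    then have y0: "0 \<le> y" by (simp add: y_def)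
    have "2 + 2 * y = 1 / (1 - c)" using d by (simp add: y_def field_simps)
    then have "psi y = c" using y0 c by (simp add: psi_nonneg)
    then show ?thesis by blast
  next
    case False
    define y where "y = 1 - 1 / (2 * c)"
    have "1 < 1 / (2 * c)" using c False by (simp add: less_divide_eq)
    then have y0: "y < 0" by (simp add: y_def)
    have "2 - 2 * y = 1 / c" using c by (simp add: y_def field_simps)
    then have "psi y = c" using y0 c by (simp add: psi_neg)
    then show ?thesis by blast
  qed
qed

lemma eless_irrefl[simp]: "\<not> eless a a"
  by (cases a) auto

lemma eless_trans: "eless a b \<Longrightarrow> eless b c \<Longrightarrow> eless a c"
  by (cases a; cases b; cases c) auto

lemma eless_total: "eless a b \<or> a = b \<or> eless b a"
  by (cases a; cases b) auto

definition psi_ext :: "'a::linordered_field ext \<Rightarrow> 'a" where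
  "psi_ext e = (case e of MInf \<Rightarrow> 0 | Fin y \<Rightarrow> psi y | PInf \<Rightarrow> 1)"

lemma psi_ext_simps[simp]: "psi_ext MInf = 0" "psi_ext PInf = 1" "psi_ext (Fin y) = psi y"
  by (simp_all add: psi_ext_def)

lemma psi_ext_mono: "eless a b \<Longrightarrow> psi_ext a < psi_ext b"
  by (cases a; cases b) (auto simp: psi_bounds)

lemma psi_ext_less_iff: "psi_ext a < psi_ext b \<longleftrightarrow> eless a b"
  by (metis eless_total order_less_asym order_less_irrefl psi_ext_mono)

lemma psi_ext_bounds: "0 \<le> psi_ext a" "psi_ext a \<le> 1"
  by (cases a; simp add: psi_bounds less_imp_le)+

lemma eivl_iff: "y \<in> eivl l u \<longleftrightarrow> eless l (Fin y) \<and> eless (Fin y) u"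
  by (simp add: eivl_def)

lemma eivl_Fin: "eivl (Fin a) (Fin b) = {a<..<b}"
  by (auto simp: eivl_iff)

lemma eivl_iff_psi: "y \<in> eivl l u \<longleftrightarrow> psi_ext l < psi y \<and> psi y < psi_ext u"
  by (simp add: eivl_iff psi_ext_less_iff[symmetric])

lemma psi_surj_eivl:
  assumes "psi_ext l < c" "c < psi_ext u"
  shows "\<exists>y\<in>eivl l u. psi y = c"
proof -
  have "0 < c" "c < 1" using assms psi_ext_bounds[of l] psi_ext_bounds[of u] by auto
  then obtain y where "psi y = c" using psi_surj by blast
  then show ?thesis using assms by (auto simp: eivl_iff_psi)
qed

lemma psi_ext_above:
  assumes "0 \<le> c" "c < psi_ext e"
  shows "\<exists>d. c < psi d \<and> eless (Fin d) (e :: 'a::linordered_field ext)"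
proof -
  obtain c' where c': "c < c'" "c' < psi_ext e" using assms(2) dense by blast
  then obtain d where "d \<in> eivl MInf e" "psi d = c'" using psi_surj_eivl[of MInf c' e] assms(1) by auto
  then show ?thesis using c' by (auto simp: eivl_iff)
qed

lemma psi_ext_below:
  assumes "c \<le> 1" "psi_ext e < c"
  shows "\<exists>d. psi d < c \<and> eless (e :: 'a::linordered_field ext) (Fin d)"
proof -
  obtain c' where c': "psi_ext e < c'" "c' < c" using assms(2) dense by blast
  then obtain d where "d \<in> eivl e PInf" "psi d = c'" using psi_surj_eivl[of e c' PInf] assms(1) by auto
  then show ?thesis using c' by (auto simp: eivl_iff)
qed

lemma eivl_nonempty: "eless l u \<Longrightarrow> \<exists>y. y \<in> eivl l (u::'a::linordered_field ext)"
proof -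
  assume "eless l u"
  then have "psi_ext l < psi_ext u" by (simp add: psi_ext_less_iff)
  then obtain c where "psi_ext l < c" "c < psi_ext u" using dense by blast
  then show ?thesis using psi_surj_eivl by blast
qed

lemma eivl_two_points: "eless l u \<Longrightarrow> \<exists>y z. y \<in> eivl l u \<and> z \<in> eivl l u \<and> y < (z::'a::linordered_field)"
proof -
  assume "eless l u"
  then have "psi_ext l < psi_ext u" by (simp add: psi_ext_less_iff)
  then obtain c where c: "psi_ext l < c" "c < psi_ext u" using dense by blast
  then obtain d where d: "c < d" "d < psi_ext u" using dense by blast
  obtain y where y: "y \<in> eivl l u" "psi y = c" using psi_surj_eivl c by blast
  have "psi_ext l < d" using c d by simp
  then obtain z where z: "z \<in> eivl l u" "psi z = d" using psi_surj_eivl d by blast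
  have "y < z" using y z d by (metis psi_less_iff)
  then show ?thesis using y z by blast
qed

lemma eivl_below: "y \<in> eivl l u \<Longrightarrow> \<exists>y'\<in>eivl l u. y' < (y::'a::linordered_field)"
proof -
  assume y: "y \<in> eivl l u"
  then have "psi_ext l < psi y" by (simp add: eivl_iff_psi)
  then obtain c where c: "psi_ext l < c" "c < psi y" using dense by blast
  then obtain y' where "y' \<in> eivl l u" "psi y' = c" using psi_surj_eivl[of l c u] y
    by (meson order.strict_trans eivl_iff_psi)
  then show ?thesis using c by (metis psi_less_iff)
qed

lemma eivl_above: "y \<in> eivl l u \<Longrightarrow> \<exists>y'\<in>eivl l u. y < (y'::'a::linordered_field)"
proof -
  assume y: "y \<in> eivl l u"
  then have "psi y < psi_ext u" by (simp add: eivl_iff_psi)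
  then obtain c where c: "psi y < c" "c < psi_ext u" using dense by blast
  then obtain y' where "y' \<in> eivl l u" "psi y' = c" using psi_surj_eivl[of l c u] y
    by (meson order.strict_trans eivl_iff_psi)
  then show ?thesis using c by (metis psi_less_iff)
qed

lemma eless_Fin_dense_right: "eless (Fin y) e \<Longrightarrow> \<exists>c. y < c \<and> eless (Fin c) (e::'a::linordered_field ext)"
proof -
  assume a: "eless (Fin y) e"
  then have "psi_ext (Fin y) < psi_ext e" by (rule psi_ext_mono)
  then obtain d where "psi_ext (Fin y) < d" "d < psi_ext e" using dense by blast
  then obtain c where "c \<in> eivl (Fin y) e" using psi_surj_eivl by blast
  then show ?thesis by (auto simp: eivl_iff)
qed

lemma eless_Fin_dense_left: "eless e (Fin y) \<Longrightarrow> \<exists>c. c < y \<and> eless (e::'a::linordered_field ext) (Fin c)"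
proof -
  assume a: "eless e (Fin y)"
  then have "psi_ext e < psi_ext (Fin y)" by (rule psi_ext_mono)
  then obtain d where "psi_ext e < d" "d < psi_ext (Fin y)" using dense by blast
  then obtain c where "c \<in> eivl e (Fin y)" using psi_surj_eivl by blast
  then show ?thesis by (auto simp: eivl_iff)
qed

lemma eivl_subset_eivl:
  fixes e1 e2 :: "'a::linordered_field ext"
  assumes bounds: "\<And>y. y \<in> eivl l u \<Longrightarrow> \<not> eless (Fin y) e1 \<and> \<not> eless e2 (Fin y)"
  shows "eivl l u \<subseteq> eivl e1 e2"
proof
  fix y assume y: "y \<in> eivl l u"
  obtain y1 where y1: "y1 \<in> eivl l u" "y1 < y" using eivl_below[OF y] by blast
  obtain y2 where y2: "y2 \<in> eivl l u" "y < y2" using eivl_above[OF y] by blast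
  have "eless e1 (Fin y)"
    using bounds[OF y1(1)] eless_total[of e1 "Fin y1"] y1(2) eless_trans[of e1 "Fin y1" "Fin y"] by auto
  moreover have "eless (Fin y) e2"
    using bounds[OF y2(1)] eless_total[of e2 "Fin y2"] y2(2) eless_trans[of "Fin y" "Fin y2" e2] by auto
  ultimately show "y \<in> eivl e1 e2" by (simp add: eivl_iff)
qed

definition psi_graph :: "'a::linordered_field list set" where "psi_graph = {[y, psi y] | y. True}"

lemma psi_graph_iff[simp]: "[y, p] \<in> psi_graph \<longleftrightarrow> p = psi y"
  by (auto simp: psi_graph_def)

lemma eq_psi_iff: "p = psi y \<longleftrightarrow>
   (0 \<le> y \<and> p * (2 + 2 * y) = 1 + 2 * y) \<or> (y < 0 \<and> p * (2 - 2 * y) = (1::'a::linordered_field))"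
proof (cases "0 \<le> y")
  case True
  have "0 < 2 + 2 * y" using True by (simp add: add_pos_nonneg)
  then show ?thesis using True by (auto simp: psi_def field_simps)
next
  case False
  have "0 < 2 - 2 * y" using False by simp
  then show ?thesis using False by (auto simp: psi_def field_simps)
qed

lemma defA_psi_graph:
  assumes fs: "field_structure S"
  shows "defA S B 2 (psi_graph :: 'a::linordered_field list set)"
proof -
  let ?two = "Pl C1 C1"
  let ?f = "Disj (Conj (Neg (fm_less 2 (V 0) C0)) (fm_eq 2 (Mu (V 1) (Pl ?two (Mu ?two (V 0)))) (Pl C1 (Mu ?two (V 0)))))
              (Conj (fm_less 2 (V 0) C0) (fm_eq 2 (Mu (V 1) (Mi ?two (Mu ?two (V 0)))) C1)) :: 'a fm"
  have "fm_ok S B 2 ?f" using fm_ok_cmp[OF fs] by simp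
  then have d: "defA S B 2 {x \<in> tuples 2. sem ?f x}" by (rule defA_fm[OF field_structure_is_structure[OF fs]])
  have "{x \<in> tuples 2. sem ?f x} = psi_graph"
  proof (rule set_eqI)
    fix x :: "'a list"
    show "x \<in> {x \<in> tuples 2. sem ?f x} \<longleftrightarrow> x \<in> psi_graph"
    proof (cases "length x = 2")
      case True
      then obtain y p where x: "x = [y, p]"
        by (metis (no_types, opaque_lifting) One_nat_def Suc_1 length_0_conv length_Suc_conv)
      show ?thesis using x eq_psi_iff[of p y] by (simp add: algebra_simps not_less)
    next
      case False
      then show ?thesis by (auto simp: psi_graph_def)
    qed
  qed
  then show ?thesis using d by simp
qed

lemma defA_graph_inf_psi:
  fixes l :: "'a::linordered_field list \<Rightarrow> 'a"
  assumes fs: "field_structure S" and D: "defA S B n D" and X: "defA S B (Suc n) X"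
    and below: "\<And>x y. x \<in> D \<Longrightarrow> x @ [y] \<in> X \<Longrightarrow> l x < psi y"
    and approx: "\<And>x c. x \<in> D \<Longrightarrow> l x < c \<Longrightarrow> \<exists>y. x @ [y] \<in> X \<and> psi y < c"
  shows "defA S B (Suc n) {x @ [l x] | x. x \<in> D}"
proof -
  have st: "is_structure S" using fs by (rule field_structure_is_structure)
  let ?phi = "Conj (At D [0..<n])
     (Conj (All (Imp (At X ([0..<n] @ [Suc n]))
                     (Ex (Conj (At psi_graph [Suc n, Suc (Suc n)]) (fm_less (Suc (Suc (Suc n))) (V n) (V (Suc (Suc n))))))))
           (All (Imp (fm_less (Suc (Suc n)) (V n) (V (Suc n)))
                     (Ex (Conj (At X ([0..<n] @ [Suc (Suc n)]))
                               (Ex (Conj (At psi_graph [Suc (Suc n), Suc (Suc (Suc n))])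
                                         (fm_less (Suc (Suc (Suc (Suc n)))) (V (Suc (Suc (Suc n)))) (V (Suc n))))))))))"
  have "fm_ok S B (Suc n) ?phi"
    using D X defA_psi_graph[OF fs] fm_ok_cmp[OF fs] by (simp add: numeral_2_eq_2)
  then have phi: "defA S B (Suc n) {w \<in> tuples (Suc n). sem ?phi w}" by (rule defA_fm[OF st])
  have glb: "(\<forall>y. x @ [y] \<in> X \<longrightarrow> c < psi y) \<and> (\<forall>c'. c < c' \<longrightarrow> (\<exists>y. x @ [y] \<in> X \<and> psi y < c'))
      \<longleftrightarrow> c = l x" if "x \<in> D" for x c
  proof (intro iffI)
    assume c: "(\<forall>y. x @ [y] \<in> X \<longrightarrow> c < psi y) \<and> (\<forall>c'. c < c' \<longrightarrow> (\<exists>y. x @ [y] \<in> X \<and> psi y < c'))"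
    show "c = l x"
    proof (rule ccontr)
      assume "c \<noteq> l x"
      then consider "c < l x" | "l x < c" by linarith
      then show False
        by cases (use c below[OF that] approx[OF that] in \<open>fastforce+\<close>)
    qed
  qed (use below[OF that] approx[OF that] in auto)
  have sem_phi: "sem ?phi (x @ [c]) \<longleftrightarrow> x \<in> D \<and> c = l x" if "length x = n" for x c
    using that glb[of x c] by (auto simp: nth_append)
  have "{w \<in> tuples (Suc n). sem ?phi w} = {x @ [l x] | x. x \<in> D}"
  proof (intro set_eqI iffI)
    fix w assume w: "w \<in> {w \<in> tuples (Suc n). sem ?phi w}"
    then have "length w = Suc n" by simp
    then obtain x c where "w = x @ [c]" "length x = n" by (metis length_Suc_conv_rev)
    then show "w \<in> {x @ [l x] | x. x \<in> D}" using w sem_phi by blast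
  next
    fix w assume "w \<in> {x @ [l x] | x. x \<in> D}"
    then obtain x where x: "w = x @ [l x]" "x \<in> D" by blast
    moreover have "length x = n" using x defA_subset[OF D] by auto
    moreover have "sem ?phi (x @ [l x])" using sem_phi[OF calculation(3)] x(2) by blast
    ultimately show "w \<in> {w \<in> tuples (Suc n). sem ?phi w}" by simp
  qed
  then show ?thesis using phi by simp
qed

lemma defA_graph_sup_psi:
  fixes h :: "'a::linordered_field list \<Rightarrow> 'a"
  assumes fs: "field_structure S" and D: "defA S B n D" and X: "defA S B (Suc n) X"
    and above: "\<And>x y. x \<in> D \<Longrightarrow> x @ [y] \<in> X \<Longrightarrow> psi y < h x"
    and approx: "\<And>x c. x \<in> D \<Longrightarrow> c < h x \<Longrightarrow> \<exists>y. x @ [y] \<in> X \<and> c < psi y"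
  shows "defA S B (Suc n) {x @ [h x] | x. x \<in> D}"
proof -
  have st: "is_structure S" using fs by (rule field_structure_is_structure)
  let ?phi = "Conj (At D [0..<n])
     (Conj (All (Imp (At X ([0..<n] @ [Suc n]))
                     (Ex (Conj (At psi_graph [Suc n, Suc (Suc n)]) (fm_less (Suc (Suc (Suc n))) (V (Suc (Suc n))) (V n))))))
           (All (Imp (fm_less (Suc (Suc n)) (V (Suc n)) (V n))
                     (Ex (Conj (At X ([0..<n] @ [Suc (Suc n)]))
                               (Ex (Conj (At psi_graph [Suc (Suc n), Suc (Suc (Suc n))])
                                         (fm_less (Suc (Suc (Suc (Suc n)))) (V (Suc n)) (V (Suc (Suc (Suc n))))))))))))"
  have "fm_ok S B (Suc n) ?phi"
    using D X defA_psi_graph[OF fs] fm_ok_cmp[OF fs] by (simp add: numeral_2_eq_2)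
  then have phi: "defA S B (Suc n) {w \<in> tuples (Suc n). sem ?phi w}" by (rule defA_fm[OF st])
  have lub: "(\<forall>y. x @ [y] \<in> X \<longrightarrow> psi y < c) \<and> (\<forall>c'. c' < c \<longrightarrow> (\<exists>y. x @ [y] \<in> X \<and> c' < psi y))
      \<longleftrightarrow> c = h x" if "x \<in> D" for x c
  proof (intro iffI)
    assume c: "(\<forall>y. x @ [y] \<in> X \<longrightarrow> psi y < c) \<and> (\<forall>c'. c' < c \<longrightarrow> (\<exists>y. x @ [y] \<in> X \<and> c' < psi y))"
    show "c = h x"
    proof (rule ccontr)
      assume "c \<noteq> h x"
      then consider "h x < c" | "c < h x" by linarith
      then show False
        by cases (use c above[OF that] approx[OF that] in \<open>fastforce+\<close>)
    qed
  qed (use above[OF that] approx[OF that] in auto)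
  have sem_phi: "sem ?phi (x @ [c]) \<longleftrightarrow> x \<in> D \<and> c = h x" if "length x = n" for x c
    using that lub[of x c] by (auto simp: nth_append)
  have "{w \<in> tuples (Suc n). sem ?phi w} = {x @ [h x] | x. x \<in> D}"
  proof (intro set_eqI iffI)
    fix w assume w: "w \<in> {w \<in> tuples (Suc n). sem ?phi w}"
    then have "length w = Suc n" by simp
    then obtain x c where "w = x @ [c]" "length x = n" by (metis length_Suc_conv_rev)
    then show "w \<in> {x @ [h x] | x. x \<in> D}" using w sem_phi by blast
  next
    fix w assume "w \<in> {x @ [h x] | x. x \<in> D}"
    then obtain x where x: "w = x @ [h x]" "x \<in> D" by blast
    moreover have "length x = n" using x defA_subset[OF D] by auto
    moreover have "sem ?phi (x @ [h x])" using sem_phi[OF calculation(3)] x(2) by blast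
    ultimately show "w \<in> {w \<in> tuples (Suc n). sem ?phi w}" by simp
  qed
  then show ?thesis using phi by simp
qed

section \<open>Boxes, neighbourhoods and continuity\<close>

lemma box_mem: "y \<in> box lo hi \<longleftrightarrow> length y = length lo \<and> length hi = length lo \<and>
   (\<forall>i<length lo. lo ! i < y ! i \<and> y ! i < hi ! i)"
  by (simp add: box_def)

lemma box_around: "x \<in> box (map (\<lambda>v. v - 1) x) (map (\<lambda>v. v + (1::'a::linordered_field)) x)"
  by (auto simp: box_mem)

definition lmax :: "'a::linorder list \<Rightarrow> 'a list \<Rightarrow> 'a list" where
  "lmax xs ys = map (\<lambda>(a, b). max a b) (zip xs ys)"

definition lmin :: "'a::linorder list \<Rightarrow> 'a list \<Rightarrow> 'a list" where
  "lmin xs ys = map (\<lambda>(a, b). min a b) (zip xs ys)"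

lemma box_inter:
  assumes "x \<in> box lo1 hi1" "x \<in> box lo2 hi2"
  shows "x \<in> box (lmax lo1 lo2) (lmin hi1 hi2)" "box (lmax lo1 lo2) (lmin hi1 hi2) \<subseteq> box lo1 hi1 \<inter> box lo2 hi2"
  using assms by (auto simp: box_mem lmax_def lmin_def)

lemma box_snoc:
  assumes "length lo = length x" "length hi = length x"
  shows "x @ [v] \<in> box (lo @ [l]) (hi @ [h]) \<longleftrightarrow> x \<in> box lo hi \<and> l < v \<and> v < h"
proof -
  have "(\<forall>i<Suc (length x). (lo @ [l]) ! i < (x @ [v]) ! i \<and> (x @ [v]) ! i < (hi @ [h]) ! i)
     \<longleftrightarrow> (\<forall>i<length x. lo ! i < x ! i \<and> x ! i < hi ! i) \<and> l < v \<and> v < h"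
    using assms by (auto simp: nth_append less_Suc_eq)
  then show ?thesis using assms by (simp add: box_mem)
qed

definition near :: "'a::linorder list set \<Rightarrow> 'a list \<Rightarrow> ('a list \<Rightarrow> bool) \<Rightarrow> bool" where
  "near D x P \<longleftrightarrow> (\<exists>lo hi. x \<in> box lo hi \<and> (\<forall>y\<in>D \<inter> box lo hi. P y))"

lemma near_trivial: "(\<forall>y\<in>D. P y) \<Longrightarrow> near D x (P::'a::linordered_field list \<Rightarrow> bool)"
  unfolding near_def using box_around by blast

lemma near_conj: "near D x P \<Longrightarrow> near D x Q \<Longrightarrow> near D x (\<lambda>y. P y \<and> Q y)"
  unfolding near_def
proof (elim exE conjE)
  fix lo1 hi1 lo2 hi2
  assume a: "x \<in> box lo1 hi1" "\<forall>y\<in>D \<inter> box lo1 hi1. P y" "x \<in> box lo2 hi2" "\<forall>y\<in>D \<inter> box lo2 hi2. Q y"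
  show "\<exists>lo hi. x \<in> box lo hi \<and> (\<forall>y\<in>D \<inter> box lo hi. P y \<and> Q y)"
    using box_inter[OF a(1) a(3)] a(2,4) by blast
qed

lemma near_mono: "near D x P \<Longrightarrow> (\<And>y. y \<in> D \<Longrightarrow> P y \<Longrightarrow> Q y) \<Longrightarrow> near D x Q"
  unfolding near_def by blast

lemma near_all:
  fixes x :: "'a::linordered_field list" and N :: nat
  shows "(\<And>i. i < N \<Longrightarrow> near D x (P i)) \<Longrightarrow> near D x (\<lambda>y. \<forall>i<N. P i y :: bool)"
proof (induction N)
  case 0
  then show ?case by (simp add: near_trivial)
next
  case (Suc N)
  have "near D x (\<lambda>y. (\<forall>i<N. P i y) \<and> P N y)" using Suc by (intro near_conj) auto
  then show ?case by (rule near_mono) (auto simp: less_Suc_eq)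
qed

lemma box_append_take:
  fixes x :: "'a::linordered_field list"
  assumes b: "g @ take r x \<in> box lo hi" and r: "r \<le> length x"
  obtains lo' hi' where "x \<in> box lo' hi'" "\<And>y. y \<in> box lo' hi' \<Longrightarrow> g @ take r y \<in> box lo hi"
proof -
  let ?m = "length g"
  define lo' where "lo' = drop ?m lo @ map (\<lambda>v. v - 1) (drop r x)"
  define hi' where "hi' = drop ?m hi @ map (\<lambda>v. v + 1) (drop r x)"
  have ll: "length lo = ?m + r" "length hi = ?m + r" using b r by (auto simp: box_mem)
  have bx: "lo ! i < (g @ take r x) ! i \<and> (g @ take r x) ! i < hi ! i" if "i < ?m + r" for i
    using b that ll unfolding box_mem by auto
  have g: "lo ! i < g ! i \<and> g ! i < hi ! i" if "i < ?m" for i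
    using bx[of i] that by (simp add: nth_append)
  have x: "lo ! (?m + i) < x ! i \<and> x ! i < hi ! (?m + i)" if "i < r" for i
    using bx[of "?m + i"] that by (simp add: nth_append)
  have "x \<in> box lo' hi'"
    using x ll r by (auto simp: box_mem lo'_def hi'_def nth_append)
  moreover have "g @ take r y \<in> box lo hi" if y: "y \<in> box lo' hi'" for y
  proof -
    have len: "length lo' = length x" "length hi' = length x" using ll r by (auto simp: lo'_def hi'_def)
    then have ly: "length y = length x" using y by (simp add: box_mem)
    have by': "lo' ! i < y ! i \<and> y ! i < hi' ! i" if "i < length x" for i
      using y that len unfolding box_mem by auto
    have "lo' ! i = lo ! (?m + i)" "hi' ! i = hi ! (?m + i)" if "i < r" for i
      using that ll by (simp_all add: lo'_def hi'_def nth_append)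
    then have "lo ! i < y ! (i - ?m) \<and> y ! (i - ?m) < hi ! i" if "?m \<le> i" "i < ?m + r" for i
      using by'[of "i - ?m"] that r by simp
    then show ?thesis using g ll ly r by (auto simp: box_mem nth_append)
  qed
  ultimately show thesis using that by blast
qed

lemma near_take:
  fixes x :: "'a::linordered_field list"
  assumes x: "x \<in> E" and E: "E \<subseteq> tuples n" and r: "r \<le> n"
    and ED: "\<forall>y\<in>E. g @ take r y \<in> D" and N: "near D (g @ take r x) P"
  shows "near E x (\<lambda>y. P (g @ take r y))"
proof -
  obtain lo hi where lh: "g @ take r x \<in> box lo hi" "\<forall>y\<in>D \<inter> box lo hi. P y"
    using N unfolding near_def by blast
  have "r \<le> length x" using x E r by auto
  then obtain lo' hi' where "x \<in> box lo' hi'" "\<And>y. y \<in> box lo' hi' \<Longrightarrow> g @ take r y \<in> box lo hi"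
    using box_append_take[OF lh(1)] by blast
  then show ?thesis unfolding near_def using lh(2) ED by blast
qed

definition fcont_on :: "'a::linorder list set \<Rightarrow> ('a list \<Rightarrow> 'a) \<Rightarrow> bool" where
  "fcont_on D f \<longleftrightarrow> econt_on D (\<lambda>x. Fin (f x))"

lemma econt_iff: "econt_on D h \<longleftrightarrow> (\<forall>x\<in>D. \<forall>c.
     (eless (Fin c) (h x) \<longrightarrow> near D x (\<lambda>y. eless (Fin c) (h y))) \<and>
     (eless (h x) (Fin c) \<longrightarrow> near D x (\<lambda>y. eless (h y) (Fin c))))"
  unfolding econt_on_def near_def by blast

lemma fcont_on_iff: "fcont_on D f \<longleftrightarrow> (\<forall>x\<in>D. \<forall>c.
     (c < f x \<longrightarrow> near D x (\<lambda>y. c < f y)) \<and> (f x < c \<longrightarrow> near D x (\<lambda>y. f y < c)))"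
  unfolding fcont_on_def econt_iff by simp

lemma econt_const: "econt_on D (\<lambda>x. e :: 'a::linordered_field ext)"
  unfolding econt_iff by (auto intro: near_trivial)

lemma fcont_on_nth:
  assumes "D \<subseteq> tuples n" "i < n"
  shows "fcont_on D (\<lambda>x. x ! i :: 'a::linordered_field)"
  unfolding fcont_on_iff
proof (intro ballI allI conjI impI)
  fix x c assume x: "x \<in> D"
  have lx: "length x = n" using x assms by auto
  {
    assume c: "c < x ! i"
    let ?lo = "(map (\<lambda>v. v - 1) x)[i := c]" and ?hi = "map (\<lambda>v. v + 1) x"
    have "x \<in> box ?lo ?hi" using c lx assms(2) by (auto simp: box_mem nth_list_update)
    moreover have "\<forall>y\<in>D \<inter> box ?lo ?hi. c < y ! i" using lx assms(2)
      by (auto simp: box_mem) (metis nth_list_update_eq length_map)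
    ultimately show "near D x (\<lambda>y. c < y ! i)" unfolding near_def by blast
  next
    assume c: "x ! i < c"
    let ?lo = "map (\<lambda>v. v - 1) x" and ?hi = "(map (\<lambda>v. v + 1) x)[i := c]"
    have "x \<in> box ?lo ?hi" using c lx assms(2) by (auto simp: box_mem nth_list_update)
    moreover have "\<forall>y\<in>D \<inter> box ?lo ?hi. y ! i < c" using lx assms(2)
      by (auto simp: box_mem) (metis nth_list_update_eq length_map)
    ultimately show "near D x (\<lambda>y. y ! i < c)" unfolding near_def by blast
  }
qed

lemma fcont_on_psi_ext:
  assumes h: "econt_on D h"
  shows "fcont_on D (\<lambda>x. psi_ext (h x) :: 'a::linordered_field)"
  unfolding fcont_on_iff
proof (intro ballI allI conjI impI)
  fix x c assume x: "x \<in> D"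
  note near_h = h[unfolded econt_iff, rule_format, OF x]
  show "near D x (\<lambda>y. c < psi_ext (h y))" if c: "c < psi_ext (h x)"
  proof (cases "c < 0")
    case True
    then show ?thesis using psi_ext_bounds by (intro near_trivial) (auto intro: less_le_trans)
  next
    case False
    then obtain d where d: "c < psi d" "eless (Fin d) (h x)" using psi_ext_above[OF _ c] by fastforce
    then have "near D x (\<lambda>y. eless (Fin d) (h y))" using near_h by blast
    then show ?thesis by (rule near_mono) (use d psi_ext_mono[of "Fin d"] in force)
  qed
  show "near D x (\<lambda>y. psi_ext (h y) < c)" if c: "psi_ext (h x) < c"
  proof (cases "1 < c")
    case True
    then show ?thesis using psi_ext_bounds by (intro near_trivial) (auto intro: le_less_trans)
  next
    case False
    then obtain d where d: "psi d < c" "eless (h x) (Fin d)" using psi_ext_below[OF _ c] by fastforce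
    then have "near D x (\<lambda>y. eless (h y) (Fin d))" using near_h by blast
    then show ?thesis by (rule near_mono) (use d psi_ext_mono[of _ "Fin d"] in force)
  qed
qed

lemma fcont_on_psi: "fcont_on D f \<Longrightarrow> fcont_on D (\<lambda>x. psi (f x) :: 'a::linordered_field)"
  using fcont_on_psi_ext[of D "\<lambda>x. Fin (f x)"] unfolding fcont_on_def by simp

lemma fcont_on_near:
  assumes "fcont_on D f" "x \<in> D" "0 < (d::'a::linordered_field)"
  shows "near D x (\<lambda>y. f x - d < f y \<and> f y < f x + d)"
proof -
  have "near D x (\<lambda>y. f x - d < f y)" using assms unfolding fcont_on_iff by auto
  moreover have "near D x (\<lambda>y. f y < f x + d)" using assms unfolding fcont_on_iff by auto
  ultimately show ?thesis by (rule near_conj)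
qed

lemma ratio_above_stable:
  fixes a p b c d a' p' b' :: "'a::linordered_field"
  assumes "0 < c" "c * (b - a) < p - a" "d = ((p - a) - c * (b - a)) / (2 * (1 + c))"
    "a - d < a'" "a' < a + d" "p - d < p'" "b' < b + d" "a' < p'" "p' < b'"
  shows "c < (p' - a') / (b' - a')"
proof -
  have e: "2 * d * (1 + c) = (p - a) - c * (b - a)" using assms(1,3) by (simp add: field_simps)
  have h1: "b' - a' < (b - a) + 2 * d" using assms(4,7) by simp
  have "c * (b' - a') < c * ((b - a) + 2 * d)" using mult_strict_left_mono[OF h1 assms(1)] .
  also have "\<dots> = (p - a) - 2 * d" using e by (simp add: algebra_simps)
  also have "\<dots> < p' - a'" using assms(5,6) by simp
  finally have "c * (b' - a') < p' - a'" .
  then show ?thesis using assms(8,9) by (simp add: less_divide_eq mult.commute)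
qed

lemma ratio_below_stable:
  fixes a p b c d a' p' b' :: "'a::linordered_field"
  assumes "0 < c" "p - a < c * (b - a)" "d = (c * (b - a) - (p - a)) / (2 * (1 + c))"
    "a - d < a'" "a' < a + d" "p' < p + d" "b - d < b'" "a' < p'" "p' < b'"
  shows "(p' - a') / (b' - a') < c"
proof -
  have e: "2 * d * (1 + c) = c * (b - a) - (p - a)" using assms(1,3) by (simp add: field_simps)
  have "p' - a' < (p - a) + 2 * d" using assms(4,6) by simp
  also have "\<dots> = c * ((b - a) - 2 * d)" using e by (simp add: algebra_simps)
  also have "\<dots> < c * (b' - a')"
  proof -
    have h1: "(b - a) - 2 * d < b' - a'" using assms(5,7) by simp
    show ?thesis using mult_strict_left_mono[OF h1 assms(1)] .
  qed
  finally have "p' - a' < c * (b' - a')" .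
  then show ?thesis using assms(8,9) by (simp add: divide_less_eq mult.commute)
qed

lemma fcont_on_ratio:
  fixes p a b :: "'a::linordered_field list \<Rightarrow> 'a"
  assumes cp: "fcont_on D p" and ca: "fcont_on D a" and cb: "fcont_on D b"
    and ord: "\<forall>x\<in>D. a x < p x \<and> p x < b x"
  shows "fcont_on D (\<lambda>x. (p x - a x) / (b x - a x))"
  unfolding fcont_on_iff
proof (intro ballI allI conjI impI)
  fix x c assume x: "x \<in> D"
  have q01: "0 < (p y - a y) / (b y - a y)" "(p y - a y) / (b y - a y) < 1" if "y \<in> D" for y
    using ord that by (auto simp: divide_less_eq)
  {
    assume c: "c < (p x - a x) / (b x - a x)"
    show "near D x (\<lambda>y. c < (p y - a y) / (b y - a y))"
    proof (cases "c \<le> 0")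
      case True
      then show ?thesis using q01 by (intro near_trivial) (auto intro: le_less_trans)
    next
      case False
      have bx: "0 < b x - a x" using ord x by auto
      have cc: "c * (b x - a x) < p x - a x" using c bx by (simp add: less_divide_eq)
      define d where "d = ((p x - a x) - c * (b x - a x)) / (2 * (1 + c))"
      have d: "0 < d" using cc False by (simp add: d_def)
      have "near D x (\<lambda>y. (a x - d < a y \<and> a y < a x + d) \<and> (p x - d < p y \<and> p y < p x + d)
                   \<and> (b x - d < b y \<and> b y < b x + d))"
        by (intro near_conj fcont_on_near[OF _ x d] ca cp cb)
      then show ?thesis
        by (rule near_mono) (use ord False cc in \<open>auto intro!: ratio_above_stable[OF _ _ d_def]\<close>)
    qed
  next
    assume c: "(p x - a x) / (b x - a x) < c"
    show "near D x (\<lambda>y. (p y - a y) / (b y - a y) < c)"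
    proof (cases "1 \<le> c")
      case True
      then show ?thesis using q01 by (intro near_trivial) (auto intro: less_le_trans)
    next
      case False
      have bx: "0 < b x - a x" using ord x by auto
      have c0: "0 < c" using q01[OF x] c by simp
      have cc: "p x - a x < c * (b x - a x)" using c bx by (simp add: divide_less_eq)
      define d where "d = (c * (b x - a x) - (p x - a x)) / (2 * (1 + c))"
      have d: "0 < d" using cc c0 by (simp add: d_def)
      have "near D x (\<lambda>y. (a x - d < a y \<and> a y < a x + d) \<and> (p x - d < p y \<and> p y < p x + d)
                   \<and> (b x - d < b y \<and> b y < b x + d))"
        by (intro near_conj fcont_on_near[OF _ x d] ca cp cb)
      then show ?thesis
        by (rule near_mono) (use ord c0 cc in \<open>auto intro!: ratio_below_stable[OF _ _ d_def]\<close>)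
    qed
  }
qed

lemma fcont_on_take:
  fixes f :: "'a::linordered_field list \<Rightarrow> 'a"
  assumes "fcont_on D f" "E \<subseteq> tuples n" "r \<le> n" "\<forall>y\<in>E. g @ take r y \<in> D"
  shows "fcont_on E (\<lambda>y. f (g @ take r y))"
  unfolding fcont_on_iff
proof (intro ballI allI conjI impI)
  fix x c assume x: "x \<in> E"
  have xD: "g @ take r x \<in> D" using assms x by blast
  show "c < f (g @ take r x) \<Longrightarrow> near E x (\<lambda>y. c < f (g @ take r y))"
    using assms(1) xD unfolding fcont_on_iff by (intro near_take[OF x assms(2,3,4), of "\<lambda>z. c < f z"]) auto
  show "f (g @ take r x) < c \<Longrightarrow> near E x (\<lambda>y. f (g @ take r y) < c)"
    using assms(1) xD unfolding fcont_on_iff by (intro near_take[OF x assms(2,3,4), of "\<lambda>z. f z < c"]) auto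
qed

lemma econt_on_take:
  fixes h :: "'a::linordered_field list \<Rightarrow> 'a ext"
  assumes "econt_on D h" "E \<subseteq> tuples n" "r \<le> n" "\<forall>y\<in>E. g @ take r y \<in> D"
  shows "econt_on E (\<lambda>y. h (g @ take r y))"
  unfolding econt_iff
proof (intro ballI allI conjI impI)
  fix x c assume x: "x \<in> E"
  have xD: "g @ take r x \<in> D" using assms x by blast
  show "eless (Fin c) (h (g @ take r x)) \<Longrightarrow> near E x (\<lambda>y. eless (Fin c) (h (g @ take r y)))"
    using assms(1) xD unfolding econt_iff by (intro near_take[OF x assms(2,3,4), of "\<lambda>z. eless (Fin c) (h z)"]) auto
  show "eless (h (g @ take r x)) (Fin c) \<Longrightarrow> near E x (\<lambda>y. eless (h (g @ take r y)) (Fin c))"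
    using assms(1) xD unfolding econt_iff by (intro near_take[OF x assms(2,3,4), of "\<lambda>z. eless (h z) (Fin c)"]) auto
qed

lemma econt_on_bound_fn: "bound_fn SL n D h \<Longrightarrow> econt_on D (h :: 'a::linordered_field list \<Rightarrow> 'a ext)"
  unfolding bound_fn_def
proof (elim disjE conjE)
  assume "\<forall>x\<in>D. h x = MInf"
  then show "econt_on D h" unfolding econt_iff by (auto intro!: near_trivial)
next
  assume "\<forall>x\<in>D. h x = PInf"
  then show "econt_on D h" unfolding econt_iff by (auto intro!: near_trivial)
qed

lemma fcont_on_cong: "fcont_on D f \<Longrightarrow> (\<And>x. x \<in> D \<Longrightarrow> f x = g x) \<Longrightarrow> fcont_on D g"
  unfolding fcont_on_iff near_def by (metis (no_types, lifting) IntE)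

lemma cont_on_id: "Z \<subseteq> tuples N \<Longrightarrow> cont_on Z N (\<lambda>x::'a::linordered_field list. x)"
  unfolding cont_on_def using fcont_on_nth[of Z N] by (simp add: fcont_on_def)

lemma cl_mono: "X \<subseteq> Y \<Longrightarrow> cl n X \<subseteq> cl n Y"
  unfolding cl_def by blast

lemma subset_cl: "X \<subseteq> tuples n \<Longrightarrow> X \<subseteq> cl n X"
  unfolding cl_def by blast

lemma cl_respects_lower_bound:
  fixes X :: "'a::linordered_field list set"
  assumes h1: "econt_on (tuples j) h1"
    and bd: "\<forall>a\<in>take j ` X. {y. a @ [y] \<in> X} \<subseteq> eivl (h1 a) (h2 a)"
    and X: "X \<subseteq> tuples (Suc j)" and b: "b \<in> tuples j" and cl: "b @ [y] \<in> cl (Suc j) X"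
  shows "\<not> eless (Fin y) (h1 b)"
proof
  assume "eless (Fin y) (h1 b)"
  then obtain c where c: "y < c" "eless (Fin c) (h1 b)" using eless_Fin_dense_right by blast
  have "near (tuples j) b (\<lambda>b'. eless (Fin c) (h1 b'))" using h1 b c(2) unfolding econt_iff by blast
  then obtain lo hi where lh: "b \<in> box lo hi" "\<forall>b'\<in>tuples j \<inter> box lo hi. eless (Fin c) (h1 b')"
    unfolding near_def by blast
  have ll: "length lo = length b" "length hi = length b" using lh(1) by (auto simp: box_mem)
  have "b @ [y] \<in> box (lo @ [y - 1]) (hi @ [c])" using box_snoc[OF ll] lh(1) c(1) by simp
  then obtain w where w: "w \<in> box (lo @ [y - 1]) (hi @ [c])" "w \<in> X" using cl unfolding cl_def by blast
  have "length w = Suc j" using w X by auto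
  then obtain b' y' where bw: "w = b' @ [y']" "length b' = j" by (metis length_Suc_conv_rev)
  have lb: "length lo = length b'" "length hi = length b'" using ll b bw by auto
  have inb: "b' \<in> box lo hi" "y' < c" using w(1) box_snoc[OF lb] bw by auto
  have "eless (Fin c) (h1 b')" using lh(2) inb bw by auto
  moreover have "b' \<in> take j ` X" using w(2) bw by (force simp: image_iff)
  then have "y' \<in> eivl (h1 b') (h2 b')" using bd w(2) bw by blast
  then have "eless (h1 b') (Fin y')" by (simp add: eivl_iff)
  ultimately have "eless (Fin c) (Fin y')" by (rule eless_trans)
  then show False using inb(2) by simp
qed

lemma cl_respects_upper_bound:
  fixes X :: "'a::linordered_field list set"
  assumes h2: "econt_on (tuples j) h2"
    and bd: "\<forall>a\<in>take j ` X. {y. a @ [y] \<in> X} \<subseteq> eivl (h1 a) (h2 a)"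
    and X: "X \<subseteq> tuples (Suc j)" and b: "b \<in> tuples j" and cl: "b @ [y] \<in> cl (Suc j) X"
  shows "\<not> eless (h2 b) (Fin y)"
proof
  assume "eless (h2 b) (Fin y)"
  then obtain c where c: "c < y" "eless (h2 b) (Fin c)" using eless_Fin_dense_left by blast
  have "near (tuples j) b (\<lambda>b'. eless (h2 b') (Fin c))" using h2 b c(2) unfolding econt_iff by blast
  then obtain lo hi where lh: "b \<in> box lo hi" "\<forall>b'\<in>tuples j \<inter> box lo hi. eless (h2 b') (Fin c)"
    unfolding near_def by blast
  have ll: "length lo = length b" "length hi = length b" using lh(1) by (auto simp: box_mem)
  have "b @ [y] \<in> box (lo @ [c]) (hi @ [y + 1])" using box_snoc[OF ll] lh(1) c(1) by simp
  then obtain w where w: "w \<in> box (lo @ [c]) (hi @ [y + 1])" "w \<in> X" using cl unfolding cl_def by blast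
  have "length w = Suc j" using w X by auto
  then obtain b' y' where bw: "w = b' @ [y']" "length b' = j" by (metis length_Suc_conv_rev)
  have lb: "length lo = length b'" "length hi = length b'" using ll b bw by auto
  have inb: "b' \<in> box lo hi" "c < y'" using w(1) box_snoc[OF lb] bw by auto
  have "eless (h2 b') (Fin c)" using lh(2) inb bw by auto
  moreover have "b' \<in> take j ` X" using w(2) bw by (force simp: image_iff)
  then have "y' \<in> eivl (h1 b') (h2 b')" using bd w(2) bw by blast
  then have "eless (Fin y') (h2 b')" by (simp add: eivl_iff)
  ultimately have "eless (Fin y') (Fin c)" using eless_trans by blast
  then show False using inb(2) by simp
qed

lemma cell_nonempty_subset:
  fixes C :: "'a::linordered_field list set"
  shows "cell SL n C \<Longrightarrow> C \<noteq> {} \<and> C \<subseteq> tuples n"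
proof (induction n arbitrary: C)
  case 0
  then show ?case by auto
next
  case (Suc n)
  from Suc.prems show ?case
  proof (simp only: cell.simps, elim disjE exE conjE)
    fix D f assume D: "cell SL n D" and C: "C = {x @ [f x] | x. x \<in> D}"
    obtain x where "x \<in> D" using Suc.IH[OF D] by blast
    then show ?thesis using C Suc.IH[OF D] by auto
  next
    fix D h1 h2 assume D: "cell SL n D" and lt: "\<forall>x\<in>D. eless (h1 x) (h2 x)"
      and C: "C = {x @ [y] | x y. x \<in> D \<and> y \<in> eivl (h1 x) (h2 x)}"
    obtain x where x: "x \<in> D" using Suc.IH[OF D] by blast
    obtain y where "y \<in> eivl (h1 x) (h2 x)" using eivl_nonempty lt x by blast
    then have "x @ [y] \<in> C" using C x by blast
    then show ?thesis using C Suc.IH[OF D] by auto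
  qed
qed

lemma cell_SucE:
  fixes C :: "'a::linordered_field list set"
  assumes "cell SL (Suc n) C"
  obtains (graph) D f where "cell SL n D" "take n ` C = D" "\<forall>x\<in>D. {y. x @ [y] \<in> C} = {f x}"
  | (ivl) D h1 h2 where "cell SL n D" "take n ` C = D" "bound_fn SL n D h1" "bound_fn SL n D h2"
      "\<forall>x\<in>D. eless (h1 x) (h2 x) \<and> {y. x @ [y] \<in> C} = eivl (h1 x) (h2 x)"
  using assms
proof (simp only: cell.simps, elim disjE exE conjE)
  fix D f assume D: "cell SL n D" and C: "C = {x @ [f x] | x. x \<in> D}"
  have Dt: "D \<subseteq> tuples n" using cell_nonempty_subset[OF D] by simp
  have tk: "take n ` C = D" using C Dt by (force simp: image_iff)
  have fb: "\<forall>x\<in>D. {y. x @ [y] \<in> C} = {f x}" using C Dt by auto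
  show thesis by (rule graph[OF D tk fb])
next
  fix D h1 h2 assume D: "cell SL n D" and b: "bound_fn SL n D h1" "bound_fn SL n D h2"
    and lt: "\<forall>x\<in>D. eless (h1 x) (h2 x)"
    and C: "C = {x @ [y] | x y. x \<in> D \<and> y \<in> eivl (h1 x) (h2 x)}"
  have Dt: "D \<subseteq> tuples n" using cell_nonempty_subset[OF D] by simp
  have tk: "take n ` C = D"
  proof
    show "take n ` C \<subseteq> D" using C Dt by auto
    show "D \<subseteq> take n ` C"
    proof
      fix x assume x: "x \<in> D"
      obtain y where "y \<in> eivl (h1 x) (h2 x)" using eivl_nonempty lt x by blast
      then have "x @ [y] \<in> C" using C x by blast
      then show "x \<in> take n ` C" using x Dt by (force simp: image_iff)
    qed
  qed
  have fb: "\<forall>x\<in>D. {y. x @ [y] \<in> C} = eivl (h1 x) (h2 x)" using C Dt by auto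
  have "\<forall>x\<in>D. eless (h1 x) (h2 x) \<and> {y. x @ [y] \<in> C} = eivl (h1 x) (h2 x)" using lt fb by blast
  then show thesis by (rule ivl[OF D tk b(1) b(2)])
qed

lemma cell_take:
  fixes C :: "'a::linordered_field list set"
  shows "cell SL (n + p) C \<Longrightarrow> cell SL n (take n ` C)"
proof (induction p arbitrary: C)
  case 0
  have "C \<subseteq> tuples n" using cell_nonempty_subset[OF 0[simplified]] by simp
  then have "take n ` C = C" by (force simp: image_iff)
  then show ?case using 0 by simp
next
  case (Suc p)
  have c: "cell SL (Suc (n + p)) C" using Suc.prems by simp
  have "cell SL (n + p) (take (n + p) ` C)"
    by (rule cell_SucE[OF c]) auto
  from Suc.IH[OF this] show ?case by (simp add: image_image min_def)
qed

definition ivl_level :: "(nat \<Rightarrow> 'a::linorder list set \<Rightarrow> bool) \<Rightarrow> 'a list set \<Rightarrow> nat \<Rightarrow>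
    ('a list \<Rightarrow> 'a ext) \<Rightarrow> ('a list \<Rightarrow> 'a ext) \<Rightarrow> bool" where
  "ivl_level SL C n h1 h2 \<longleftrightarrow> bound_fn SL n (take n ` C) h1 \<and> bound_fn SL n (take n ` C) h2 \<and>
     (\<forall>x\<in>take n ` C. eless (h1 x) (h2 x) \<and> {y. x @ [y] \<in> take (Suc n) ` C} = eivl (h1 x) (h2 x))"

definition unit_shell :: "nat \<Rightarrow> 'a::linordered_field list set \<Rightarrow> nat \<Rightarrow> 'a list set" where
  "unit_shell m Z j = {x. length x = m + j \<and> take m x \<in> take m ` Z \<and> (\<forall>i<j. 0 < x ! (m + i) \<and> x ! (m + i) < 1)}"

lemma defA_unit_shell:
  fixes SL :: "nat \<Rightarrow> 'a::linordered_field list set \<Rightarrow> bool"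
  assumes fs: "field_structure SL" and Z_defA: "defA SL B (m + k) Z"
  shows "defA SL B (m + j) (unit_shell m Z j)"
proof -
  note st = field_structure_is_structure[OF fs]
  have Z0: "defA SL B m (take m ` Z)" using defA_take[OF st Z_defA] .
  let ?phi = "Conj (At (take m ` Z) [0..<m])
     (BigConj (map (\<lambda>i. Conj (fm_less (m + j) C0 (V (m + i))) (fm_less (m + j) (V (m + i)) C1)) [0..<j])) :: 'a fm"
  have f1: "\<forall>f\<in>set (map (\<lambda>i. Conj (fm_less (m + j) C0 (V (m + i))) (fm_less (m + j) (V (m + i)) C1)) [0..<j]).
      fm_ok SL B (m + j) f" using fm_ok_cmp[OF fs] by auto
  have "fm_ok SL B (m + j) ?phi" using Z0 fm_ok_BigConj[OF st f1] by simp
  then have d: "defA SL B (m + j) {w \<in> tuples (m + j). sem ?phi w}" by (rule defA_fm[OF st])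
  have "{w \<in> tuples (m + j). sem ?phi w} = unit_shell m Z j"
    by (auto simp: unit_shell_def map_nth_upt)
  then show ?thesis using d by simp
qed

lemma unit_shell_Suc: "unit_shell m Z (Suc j) = {x @ [y] | x y. x \<in> unit_shell m Z j \<and> y \<in> eivl (Fin 0) (Fin 1)}"
proof (rule set_eqI)
  fix w
  show "w \<in> unit_shell m Z (Suc j) \<longleftrightarrow> w \<in> {x @ [y] | x y. x \<in> unit_shell m Z j \<and> y \<in> eivl (Fin 0) (Fin 1)}"
  proof
    assume w: "w \<in> unit_shell m Z (Suc j)"
    then have "length w = Suc (m + j)" by (simp add: unit_shell_def)
    then obtain x y where xy: "w = x @ [y]" "length x = m + j" by (metis length_Suc_conv_rev)
    have A: "\<forall>i<Suc j. 0 < w ! (m + i) \<and> w ! (m + i) < 1" "take m w \<in> take m ` Z" using w by (auto simp: unit_shell_def)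
    have "\<forall>i<j. 0 < x ! (m + i) \<and> x ! (m + i) < 1"
    proof (intro allI impI)
      fix i assume i: "i < j"
      then have "w ! (m + i) = x ! (m + i)" using xy by (simp add: nth_append)
      moreover have "i < Suc j" using i by simp
      ultimately show "0 < x ! (m + i) \<and> x ! (m + i) < 1" using A(1) by metis
    qed
    moreover have "take m x = take m w" using xy by simp
    ultimately have "x \<in> unit_shell m Z j" using xy A(2) by (simp add: unit_shell_def)
    moreover have "y \<in> eivl (Fin 0) (Fin 1)"
    proof -
      have "w ! (m + j) = y" using xy by (simp add: nth_append)
      then show ?thesis using A(1) by (auto simp: eivl_iff)
    qed
    ultimately show "w \<in> {x @ [y] | x y. x \<in> unit_shell m Z j \<and> y \<in> eivl (Fin 0) (Fin 1)}" using xy by blast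
  next
    assume "w \<in> {x @ [y] | x y. x \<in> unit_shell m Z j \<and> y \<in> eivl (Fin 0) (Fin 1)}"
    then obtain x y where xy: "w = x @ [y]" "x \<in> unit_shell m Z j" "y \<in> eivl (Fin 0) (Fin 1)" by blast
    then show "w \<in> unit_shell m Z (Suc j)" unfolding unit_shell_def
      by (auto simp: eivl_iff nth_append less_Suc_eq)
  qed
qed

lemma cell_unit_shell:
  fixes SL :: "nat \<Rightarrow> 'a::linordered_field list set \<Rightarrow> bool"
  assumes fs: "field_structure SL" and Z_defA: "defA SL B (m + k) Z" and Zc: "cell SL (m + k) Z"
  shows "cell SL (m + j) (unit_shell m Z j)"
proof (induction j)
  case 0
  have Zt: "Z \<subseteq> tuples (m + k)" using cell_nonempty_subset[OF Zc] by simp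
  have "unit_shell m Z 0 = take m ` Z" using Zt by (auto simp: unit_shell_def)
  then show ?case using cell_take[OF Zc] by simp
next
  case (Suc j)
  have D: "defA SL UNIV (m + j) (unit_shell m Z j)" using defA_unit_shell[OF fs defA_mono[OF Z_defA]] by simp
  have b0: "bound_fn SL (m + j) (unit_shell m Z j) (\<lambda>_. Fin 0)"
    unfolding bound_fn_def using edef_const[OF field_structure_is_structure[OF fs] defA_zero[OF fs] D] econt_const by auto
  have b1: "bound_fn SL (m + j) (unit_shell m Z j) (\<lambda>_. Fin 1)"
    unfolding bound_fn_def using edef_const[OF field_structure_is_structure[OF fs] defA_one[OF fs] D] econt_const by auto
  show ?case unfolding add_Suc_right cell.simps unit_shell_Suc
    using Suc b0 b1 by (intro disjI2 exI[of _ "unit_shell m Z j"] exI[of _ "\<lambda>_. Fin 0"] exI[of _ "\<lambda>_. Fin 1"]) auto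
qed

lemma unit_shell_eq: "{g @ y | g y. g \<in> take m ` Z \<and> length y = k \<and> (\<forall>i<k. 0 < y ! i \<and> y ! i < 1)} = unit_shell m Z k"
  if "Z \<subseteq> tuples (m + k)"
proof (rule set_eqI)
  fix w
  show "w \<in> {g @ y | g y. g \<in> take m ` Z \<and> length y = k \<and> (\<forall>i<k. 0 < y ! i \<and> y ! i < 1)} \<longleftrightarrow> w \<in> unit_shell m Z k"
  proof
    assume "w \<in> {g @ y | g y. g \<in> take m ` Z \<and> length y = k \<and> (\<forall>i<k. 0 < y ! i \<and> y ! i < 1)}"
    then obtain g y where gy: "w = g @ y" "g \<in> take m ` Z" "length y = k" "\<forall>i<k. 0 < y ! i \<and> y ! i < 1" by blast
    have lg: "length g = m" using gy(2) that by auto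
    then show "w \<in> unit_shell m Z k" using gy by (auto simp: unit_shell_def nth_append)
  next
    assume w: "w \<in> unit_shell m Z k"
    then have lw: "length w = m + k" by (simp add: unit_shell_def)
    have "w = take m w @ drop m w" by simp
    moreover have "take m w \<in> take m ` Z" using w by (simp add: unit_shell_def)
    moreover have "length (drop m w) = k" using lw by simp
    moreover have "\<forall>i<k. 0 < drop m w ! i \<and> drop m w ! i < 1" using w lw by (auto simp: unit_shell_def)
    ultimately show "w \<in> {g @ y | g y. g \<in> take m ` Z \<and> length y = k \<and> (\<forall>i<k. 0 < y ! i \<and> y ! i < 1)}"
      by blast
  qed
qed

definition unit_cube :: "nat \<Rightarrow> 'a::linordered_field list set" where
  "unit_cube j = {t. length t = j \<and> (\<forall>i<j. 0 < t ! i \<and> t ! i < 1)}"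

lemma take_unit_shell:
  assumes j: "j \<le> k"
  shows "take (m + j) ` unit_shell m Z k = unit_shell m Z j"
proof (intro equalityI subsetI)
  fix x assume "x \<in> take (m + j) ` unit_shell m Z k"
  then show "x \<in> unit_shell m Z j" using j by (auto simp: unit_shell_def)
next
  fix x assume x: "x \<in> unit_shell m Z j"
  let ?x' = "x @ replicate (k - j) (1 / 2 :: 'a)"
  have "0 < ?x' ! (m + i) \<and> ?x' ! (m + i) < 1" if "i < k" for i
    using x that by (cases "i < j") (auto simp: unit_shell_def nth_append)
  then have "?x' \<in> unit_shell m Z k" using x j by (auto simp: unit_shell_def)
  moreover have "take (m + j) ?x' = x" using x by (simp add: unit_shell_def)
  ultimately show "x \<in> take (m + j) ` unit_shell m Z k" by force
qed

lemma fiber_unit_shell: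
  assumes "g \<in> take m ` Z" "length g = m"
  shows "fiber (unit_shell m Z j) g = unit_cube j"
  using assms by (auto simp: fiber_def unit_shell_def unit_cube_def nth_append)

section \<open>Small sets and supercones\<close>

lemma large_mono: "large SL n X \<Longrightarrow> X \<subseteq> Y \<Longrightarrow> large SL n Y"
proof -
  assume l: "large SL n X" and XY: "X \<subseteq> Y"
  then obtain m f a b where A: "defA SL UNIV (n * m + 1) {x @ [f x] | x. length x = n * m}" "a < b"
    "{a<..<b} \<subseteq> {f (concat xs) | xs. length xs = m \<and> set xs \<subseteq> X}"
    unfolding large_def by blast
  have "{f (concat xs) | xs. length xs = m \<and> set xs \<subseteq> X} \<subseteq> {f (concat xs) | xs. length xs = m \<and> set xs \<subseteq> Y}"
    using XY by blast
  then have "{a<..<b} \<subseteq> {f (concat xs) | xs. length xs = m \<and> set xs \<subseteq> Y}" using A(3) by (rule order.trans[rotated])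
  then show ?thesis unfolding large_def using A(1,2)
    by (intro exI[of _ m] exI[of _ f] conjI exI[of _ a] exI[of _ b])
qed

lemma small_mono: "small SL n Y \<Longrightarrow> X \<subseteq> Y \<Longrightarrow> small SL n X"
  unfolding small_def using large_mono by blast

lemma eivl_convex: "p \<in> eivl l u \<Longrightarrow> q \<in> eivl l u \<Longrightarrow> p < t \<Longrightarrow> t < q \<Longrightarrow> t \<in> eivl l u"
  by (cases l; cases u) (auto simp: eivl_iff)

lemma small_inj_image:
  fixes X :: "'a::linordered_field set"
  assumes st: "is_structure SL" and sm: "small SL 1 {[y] | y. y \<in> X}" and inj: "inj_on \<tau> X"
    and \<tau>': "defA SL UNIV 2 {[y, \<tau>' y] | y. True}" and ext: "\<forall>y\<in>X. \<tau>' y = \<tau> y"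
  shows "small SL 1 {[\<tau> y] | y. y \<in> X}"
  unfolding small_def
proof
  assume "large SL 1 {[\<tau> y] | y. y \<in> X}"
  then obtain m f a b where f: "defA SL UNIV (m + 1) {x @ [f x] | x. length x = m}"
    and ab: "a < b" "{a<..<b} \<subseteq> {f (concat xs) | xs. length xs = m \<and> set xs \<subseteq> {[\<tau> y] | y. y \<in> X}}"
    unfolding large_def by auto
  have "defA SL UNIV (Suc m) {x @ [f (map \<tau>' x)] | x. x \<in> tuples m}"
    using defA_graph_map[OF st \<tau>'] f by simp
  then have f\<tau>: "defA SL UNIV (1 * m + 1) {x @ [f (map \<tau>' x)] | x. length x = 1 * m}" by simp
  have "{a<..<b} \<subseteq> {f (map \<tau>' (concat xs)) | xs. length xs = m \<and> set xs \<subseteq> {[y] | y. y \<in> X}}"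
  proof
    fix t assume "t \<in> {a<..<b}"
    then obtain xs where xs: "t = f (concat xs)" "length xs = m" "set xs \<subseteq> {[\<tau> y] | y. y \<in> X}"
      using ab by blast
    define xs' where "xs' = map (\<lambda>l. [the_inv_into X \<tau> (hd l)]) xs"
    have e: "map \<tau>' [the_inv_into X \<tau> (hd l)] = l \<and> [the_inv_into X \<tau> (hd l)] \<in> {[y] | y. y \<in> X}"
      if lx: "l \<in> set xs" for l
    proof -
      obtain y where y: "l = [\<tau> y]" "y \<in> X" using xs(3) lx by blast
      have "the_inv_into X \<tau> (hd l) = y" using y inj by (simp add: the_inv_into_f_f)
      then show ?thesis using y ext by simp
    qed
    have "map \<tau>' (concat xs') = concat (map (map \<tau>') xs')" by (simp add: map_concat)
    also have "\<dots> = concat xs" unfolding xs'_def using e by (simp add: map_idI comp_def)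
    finally have "f (map \<tau>' (concat xs')) = t" using xs(1) by simp
    moreover have "set xs' \<subseteq> {[y] | y. y \<in> X}" using e by (auto simp: xs'_def)
    moreover have "length xs' = m" using xs(2) by (simp add: xs'_def)
    ultimately show "t \<in> {f (map \<tau>' (concat xs)) | xs. length xs = m \<and> set xs \<subseteq> {[y] | y. y \<in> X}}"
      by blast
  qed
  then have "large SL 1 {[y] | y. y \<in> X}"
    unfolding large_def using f\<tau> ab(1) by (intro exI[of _ m] exI[of _ "\<lambda>x. f (map \<tau>' x)"]) blast
  then show False using sm unfolding small_def by blast
qed

lemma small_bij_image_diff:
  fixes Z :: "'a::linordered_field set"
  assumes st: "is_structure SL" and bij: "bij_betw \<tau> Z I" and K: "K \<subseteq> Z"
    and sm: "small SL 1 {[y] | y. y \<in> Z - K}"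
    and \<tau>': "defA SL UNIV 2 {[y, \<tau>' y] | y. True}" and ext: "\<forall>y\<in>Z. \<tau>' y = \<tau> y"
  shows "small SL 1 {[t] | t. t \<in> I - \<tau> ` K}"
proof -
  have "I - \<tau> ` K = \<tau> ` (Z - K)" using bij K unfolding bij_betw_def inj_on_def by blast
  moreover have "inj_on \<tau> (Z - K)" using bij_betw_imp_inj_on[OF bij] by (rule inj_on_subset) blast
  then have "small SL 1 {[\<tau> y] | y. y \<in> Z - K}"
    by (rule small_inj_image[OF st sm _ \<tau>']) (use ext in blast)
  moreover have "{[t] | t. t \<in> \<tau> ` (Z - K)} = {[\<tau> y] | y. y \<in> Z - K}" by auto
  ultimately show ?thesis by simp
qed

lemma large_of_interval:
  fixes Y :: "'a::linordered_field set"
  assumes st: "is_structure SL" and cd: "c < d" "{c<..<d} \<subseteq> Y"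
  shows "large SL 1 {[y] | y. y \<in> Y}"
proof -
  have "defA SL UNIV (Suc 1) {x @ [x ! 0] | x. x \<in> tuples 1}"
    using defA_graph_nth[OF st defA_of_structure[OF structure_tuples[OF st] st]] by simp
  then have "defA SL UNIV (1 * 1 + 1) {x @ [x ! 0] | x. length x = 1 * 1}" by simp
  moreover have "{c<..<d} \<subseteq> {concat xs ! 0 | xs. length xs = 1 \<and> set xs \<subseteq> {[y] | y. y \<in> Y}}"
  proof
    fix t assume "t \<in> {c<..<d}"
    then have "concat [[t]] ! 0 = t \<and> length [[t]] = 1 \<and> set [[t]] \<subseteq> {[y] | y. y \<in> Y}" using cd by auto
    then show "t \<in> {concat xs ! 0 | xs. length xs = 1 \<and> set xs \<subseteq> {[y] | y. y \<in> Y}}"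
      by (intro CollectI exI[of _ "[[t]]"]) simp
  qed
  ultimately show ?thesis
    unfolding large_def using cd(1) by (intro exI[of _ 1] exI[of _ "\<lambda>x. x ! 0"]) blast
qed

lemma eivl_diff_subsingleton:
  fixes X :: "'a::linordered_field set"
  assumes lu: "eless l u" and X: "\<forall>y1\<in>X. \<forall>y2\<in>X. y1 = y2"
  obtains c d where "c < d" "{c<..<d} \<subseteq> eivl l u - X"
proof -
  obtain p q where pq: "p \<in> eivl l u" "q \<in> eivl l u" "p < q" using eivl_two_points[OF lu] by blast
  show thesis
  proof (cases "\<exists>x\<in>X. p < x \<and> x < q")
    case True
    then obtain x where x: "x \<in> X" "p < x" "x < q" by blast
    have "{p<..<x} \<subseteq> eivl l u - X"
    proof
      fix t assume t: "t \<in> {p<..<x}"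
      have "x \<in> eivl l u" using eivl_convex[OF pq(1) pq(2) x(2) x(3)] .
      then have "t \<in> eivl l u" using eivl_convex[OF pq(1)] t by simp
      moreover have "t \<notin> X" using X x t by auto
      ultimately show "t \<in> eivl l u - X" by blast
    qed
    then show thesis using that x by blast
  next
    case False
    have "{p<..<q} \<subseteq> eivl l u - X" using eivl_convex[OF pq(1) pq(2)] False by auto
    then show thesis using that pq by blast
  qed
qed

lemma cosmall_two_points:
  fixes X :: "'a::linordered_field set"
  assumes st: "is_structure SL" and lu: "eless l u"
    and sm: "small SL 1 {[y] | y. y \<in> eivl l u - X}"
  shows "\<exists>y1 y2. y1 \<in> X \<and> y2 \<in> X \<and> y1 \<noteq> y2"
proof (rule ccontr)
  assume "\<not> (\<exists>y1 y2. y1 \<in> X \<and> y2 \<in> X \<and> y1 \<noteq> y2)"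
  then obtain c d where "c < d" "{c<..<d} \<subseteq> eivl l u - X"
    by (metis eivl_diff_subsingleton[OF lu])
  then have "large SL 1 {[y] | y. y \<in> eivl l u - X}" by (rule large_of_interval[OF st])
  then show False using sm by (simp add: small_def)
qed

lemma supercone_props:
  fixes X :: "'a::linordered_field list set"
  shows "supercone SL SP n X \<Longrightarrow> X \<noteq> {} \<and> X \<subseteq> tuples n"
proof (induction n arbitrary: X)
  case 0
  then show ?case by auto
next
  case (Suc n)
  then have "take n ` X \<noteq> {}" "defA SP UNIV (Suc n) X" by auto
  then show ?case using defA_subset by blast
qed

lemma supercone_take:
  fixes X :: "'a::linordered_field list set"
  shows "supercone SL SP n X \<Longrightarrow> j \<le> n \<Longrightarrow> supercone SL SP j (take j ` X)"
proof (induction n arbitrary: X)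
  case 0
  then have "X \<subseteq> tuples 0" using supercone_props by blast
  then have "take 0 ` X = X" by (force simp: image_iff)
  then show ?case using 0 by simp
next
  case (Suc n)
  show ?case
  proof (cases "j = Suc n")
    case True
    have "X \<subseteq> tuples (Suc n)" using Suc.prems supercone_props by blast
    then have "take j ` X = X" using True by (force simp: image_iff)
    then show ?thesis using Suc.prems True by simp
  next
    case False
    then have j: "j \<le> n" using Suc.prems by simp
    have "supercone SL SP n (take n ` X)" using Suc.prems(1) by simp
    from Suc.IH[OF this j] show ?thesis by (simp add: image_image min_def j)
  qed
qed

lemma supercone_Suc_two_points:
  fixes K :: "'a::linordered_field list set"
  assumes st: "is_structure SL" and K: "supercone SL SP (Suc j) K"
  shows "\<exists>a y1 y2. a @ [y1] \<in> K \<and> a @ [y2] \<in> K \<and> y1 \<noteq> y2"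
proof -
  obtain h1 h2 where lu: "\<forall>x\<in>tuples j. eless (h1 x) (h2 x)"
    and cone: "\<forall>a\<in>take j ` K. small SL 1 {[y] | y. y \<in> eivl (h1 a) (h2 a) - {y. a @ [y] \<in> K}}"
    using K by (simp only: supercone.simps) blast
  obtain a where a: "a \<in> take j ` K" using supercone_props[OF K] by auto
  then have "a \<in> tuples j" using supercone_props[OF K] by auto
  then have lu: "eless (h1 a) (h2 a)" and sm: "small SL 1 {[y] | y. y \<in> eivl (h1 a) (h2 a) - {y. a @ [y] \<in> K}}"
    using lu cone a by auto
  show ?thesis using cosmall_two_points[OF st lu sm] by blast
qed

lemma shell_level_ivl:
  fixes Z :: "'a::linordered_field list set"
  assumes st: "is_structure SL" and Z: "cell SL (m + k) Z" and j: "j < k"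
    and K: "supercone SL SP (Suc j) K" and KZ: "\<forall>y\<in>K. g @ y \<in> take (Suc (m + j)) ` Z"
    and g: "length g = m"
  shows "\<exists>h1 h2. ivl_level SL Z (m + j) h1 h2"
proof -
  let ?C = "take (Suc (m + j)) ` Z"
  have C: "cell SL (Suc (m + j)) ?C"
    using cell_take[of SL "Suc (m + j)" "k - Suc j" Z] Z j by simp
  have take_C: "take (m + j) ` ?C = take (m + j) ` Z" by (simp add: image_image)
  show ?thesis
  proof (rule cell_SucE[OF C])
    fix D f assume D: "take (m + j) ` ?C = D" and fib: "\<forall>x\<in>D. {y. x @ [y] \<in> ?C} = {f x}"
    have single: "y1 = y2" if "x @ [y1] \<in> ?C" "x @ [y2] \<in> ?C" for x y1 y2
    proof -
      have "x @ [y1] \<in> tuples (Suc (m + j))" using that(1) cell_nonempty_subset[OF C] by blast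
      then have "length x = m + j" by simp
      then have "x = take (m + j) (x @ [y1])" by simp
      then have "x \<in> D" using that(1) D by blast
      then have "{y. x @ [y] \<in> ?C} = {f x}" using fib by blast
      then show ?thesis using that by (metis (no_types) mem_Collect_eq singletonD)
    qed
    obtain a y1 y2 where "a @ [y1] \<in> K" "a @ [y2] \<in> K" "y1 \<noteq> y2"
      using supercone_Suc_two_points[OF st K] by blast
    then show ?thesis using single[of "g @ a" y1 y2] KZ by simp
  next
    fix D h1 h2 assume "take (m + j) ` ?C = D" "bound_fn SL (m + j) D h1" "bound_fn SL (m + j) D h2"
      "\<forall>x\<in>D. eless (h1 x) (h2 x) \<and> {y. x @ [y] \<in> ?C} = eivl (h1 x) (h2 x)"
    then show ?thesis unfolding ivl_level_def using take_C by auto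
  qed
qed

lemma shell_levels:
  fixes Z :: "'a::linordered_field list set"
  assumes st: "is_structure SL" and Z: "cell SL (m + k) Z"
    and family: "supercone_family SL SP m k S J" and J_subset_Z: "J \<subseteq> Z" and g: "g \<in> S"
  obtains hL hU where "\<And>j. j < k \<Longrightarrow> ivl_level SL Z (m + j) (hL j) (hU j)"
proof -
  have lg: "length g = m" and K: "supercone SL SP k (fiber J g)"
    using family g by (auto simp: supercone_family_def)
  have "\<exists>h1 h2. ivl_level SL Z (m + j) h1 h2" if j: "j < k" for j
  proof (rule shell_level_ivl[OF st Z j _ _ lg])
    show "supercone SL SP (Suc j) (take (Suc j) ` fiber J g)"
      by (rule supercone_take[OF K]) (use j in simp)
    show "\<forall>y\<in>take (Suc j) ` fiber J g. g @ y \<in> take (Suc (m + j)) ` Z"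
      using J_subset_Z lg by (auto simp: fiber_def intro!: image_eqI)
  qed
  then show thesis using that by metis
qed

lemma uniform_family_empty:
  assumes st: "is_structure SL" and C: "cell SL (m + k) C" "defA SL A (m + k) C"
  shows "A_uniform_family_shell SL (gen SL P) A m k {} {} C"
  using C defA_empty[OF is_structure_gen[OF st]]
  by (auto simp: A_uniform_family_shell_def supercone_family_def is_shell_def fiber_def)

section \<open>The normalising map\<close>

locale normalising_map =
  fixes SL :: "nat \<Rightarrow> 'a::linordered_field list set \<Rightarrow> bool" and A :: "'a set"
    and m k :: nat and Z :: "'a list set" and hL hU :: "nat \<Rightarrow> 'a list \<Rightarrow> 'a ext"
  assumes fs: "field_structure SL"
    and Z_cell: "cell SL (m + k) Z" and Z_defA: "defA SL A (m + k) Z"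
    and levels: "\<And>j. j < k \<Longrightarrow> ivl_level SL Z (m + j) (hL j) (hU j)"
begin

lemma st: "is_structure SL" using field_structure_is_structure[OF fs] .

definition trunc :: "nat \<Rightarrow> 'a list set" where "trunc j = take (m + j) ` Z"

definition lo :: "nat \<Rightarrow> 'a list \<Rightarrow> 'a" where "lo j x = psi_ext (hL j x)"

definition hi :: "nat \<Rightarrow> 'a list \<Rightarrow> 'a" where "hi j x = psi_ext (hU j x)"

definition level_coord :: "nat \<Rightarrow> 'a list \<Rightarrow> 'a" where
  "level_coord j w = (psi (last w) - lo j (butlast w)) / (hi j (butlast w) - lo j (butlast w))"

definition nmap :: "'a list \<Rightarrow> 'a list" where
  "nmap x = take m x @ map (\<lambda>j. level_coord j (take (m + Suc j) x)) [0..<k]"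

lemma Z_subset: "Z \<subseteq> tuples (m + k)" using cell_nonempty_subset[OF Z_cell] by simp

lemma trunc_subset: "j \<le> k \<Longrightarrow> trunc j \<subseteq> tuples (m + j)"
  using Z_subset by (auto simp: trunc_def)

lemma trunc_mem: "x \<in> Z \<Longrightarrow> take (m + j) x \<in> trunc j" by (simp add: trunc_def)

lemma trunc_mem_Suc: "x \<in> Z \<Longrightarrow> take (Suc (m + j)) x \<in> trunc (Suc j)" using trunc_mem[of x "Suc j"] by simp

lemma trunc_Suc_iff: "j < k \<Longrightarrow> x \<in> trunc j \<Longrightarrow> x @ [y] \<in> trunc (Suc j) \<longleftrightarrow> y \<in> eivl (hL j x) (hU j x)"
  using levels[of j, unfolded ivl_level_def] unfolding trunc_def by auto

lemma level_bounds_less: "j < k \<Longrightarrow> x \<in> trunc j \<Longrightarrow> eless (hL j x) (hU j x)"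
  using levels[of j, unfolded ivl_level_def] unfolding trunc_def by auto

lemma lo_less_hi: "j < k \<Longrightarrow> x \<in> trunc j \<Longrightarrow> lo j x < hi j x"
  using level_bounds_less by (simp add: lo_def hi_def psi_ext_mono)

lemma trunc_Suc_dest:
  assumes j: "j < k" and w: "w \<in> trunc (Suc j)"
  shows "butlast w \<in> trunc j" "w = butlast w @ [last w]" "last w \<in> eivl (hL j (butlast w)) (hU j (butlast w))"
proof -
  obtain x where x: "x \<in> Z" "w = take (m + Suc j) x" using w by (auto simp: trunc_def)
  have lx: "length x = m + k" using x Z_subset by auto
  have lw: "length w = Suc (m + j)" using x lx j by simp
  show e: "w = butlast w @ [last w]" using lw
    by (metis append_butlast_last_id list.size(3) nat.distinct(1))
  have "butlast w = take (m + j) x" using x lx j by (simp add: butlast_take)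
  then show b: "butlast w \<in> trunc j" using x by (simp add: trunc_mem)
  show "last w \<in> eivl (hL j (butlast w)) (hU j (butlast w))"
    using trunc_Suc_iff[OF j b] e w by metis
qed

lemma psi_between_lo_hi: "j < k \<Longrightarrow> x \<in> trunc j \<Longrightarrow> x @ [y] \<in> trunc (Suc j) \<Longrightarrow> lo j x < psi y \<and> psi y < hi j x"
  using trunc_Suc_iff by (simp add: lo_def hi_def eivl_iff_psi)

lemma level_coord_snoc: "level_coord j (x @ [y]) = (psi y - lo j x) / (hi j x - lo j x)"
  by (simp add: level_coord_def)

lemma level_coord_bounds:
  assumes "j < k" "x \<in> trunc j" "x @ [y] \<in> trunc (Suc j)"
  shows "0 < level_coord j (x @ [y])" "level_coord j (x @ [y]) < 1"
  using psi_between_lo_hi[OF assms] by (auto simp: level_coord_snoc divide_less_eq)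

lemma level_coord_bounds':
  assumes "j < k" "w \<in> trunc (Suc j)"
  shows "0 < level_coord j w" "level_coord j w < 1"
  using level_coord_bounds[OF assms(1) trunc_Suc_dest(1)[OF assms] ] trunc_Suc_dest(2)[OF assms] assms(2) by metis+

lemma level_coord_less_iff:
  assumes "j < k" "x \<in> trunc j"
  shows "level_coord j (x @ [y]) < level_coord j (x @ [y']) \<longleftrightarrow> y < y'"
proof -
  have "0 < hi j x - lo j x" using lo_less_hi[OF assms] by simp
  then show ?thesis by (simp add: level_coord_snoc divide_less_cancel)
qed

lemma level_coord_inj:
  assumes "j < k" "x \<in> trunc j" "level_coord j (x @ [y]) = level_coord j (x @ [y'])"
  shows "y = y'"
  using level_coord_less_iff[OF assms(1,2)] assms(3) by (metis linorder_neq_iff order_less_irrefl)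

lemma level_coord_surj:
  assumes j: "j < k" and x: "x \<in> trunc j" and t: "0 < t" "t < 1"
  shows "\<exists>y. x @ [y] \<in> trunc (Suc j) \<and> level_coord j (x @ [y]) = t"
proof -
  have lh: "lo j x < hi j x" using lo_less_hi[OF j x] .
  define c where "c = lo j x + t * (hi j x - lo j x)"
  have "lo j x < c" using t lh by (simp add: c_def)
  moreover have "c < hi j x"
  proof -
    have "t * (hi j x - lo j x) < 1 * (hi j x - lo j x)" using t lh by (intro mult_strict_right_mono) auto
    then show ?thesis by (simp add: c_def)
  qed
  ultimately obtain y where y: "y \<in> eivl (hL j x) (hU j x)" "psi y = c"
    using psi_surj_eivl by (metis lo_def hi_def)
  have "level_coord j (x @ [y]) = t" using lh y(2) by (simp add: level_coord_snoc c_def)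
  then show ?thesis using y trunc_Suc_iff[OF j x] by blast
qed

lemma level_coord_bij:
  assumes j: "j < k" and x: "x \<in> trunc j"
  shows "bij_betw (\<lambda>y. level_coord j (x @ [y])) {y. x @ [y] \<in> trunc (Suc j)} {0<..<1}"
  unfolding bij_betw_def inj_on_def
  using level_coord_inj[OF j x] level_coord_bounds[OF j x] level_coord_surj[OF j x]
  by (auto simp: image_iff) blast

lemma length_nmap: "x \<in> Z \<Longrightarrow> length (nmap x) = m + k"
  using Z_subset by (auto simp: nmap_def)

lemma nmap_nth_low: "x \<in> Z \<Longrightarrow> i < m \<Longrightarrow> nmap x ! i = x ! i"
  using Z_subset by (auto simp: nmap_def nth_append)

lemma nmap_nth_high: "x \<in> Z \<Longrightarrow> j < k \<Longrightarrow> nmap x ! (m + j) = level_coord j (take (m + Suc j) x)"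
  using Z_subset by (auto simp: nmap_def nth_append)

lemma take_nmap: "x \<in> Z \<Longrightarrow> take m (nmap x) = take m x"
  using Z_subset by (auto simp: nmap_def)

lemma inj_nmap: "inj_on nmap Z"
proof (rule inj_onI)
  fix x x' assume x: "x \<in> Z" and x': "x' \<in> Z" and e: "nmap x = nmap x'"
  have lx: "length x = m + k" "length x' = m + k" using x x' Z_subset by auto
  have "j \<le> k \<Longrightarrow> take (m + j) x = take (m + j) x'" for j
  proof (induction j)
    case 0
    then show ?case using take_nmap[OF x] take_nmap[OF x'] e by simp
  next
    case (Suc j)
    then have j: "j < k" by simp
    have IH: "take (m + j) x = take (m + j) x'" using Suc by simp
    have "level_coord j (take (m + j) x @ [x ! (m + j)]) = level_coord j (take (m + j) x' @ [x' ! (m + j)])"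
      using nmap_nth_high[OF x j] nmap_nth_high[OF x' j] e lx j by (simp add: take_Suc_conv_app_nth)
    then have "x ! (m + j) = x' ! (m + j)"
      using level_coord_inj[OF j trunc_mem[OF x, of j]] IH by simp
    then show ?case using IH lx j by (simp add: take_Suc_conv_app_nth)
  qed
  from this[of k] show "x = x'" using lx by simp
qed

lemma fcont_on_level_coord: "j < k \<Longrightarrow> fcont_on (trunc (Suc j)) (level_coord j)"
proof -
  assume j: "j < k"
  have sub: "trunc (Suc j) \<subseteq> tuples (m + Suc j)" using trunc_subset[of "Suc j"] j by simp
  have bl: "\<And>w. w \<in> trunc (Suc j) \<Longrightarrow> butlast w = [] @ take (m + j) w"
    using sub by (auto simp: butlast_conv_take)
  have p: "fcont_on (trunc (Suc j)) (\<lambda>w. psi (last w))"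
  proof (rule fcont_on_cong)
    show "fcont_on (trunc (Suc j)) (\<lambda>w. psi (w ! (m + j)))" by (rule fcont_on_psi[OF fcont_on_nth[OF sub]]) simp
    fix w assume "w \<in> trunc (Suc j)"
    then have "length w = Suc (m + j)" using sub by auto
    then have "w \<noteq> []" "length w - 1 = m + j" by auto
    then show "psi (w ! (m + j)) = psi (last w)" by (metis last_conv_nth)
  qed
  have pre: "\<forall>y\<in>trunc (Suc j). [] @ take (m + j) y \<in> trunc j"
    using trunc_Suc_dest(1)[OF j] bl by metis
  have a: "fcont_on (trunc (Suc j)) (\<lambda>w. lo j (butlast w))"
  proof (rule fcont_on_cong)
    have e: "econt_on (trunc j) (hL j)" using econt_on_bound_fn levels[OF j, unfolded ivl_level_def] by (auto simp: trunc_def)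
    have "econt_on (trunc (Suc j)) (\<lambda>y. hL j ([] @ take (m + j) y))"
      by (rule econt_on_take[OF e sub _ pre]) simp
    then show "fcont_on (trunc (Suc j)) (\<lambda>w. psi_ext (hL j ([] @ take (m + j) w)))" by (rule fcont_on_psi_ext)
    fix w assume "w \<in> trunc (Suc j)"
    then show "psi_ext (hL j ([] @ take (m + j) w)) = lo j (butlast w)" using bl by (simp add: lo_def)
  qed
  have b: "fcont_on (trunc (Suc j)) (\<lambda>w. hi j (butlast w))"
  proof (rule fcont_on_cong)
    have e: "econt_on (trunc j) (hU j)" using econt_on_bound_fn levels[OF j, unfolded ivl_level_def] by (auto simp: trunc_def)
    have "econt_on (trunc (Suc j)) (\<lambda>y. hU j ([] @ take (m + j) y))"
      by (rule econt_on_take[OF e sub _ pre]) simp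
    then show "fcont_on (trunc (Suc j)) (\<lambda>w. psi_ext (hU j ([] @ take (m + j) w)))" by (rule fcont_on_psi_ext)
    fix w assume "w \<in> trunc (Suc j)"
    then show "psi_ext (hU j ([] @ take (m + j) w)) = hi j (butlast w)" using bl by (simp add: hi_def)
  qed
  have ord: "\<forall>w\<in>trunc (Suc j). lo j (butlast w) < psi (last w) \<and> psi (last w) < hi j (butlast w)"
    using psi_between_lo_hi[OF j] trunc_Suc_dest[OF j] by metis
  show "fcont_on (trunc (Suc j)) (level_coord j)" unfolding level_coord_def[abs_def] by (rule fcont_on_ratio[OF p a b ord])
qed

lemma cont_nmap: "cont_on Z (m + k) nmap"
  unfolding cont_on_def
proof (intro allI impI)
  fix i assume i: "i < m + k"
  show "econt_on Z (\<lambda>x. Fin (nmap x ! i))"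
  proof (cases "i < m")
    case True
    have "fcont_on Z (\<lambda>x. nmap x ! i)"
      by (rule fcont_on_cong[OF fcont_on_nth[OF Z_subset i]]) (use nmap_nth_low True in simp)
    then show ?thesis by (simp add: fcont_on_def)
  next
    case False
    define j where "j = i - m"
    have j: "j < k" "i = m + j" using i False by (auto simp: j_def)
    have "fcont_on Z (\<lambda>x. level_coord j ([] @ take (m + Suc j) x))"
      by (rule fcont_on_take[OF fcont_on_level_coord[OF j(1)] Z_subset]) (use j in \<open>auto simp: trunc_mem_Suc\<close>)
    then have "fcont_on Z (\<lambda>x. nmap x ! i)"
      by (rule fcont_on_cong) (use nmap_nth_high j in simp)
    then show ?thesis by (simp add: fcont_on_def)
  qed
qed

lemma defA_trunc: "j \<le> k \<Longrightarrow> defA SL A (m + j) (trunc j)"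
proof -
  assume j: "j \<le> k"
  have "defA SL A ((m + j) + (k - j)) Z" using Z_defA j by simp
  then show ?thesis unfolding trunc_def by (rule defA_take[OF st])
qed

lemma lo_approx:
  assumes j: "j < k" and x: "x \<in> trunc j" and c: "lo j x < c"
  shows "\<exists>y. x @ [y] \<in> trunc (Suc j) \<and> psi y < c"
proof -
  have "lo j x < min c (hi j x)" using c lo_less_hi[OF j x] by simp
  then obtain e where e: "lo j x < e" "e < min c (hi j x)" using dense by blast
  then obtain y where "y \<in> eivl (hL j x) (hU j x)" "psi y = e"
    using psi_surj_eivl[of "hL j x" e "hU j x"] by (auto simp: lo_def hi_def)
  then show ?thesis using trunc_Suc_iff[OF j x] e by auto
qed

lemma hi_approx:
  assumes j: "j < k" and x: "x \<in> trunc j" and c: "c < hi j x"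
  shows "\<exists>y. x @ [y] \<in> trunc (Suc j) \<and> c < psi y"
proof -
  have "max c (lo j x) < hi j x" using c lo_less_hi[OF j x] by simp
  then obtain e where e: "max c (lo j x) < e" "e < hi j x" using dense by blast
  then obtain y where "y \<in> eivl (hL j x) (hU j x)" "psi y = e"
    using psi_surj_eivl[of "hL j x" e "hU j x"] by (auto simp: lo_def hi_def)
  then show ?thesis using trunc_Suc_iff[OF j x] e by auto
qed

lemma defA_lo_graph: "j < k \<Longrightarrow> defA SL A (Suc (m + j)) {x @ [lo j x] | x. x \<in> trunc j}"
  using defA_trunc[of j] defA_trunc[of "Suc j"] psi_between_lo_hi lo_approx
  by (intro defA_graph_inf_psi[OF fs]) auto

lemma defA_hi_graph: "j < k \<Longrightarrow> defA SL A (Suc (m + j)) {x @ [hi j x] | x. x \<in> trunc j}"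
  using defA_trunc[of j] defA_trunc[of "Suc j"] psi_between_lo_hi hi_approx
  by (intro defA_graph_sup_psi[OF fs]) auto

definition level_coord_graph :: "nat \<Rightarrow> 'a list set" where "level_coord_graph j = {w @ [level_coord j w] | w. w \<in> trunc (Suc j)}"

lemma defA_level_coord_graph:
  assumes j: "j < k"
  shows "defA SL A (Suc (Suc (m + j))) (level_coord_graph j)"
proof -
  define n where "n = m + j"
  let ?Z1 = "trunc (Suc j)"
  let ?phi = "Conj (At ?Z1 [0..<Suc n])
      (Ex (Ex (Ex (Conj (At {x @ [lo j x] | x. x \<in> trunc j} ([0..<n] @ [Suc (Suc n)]))
                   (Conj (At {x @ [hi j x] | x. x \<in> trunc j} ([0..<n] @ [Suc (Suc (Suc n))]))
                     (Conj (At psi_graph [n, Suc (Suc (Suc (Suc n)))])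
                        (fm_eq (Suc (Suc (Suc (Suc (Suc n)))))
                           (Mu (V (Suc n)) (Mi (V (Suc (Suc (Suc n)))) (V (Suc (Suc n)))))
                           (Mi (V (Suc (Suc (Suc (Suc n))))) (V (Suc (Suc n)))))))))))"
  have Z1: "defA SL A (Suc n) ?Z1" using defA_trunc[of "Suc j"] j by (simp add: n_def)
  have Ps: "defA SL A (Suc (Suc 0)) psi_graph" using defA_psi_graph[OF fs] by (simp add: numeral_2_eq_2)
  have "fm_ok SL A (Suc (Suc n)) ?phi"
    using Z1 Ps defA_lo_graph[OF j] defA_hi_graph[OF j] fm_ok_cmp[OF fs] by (simp add: n_def)
  then have d: "defA SL A (Suc (Suc n)) {w \<in> tuples (Suc (Suc n)). sem ?phi w}" by (rule defA_fm[OF st])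
  have "{w \<in> tuples (Suc (Suc n)). sem ?phi w} = level_coord_graph j"
  proof (rule set_eqI)
    fix w
    show "w \<in> {w \<in> tuples (Suc (Suc n)). sem ?phi w} \<longleftrightarrow> w \<in> level_coord_graph j"
    proof (cases "length w = Suc (Suc n)")
      case True
      then obtain x' t where w1: "w = x' @ [t]" "length x' = Suc n" by (metis length_Suc_conv_rev)
      then obtain x y where w2: "x' = x @ [y]" "length x = n" by (metis length_Suc_conv_rev)
      have w: "w = x @ [y, t]" using w1 w2 by simp
      have L: "x @ [l] \<in> {x @ [lo j x] | x. x \<in> trunc j} \<longleftrightarrow> x \<in> trunc j \<and> l = lo j x" for l
        using w2(2) trunc_subset[of j] j by auto
      have H: "x @ [h] \<in> {x @ [hi j x] | x. x \<in> trunc j} \<longleftrightarrow> x \<in> trunc j \<and> h = hi j x" for h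
        using w2(2) trunc_subset[of j] j by auto
      have "sem ?phi w \<longleftrightarrow> x @ [y] \<in> ?Z1 \<and> (\<exists>l h p. (x @ [l] \<in> {x @ [lo j x] | x. x \<in> trunc j}) \<and> (x @ [h] \<in> {x @ [hi j x] | x. x \<in> trunc j}) \<and>
             p = psi y \<and> t * (h - l) = p - l)"
        using w w2(2) by (simp add: nth_append)
      also have "\<dots> \<longleftrightarrow> x @ [y] \<in> ?Z1 \<and> t = level_coord j (x @ [y])"
      proof (cases "x @ [y] \<in> ?Z1")
        case True
        have x0: "x \<in> trunc j" using trunc_Suc_dest(1)[OF j True] by simp
        have "0 < hi j x - lo j x" using lo_less_hi[OF j x0] by simp
        then have "t * (hi j x - lo j x) = psi y - lo j x \<longleftrightarrow> t = level_coord j (x @ [y])"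
          by (simp add: level_coord_snoc eq_divide_eq)
        then show ?thesis using True x0 L H by auto
      qed simp
      also have "\<dots> \<longleftrightarrow> w \<in> level_coord_graph j" using w by (auto simp: level_coord_graph_def)
      finally show ?thesis using True by simp
    next
      case False
      have "level_coord_graph j \<subseteq> tuples (Suc (Suc n))" using trunc_subset[of "Suc j"] j by (auto simp: level_coord_graph_def n_def)
      then show ?thesis using False by auto
    qed
  qed
  then show ?thesis using d by (simp add: n_def)
qed

lemma nmap_eq_map:
  assumes x: "x \<in> Z"
  shows "nmap x = map (\<lambda>i. if i < m then x ! i else level_coord (i - m) (map (nth x) [0..<Suc i])) [0..<m + k]"
proof (rule nth_equalityI)
  show "length (nmap x) = length (map (\<lambda>i. if i < m then x ! i else level_coord (i - m) (map (nth x) [0..<Suc i])) [0..<m + k])"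
    using length_nmap[OF x] by simp
  fix i assume "i < length (nmap x)"
  then have "i < m + k" using length_nmap[OF x] by simp
  then show "nmap x ! i = map (\<lambda>i. if i < m then x ! i else level_coord (i - m) (map (nth x) [0..<Suc i])) [0..<m + k] ! i"
    using nmap_nth_low[OF x] nmap_nth_high[OF x, of "i - m"] length_nmap[OF x] Z_subset x
    by (cases "i < m") (auto simp: map_nth_upt subset_iff simp del: upt_Suc)
qed

lemma fdef_nmap: "fdef SL A (m + k) (m + k) Z nmap"
proof -
  let ?f = "\<lambda>i x. if i < m then x ! i else level_coord (i - m) (map (nth x) [0..<Suc i])"
  have "defA SL A (Suc (m + k)) {x @ [?f i x] | x. x \<in> Z}" if i: "i < m + k" for i
  proof (cases "i < m")
    case True
    then show ?thesis using defA_graph_nth[OF st Z_defA, of i] i by simp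
  next
    case False
    then obtain j where j: "i = m + j" "j < k" using i by (metis add_less_imp_less_left le_Suc_ex not_less)
    have "defA SL A (Suc (m + k)) {x @ [level_coord j (map (nth x) [0..<Suc (m + j)])] | x. x \<in> Z}"
      using defA_level_coord_graph[OF j(2)] j(2) trunc_mem_Suc Z_subset
      by (intro defA_graph_reindex[OF st _ Z_defA])
        (auto simp: level_coord_graph_def map_nth_upt subset_iff simp del: upt_Suc)
    then show ?thesis using False j by simp
  qed
  then have "defA SL A (m + k + (m + k)) {x @ map (\<lambda>i. ?f i x) [0..<m + k] | x. x \<in> Z}"
    by (rule defA_graph_tuple[OF st Z_defA])
  moreover have "{x @ map (\<lambda>i. ?f i x) [0..<m + k] | x. x \<in> Z} = {x @ nmap x | x. x \<in> Z}"
    using nmap_eq_map by (metis (no_types, lifting))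
  ultimately show ?thesis using Z_subset length_nmap by (simp add: fdef_def)
qed

definition fibre_map :: "nat \<Rightarrow> 'a list \<Rightarrow> 'a list \<Rightarrow> 'a list" where
  "fibre_map j g y = map (\<lambda>i. level_coord i (g @ take (Suc i) y)) [0..<j]"

definition trunc_fibre :: "nat \<Rightarrow> 'a list \<Rightarrow> 'a list set" where "trunc_fibre j g = fiber (trunc j) g"

lemma length_fibre_map[simp]: "length (fibre_map j g y) = j" by (simp add: fibre_map_def)

lemma fibre_map_snoc: "length b = j \<Longrightarrow> fibre_map (Suc j) g (b @ [v]) = fibre_map j g b @ [level_coord j (g @ b @ [v])]"
  by (auto simp: fibre_map_def)

lemma take_fibre_map: "j \<le> j' \<Longrightarrow> take j (fibre_map j' g y) = fibre_map j g y"
  by (simp add: fibre_map_def take_map min_def)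

lemma fibre_map_take: "j \<le> length y \<Longrightarrow> fibre_map j g (take j y) = fibre_map j g y"
  by (auto simp: fibre_map_def min_def)

lemma nmap_append: "length g = m \<Longrightarrow> length y = k \<Longrightarrow> nmap (g @ y) = g @ fibre_map k g y"
  by (simp add: nmap_def fibre_map_def)

lemma trunc_fibre_length: "j \<le> k \<Longrightarrow> y \<in> trunc_fibre j g \<Longrightarrow> length g = m \<Longrightarrow> length y = j"
  using trunc_subset[of j] by (auto simp: trunc_fibre_def fiber_def)

lemma trunc_take:
  assumes "w \<in> trunc j" "i \<le> j" "j \<le> k" shows "take (m + i) w \<in> trunc i"
  using assms by (auto simp: trunc_def min_def)

lemma trunc_fibre_take:
  assumes "y \<in> trunc_fibre j g" "i \<le> j" "j \<le> k" "length g = m" shows "take i y \<in> trunc_fibre i g"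
proof -
  have gy: "g @ y \<in> trunc j" using assms(1) by (simp add: trunc_fibre_def fiber_def)
  have "take (m + i) (g @ y) \<in> trunc i" using trunc_take[OF gy assms(2,3)] .
  moreover have "take (m + i) (g @ y) = g @ take i y" using assms(4) by simp
  ultimately show ?thesis by (simp add: trunc_fibre_def fiber_def)
qed

lemma fibre_map_unit_cube:
  assumes y: "y \<in> trunc_fibre j g" and j: "j \<le> k" and g: "length g = m"
  shows "fibre_map j g y \<in> unit_cube j"
proof -
  have "0 < level_coord i (g @ take (Suc i) y) \<and> level_coord i (g @ take (Suc i) y) < 1" if i: "i < j" for i
  proof -
    have "take (Suc i) y \<in> trunc_fibre (Suc i) g" using trunc_fibre_take[OF y _ j g, of "Suc i"] i by simp
    then have "g @ take (Suc i) y \<in> trunc (Suc i)" by (simp add: trunc_fibre_def fiber_def)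
    then show ?thesis using level_coord_bounds' i j by simp
  qed
  then show ?thesis by (simp add: unit_cube_def fibre_map_def)
qed

lemma fibre_map_inj:
  assumes j: "j \<le> k" and g: "length g = m"
  shows "y \<in> trunc_fibre j g \<Longrightarrow> y' \<in> trunc_fibre j g \<Longrightarrow> fibre_map j g y = fibre_map j g y' \<Longrightarrow> y = y'"
  using j
proof (induction j arbitrary: y y')
  case 0
  then show ?case using trunc_fibre_length[of 0 y g] trunc_fibre_length[of 0 y' g] g by simp
next
  case (Suc j)
  have jk: "j < k" using Suc by simp
  have ly: "length y = Suc j" "length y' = Suc j" using trunc_fibre_length Suc.prems g by auto
  obtain b v where bv: "y = b @ [v]" "length b = j" using ly(1) by (metis length_Suc_conv_rev)
  obtain b' v' where bv': "y' = b' @ [v']" "length b' = j" using ly(2) by (metis length_Suc_conv_rev)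
  have bZ: "b \<in> trunc_fibre j g" "b' \<in> trunc_fibre j g"
    using trunc_fibre_take[OF Suc.prems(1), of j] trunc_fibre_take[OF Suc.prems(2), of j] Suc.prems(4) g bv bv' by auto
  have e: "fibre_map j g b @ [level_coord j (g @ b @ [v])] = fibre_map j g b' @ [level_coord j (g @ b' @ [v'])]"
    using Suc.prems(3) fibre_map_snoc bv bv' by metis
  then have "fibre_map j g b = fibre_map j g b'" by simp
  then have bb: "b = b'" using Suc.IH bZ Suc.prems(4) by simp
  have "level_coord j ((g @ b) @ [v]) = level_coord j ((g @ b) @ [v'])" using e bb by simp
  moreover have "g @ b \<in> trunc j" using bZ by (simp add: trunc_fibre_def fiber_def)
  ultimately have "v = v'" using level_coord_inj[OF jk] by blast
  then show ?case using bb bv bv' by simp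
qed

lemma fibre_map_surj:
  assumes g: "g \<in> trunc 0" and j: "j \<le> k"
  shows "t \<in> unit_cube j \<Longrightarrow> \<exists>y\<in>trunc_fibre j g. fibre_map j g y = t"
  using j
proof (induction j arbitrary: t)
  case 0
  then have "t = []" by (simp add: unit_cube_def)
  moreover have "[] \<in> trunc_fibre 0 g" using g by (simp add: trunc_fibre_def fiber_def)
  ultimately show ?case by (auto simp: fibre_map_def)
next
  case (Suc j)
  have jk: "j < k" using Suc by simp
  have lt: "length t = Suc j" using Suc.prems by (simp add: unit_cube_def)
  obtain t' c where tc: "t = t' @ [c]" "length t' = j" using lt by (metis length_Suc_conv_rev)
  have A: "\<forall>i<Suc j. 0 < t ! i \<and> t ! i < 1" using Suc.prems by (simp add: unit_cube_def)
  have "\<forall>i<j. 0 < t' ! i \<and> t' ! i < 1"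
  proof (intro allI impI)
    fix i assume i: "i < j"
    then have "t ! i = t' ! i" using tc by (simp add: nth_append)
    moreover have "i < Suc j" using i by simp
    ultimately show "0 < t' ! i \<and> t' ! i < 1" using A by metis
  qed
  then have "t' \<in> unit_cube j" using tc by (simp add: unit_cube_def)
  then obtain y where y: "y \<in> trunc_fibre j g" "fibre_map j g y = t'" using Suc.IH jk by auto
  have "t ! j = c" using tc by (simp add: nth_append)
  then have c: "0 < c" "c < 1" using A by auto
  have gy: "g @ y \<in> trunc j" using y by (simp add: trunc_fibre_def fiber_def)
  obtain v where v: "(g @ y) @ [v] \<in> trunc (Suc j)" "level_coord j ((g @ y) @ [v]) = c" using level_coord_surj[OF jk gy c] by blast
  have lg: "length g = m" using g trunc_subset[of 0] by auto
  have ly: "length y = j" using trunc_fibre_length y jk lg by simp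
  have "y @ [v] \<in> trunc_fibre (Suc j) g" using v by (simp add: trunc_fibre_def fiber_def)
  moreover have "fibre_map (Suc j) g (y @ [v]) = t" using fibre_map_snoc[OF ly] y v tc by simp
  ultimately show ?case by blast
qed

lemma near_fibre_map_box:
  assumes y: "y \<in> trunc_fibre j g" and j: "j \<le> k" and g: "length g = m" and b: "fibre_map j g y \<in> box lb ub"
  shows "near (trunc_fibre j g) y (\<lambda>y'. fibre_map j g y' \<in> box lb ub)"
proof -
  have Zs: "trunc_fibre j g \<subseteq> tuples j" using trunc_fibre_length[OF j _ g] by auto
  have ll: "length lb = j" "length ub = j" using b by (auto simp: box_mem)
  have c: "fcont_on (trunc_fibre j g) (\<lambda>y. level_coord i (g @ take (Suc i) y))" if i: "i < j" for i
  proof (rule fcont_on_take[OF fcont_on_level_coord Zs])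
    show "i < k" using i j by simp
    show "Suc i \<le> j" using i by simp
    show "\<forall>y\<in>trunc_fibre j g. g @ take (Suc i) y \<in> trunc (Suc i)"
      using trunc_fibre_take[OF _ _ j g, of _ "Suc i"] i by (auto simp: trunc_fibre_def fiber_def)
  qed
  have "near (trunc_fibre j g) y (\<lambda>y'. \<forall>i<j. lb ! i < fibre_map j g y' ! i \<and> fibre_map j g y' ! i < ub ! i)"
  proof (rule near_all)
    fix i assume i: "i < j"
    have bi: "lb ! i < fibre_map j g y ! i" "fibre_map j g y ! i < ub ! i" using b i ll by (auto simp: box_mem)
    have e: "fibre_map j g y' ! i = level_coord i (g @ take (Suc i) y')" for y' using i by (simp add: fibre_map_def)
    have "near (trunc_fibre j g) y (\<lambda>y'. lb ! i < level_coord i (g @ take (Suc i) y'))"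
      using c[OF i] y bi e unfolding fcont_on_iff by auto
    moreover have "near (trunc_fibre j g) y (\<lambda>y'. level_coord i (g @ take (Suc i) y') < ub ! i)"
      using c[OF i] y bi e unfolding fcont_on_iff by auto
    ultimately show "near (trunc_fibre j g) y (\<lambda>y'. lb ! i < fibre_map j g y' ! i \<and> fibre_map j g y' ! i < ub ! i)"
      unfolding e by (rule near_conj)
  qed
  then show ?thesis by (rule near_mono) (use ll in \<open>auto simp: box_mem\<close>)
qed

lemma level_coord_graph_snoc: "j < k \<Longrightarrow> length w = Suc (m + j) \<Longrightarrow> w @ [v] \<in> level_coord_graph j \<longleftrightarrow> w \<in> trunc (Suc j) \<and> v = level_coord j w"
proof -
  assume j: "j < k" and lw: "length w = Suc (m + j)"
  have "\<And>w'. w' \<in> trunc (Suc j) \<Longrightarrow> length w' = Suc (m + j)" using trunc_subset[of "Suc j"] j by auto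
  then show ?thesis using lw by (auto simp: level_coord_graph_def)
qed

lemma defA_level_coord_total:
  assumes j: "j < k" and c: "length c = m + j"
  shows "defA SL UNIV 2 {[y, (if c @ [y] \<in> trunc (Suc j) then level_coord j (c @ [y]) else 0)] | y. True}"
proof -
  let ?Zb = "fiber (trunc (Suc j)) c" and ?Tb = "fiber (level_coord_graph j) c"
  have Zb: "defA SL UNIV 1 ?Zb"
    using defA_fiber[of SL UNIV c 1 "trunc (Suc j)"] defA_mono[OF defA_trunc[of "Suc j"]] j c by simp
  have Tb: "defA SL UNIV 2 ?Tb"
    using defA_fiber[of SL UNIV c 2 "level_coord_graph j"] defA_mono[OF defA_level_coord_graph[OF j]] c by (simp add: numeral_2_eq_2)
  let ?phi = "Disj (Conj (At ?Zb [0]) (At ?Tb [0, 1])) (Conj (Neg (At ?Zb [0])) (fm_eq 2 (V 1) C0)) :: 'a fm"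
  have "fm_ok SL UNIV 2 ?phi" using Zb Tb fm_ok_cmp[OF fs] by (simp add: numeral_2_eq_2)
  then have d: "defA SL UNIV 2 {w \<in> tuples 2. sem ?phi w}" by (rule defA_fm[OF st])
  have "{w \<in> tuples 2. sem ?phi w} = {[y, (if c @ [y] \<in> trunc (Suc j) then level_coord j (c @ [y]) else 0)] | y. True}"
  proof (rule set_eqI)
    fix w :: "'a list"
    show "w \<in> {w \<in> tuples 2. sem ?phi w} \<longleftrightarrow> w \<in> {[y, (if c @ [y] \<in> trunc (Suc j) then level_coord j (c @ [y]) else 0)] | y. True}"
    proof (cases "length w = 2")
      case True
      then obtain y t where w: "w = [y, t]" by (auto simp: numeral_2_eq_2 length_Suc_conv)
      have lc: "length (c @ [y]) = Suc (m + j)" using c by simp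
      have T: "[y, t] \<in> ?Tb \<longleftrightarrow> c @ [y] \<in> trunc (Suc j) \<and> t = level_coord j (c @ [y])"
        using level_coord_graph_snoc[OF j lc, of t] by (simp add: fiber_def)
      show ?thesis using w T by (auto simp: fiber_def)
    next
      case False
      then show ?thesis by auto
    qed
  qed
  then show ?thesis using d by simp
qed

end

section \<open>The image of a uniform family\<close>

locale normalised_family = normalising_map SL A m k Z hL hU for SL :: "nat \<Rightarrow> 'a::linordered_field list set \<Rightarrow> bool"
    and A m k Z hL hU +
  fixes P :: "'a set" and S J :: "'a list set"
  assumes family: "supercone_family SL (gen SL P) m k S J"
    and shell: "is_shell SL m k S J Z"
    and J_defA: "defA (gen SL P) A (m + k) J"
begin

abbreviation "SP \<equiv> gen SL P"

lemma S_subset: "S \<subseteq> tuples m" and J_subset: "J \<subseteq> tuples (m + k)"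
  and J_eq: "J = {g @ y | g y. g \<in> S \<and> y \<in> fiber J g}"
  and supercone_fibre_J: "\<forall>g\<in>S. supercone SL SP k (fiber J g)"
  using family by (auto simp: supercone_family_def)

lemma J_subset_Z: "J \<subseteq> Z" using shell by (simp add: is_shell_def)

lemma cl_fibre_J_eq: "g \<in> S \<Longrightarrow> 0 < j \<Longrightarrow> j \<le> k \<Longrightarrow>
   cl j (fiber (take (m + j) ` J) g) = cl j (fiber (take (m + j) ` Z) g)"
  using shell by (simp add: is_shell_def)

definition cone_trunc :: "'a list \<Rightarrow> nat \<Rightarrow> 'a list set" where "cone_trunc g j = take j ` fiber J g"

lemma length_S: "g \<in> S \<Longrightarrow> length g = m" using S_subset by auto

lemma J_decompose: "x \<in> J \<Longrightarrow> \<exists>g z. x = g @ z \<and> g \<in> S \<and> g @ z \<in> J \<and> length z = k"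
proof -
  assume x: "x \<in> J"
  then obtain g z where gz: "x = g @ z" "g \<in> S" "z \<in> fiber J g" using J_eq by blast
  have "length z = k" using gz x J_subset length_S by auto
  then show ?thesis using gz x by blast
qed

lemma fiber_take_J: "g \<in> S \<Longrightarrow> j \<le> k \<Longrightarrow> fiber (take (m + j) ` J) g = cone_trunc g j"
proof -
  assume g: "g \<in> S" and j: "j \<le> k"
  have lg: "length g = m" using length_S[OF g] .
  show ?thesis
  proof (rule set_eqI)
    fix y
    show "y \<in> fiber (take (m + j) ` J) g \<longleftrightarrow> y \<in> cone_trunc g j"
    proof
      assume "y \<in> fiber (take (m + j) ` J) g"
      then obtain x where x: "x \<in> J" "g @ y = take (m + j) x" by (auto simp: fiber_def)
      obtain g' z where gz: "x = g' @ z" "g' \<in> S" "g' @ z \<in> J" "length z = k" using J_decompose[OF x(1)] by blast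
      have "g @ y = g' @ take j z" using x(2) gz length_S[OF gz(2)] by simp
      then have "g = g'" "y = take j z" using lg length_S[OF gz(2)] by auto
      then show "y \<in> cone_trunc g j" using gz by (auto simp: cone_trunc_def fiber_def)
    next
      assume "y \<in> cone_trunc g j"
      then obtain z where z: "g @ z \<in> J" "y = take j z" by (auto simp: cone_trunc_def fiber_def)
      have "take (m + j) (g @ z) = g @ y" using z lg by simp
      then show "y \<in> fiber (take (m + j) ` J) g" using z by (force simp: fiber_def)
    qed
  qed
qed

lemma cone_trunc_subset: "g \<in> S \<Longrightarrow> j \<le> k \<Longrightarrow> cone_trunc g j \<subseteq> trunc_fibre j g"
proof -
  assume g: "g \<in> S" and j: "j \<le> k"
  have "fiber (take (m + j) ` J) g \<subseteq> fiber (take (m + j) ` Z) g" using J_subset_Z by (auto simp: fiber_def)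
  then show ?thesis using fiber_take_J[OF g j] by (simp add: trunc_fibre_def trunc_def)
qed

lemma supercone_cone_trunc: "g \<in> S \<Longrightarrow> j \<le> k \<Longrightarrow> supercone SL SP j (cone_trunc g j)"
  unfolding cone_trunc_def using supercone_take supercone_fibre_J by blast

lemma take_cone_trunc: "j < k \<Longrightarrow> take j ` cone_trunc g (Suc j) = cone_trunc g j"
  by (simp add: cone_trunc_def image_image min_def)

lemma cone_trunc_length: "g \<in> S \<Longrightarrow> j \<le> k \<Longrightarrow> y \<in> cone_trunc g j \<Longrightarrow> length y = j"
  using cone_trunc_subset trunc_fibre_length length_S by blast

lemma S_subset_trunc_0: "g \<in> S \<Longrightarrow> g \<in> trunc 0"
proof -
  assume g: "g \<in> S"
  obtain z where "z \<in> fiber J g" using supercone_fibre_J g supercone_props by blast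
  then have "g @ z \<in> Z" using J_subset_Z by (auto simp: fiber_def)
  then have "take m (g @ z) \<in> trunc 0" using trunc_mem[of "g @ z" 0] by simp
  then show ?thesis using length_S[OF g] by simp
qed

lemma fiber_take_image: "g \<in> S \<Longrightarrow> j \<le> k \<Longrightarrow> fiber (take (m + j) ` (nmap ` J)) g = fibre_map j g ` cone_trunc g j"
proof -
  assume g: "g \<in> S" and j: "j \<le> k"
  have lg: "length g = m" using length_S[OF g] .
  have FJ: "take (m + j) (nmap x) = g' @ fibre_map j g' (take j z)" if "x = g' @ z" "g' \<in> S" "length z = k" for x g' z
  proof -
    have "nmap x = g' @ fibre_map k g' z" using nmap_append length_S that by simp
    then have "take (m + j) (nmap x) = g' @ take j (fibre_map k g' z)" using length_S[OF that(2)] by simp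
    also have "\<dots> = g' @ fibre_map j g' (take j z)" using take_fibre_map[OF j] fibre_map_take[of j z g'] that j by simp
    finally show ?thesis .
  qed
  show ?thesis
  proof (rule set_eqI)
    fix y
    show "y \<in> fiber (take (m + j) ` (nmap ` J)) g \<longleftrightarrow> y \<in> fibre_map j g ` cone_trunc g j"
    proof
      assume "y \<in> fiber (take (m + j) ` (nmap ` J)) g"
      then obtain x where x: "x \<in> J" "g @ y = take (m + j) (nmap x)" by (auto simp: fiber_def)
      obtain g' z where gz: "x = g' @ z" "g' \<in> S" "g' @ z \<in> J" "length z = k" using J_decompose[OF x(1)] by blast
      have "g @ y = g' @ fibre_map j g' (take j z)" using x(2) FJ[OF gz(1,2,4)] by simp
      then have "g = g'" "y = fibre_map j g (take j z)" using lg length_S[OF gz(2)] by auto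
      moreover have "take j z \<in> cone_trunc g j" using gz \<open>g = g'\<close> by (auto simp: cone_trunc_def fiber_def)
      ultimately show "y \<in> fibre_map j g ` cone_trunc g j" by blast
    next
      assume "y \<in> fibre_map j g ` cone_trunc g j"
      then obtain z where z: "g @ z \<in> J" "y = fibre_map j g (take j z)" by (auto simp: cone_trunc_def fiber_def)
      have lz: "length z = k" using z J_subset lg by auto
      have "take (m + j) (nmap (g @ z)) = g @ y" using FJ[OF refl g lz] z by simp
      then show "y \<in> fiber (take (m + j) ` (nmap ` J)) g" using z by (force simp: fiber_def)
    qed
  qed
qed

lemma fiber_take_unit_shell: "g \<in> trunc 0 \<Longrightarrow> j \<le> k \<Longrightarrow> fiber (take (m + j) ` unit_shell m Z k) g = unit_cube j"
  using trunc_subset[of 0] by (auto simp: take_unit_shell fiber_unit_shell trunc_def)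

lemma cl_fiber_take_image:
  assumes g: "g \<in> S" and j: "0 < j" "j \<le> k"
  shows "cl j (fibre_map j g ` cone_trunc g j) = cl j (unit_cube j)"
proof
  have lg: "length g = m" using length_S[OF g] .
  show "cl j (fibre_map j g ` cone_trunc g j) \<subseteq> cl j (unit_cube j)"
    using fibre_map_unit_cube cone_trunc_subset[OF g j(2)] j(2) lg by (intro cl_mono) blast
  show "cl j (unit_cube j) \<subseteq> cl j (fibre_map j g ` cone_trunc g j)"
  proof
    fix x :: "'a list" assume x: "x \<in> cl j (unit_cube j)"
    have clK: "cl j (cone_trunc g j) = cl j (trunc_fibre j g)"
      using cl_fibre_J_eq[OF g j] fiber_take_J[OF g j(2)] by (simp add: trunc_fibre_def trunc_def)
    have "\<forall>lb ub. x \<in> box lb ub \<longrightarrow> box lb ub \<inter> fibre_map j g ` cone_trunc g j \<noteq> {}"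
    proof (intro allI impI)
      fix lb ub assume xb: "x \<in> box lb ub"
      obtain u where u: "u \<in> box lb ub" "u \<in> unit_cube j" using x xb unfolding cl_def by blast
      have lu: "length u = j" using u(2) by (simp add: unit_cube_def)
      let ?l0 = "replicate j (0::'a)" and ?u1 = "replicate j (1::'a)"
      have ub: "u \<in> box ?l0 ?u1" using u(2) by (simp add: unit_cube_def box_mem)
      note bi = box_inter[OF u(1) ub]
      have sub: "box (lmax lb ?l0) (lmin ub ?u1) \<subseteq> box lb ub" using bi(2) by blast
      obtain z where z: "z \<in> trunc_fibre j g" "fibre_map j g z = u" using fibre_map_surj[OF S_subset_trunc_0[OF g] j(2) u(2)] by blast
      have "near (trunc_fibre j g) z (\<lambda>y'. fibre_map j g y' \<in> box (lmax lb ?l0) (lmin ub ?u1))"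
        by (rule near_fibre_map_box[OF z(1) j(2) lg]) (use bi z in simp)
      then obtain lo' hi' where N: "z \<in> box lo' hi'" "\<forall>y'\<in>trunc_fibre j g \<inter> box lo' hi'. fibre_map j g y' \<in> box (lmax lb ?l0) (lmin ub ?u1)"
        unfolding near_def by blast
      have "trunc_fibre j g \<subseteq> tuples j" using trunc_fibre_length[OF j(2) _ lg] by auto
      then have "z \<in> cl j (trunc_fibre j g)" using subset_cl[of "trunc_fibre j g" j] z(1) by blast
      then have "z \<in> cl j (cone_trunc g j)" using clK by simp
      then obtain z' where z': "z' \<in> box lo' hi'" "z' \<in> cone_trunc g j" using N(1) unfolding cl_def by blast
      have "z' \<in> trunc_fibre j g" using z'(2) cone_trunc_subset[OF g j(2)] by blast
      then have "fibre_map j g z' \<in> box lb ub" using N(2) z'(1) sub by blast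
      then show "box lb ub \<inter> fibre_map j g ` cone_trunc g j \<noteq> {}" using z'(2) by blast
    qed
    moreover have "x \<in> tuples j" using x by (simp add: cl_def)
    ultimately show "x \<in> cl j (fibre_map j g ` cone_trunc g j)" unfolding cl_def by blast
  qed
qed

lemma defA_image_J: "defA SP A (m + k) (nmap ` J)"
  using defA_image[OF is_structure_gen[OF st] fdef_gen[OF st fdef_nmap] J_defA J_subset_Z] .

lemma shell_fibre_bounds:
  assumes g: "g \<in> S" and j: "j < k" and b: "b \<in> cone_trunc g j"
    and h: "econt_on (tuples j) h1" "econt_on (tuples j) h2"
    and bd: "\<forall>a\<in>take j ` cone_trunc g (Suc j). {y. a @ [y] \<in> cone_trunc g (Suc j)} \<subseteq> eivl (h1 a) (h2 a)"
  shows "{y. g @ b @ [y] \<in> trunc (Suc j)} \<subseteq> eivl (h1 b) (h2 b)"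
proof -
  have gb: "g @ b \<in> trunc j" using b cone_trunc_subset[OF g, of j] j by (auto simp: trunc_fibre_def fiber_def)
  have bt: "b \<in> tuples j" using cone_trunc_length[OF g _ b] j by simp
  have K: "cone_trunc g (Suc j) \<subseteq> tuples (Suc j)" using cone_trunc_length[OF g, of "Suc j"] j by auto
  have fib: "{y. g @ b @ [y] \<in> trunc (Suc j)} = eivl (hL j (g @ b)) (hU j (g @ b))"
    using trunc_Suc_iff[OF j gb] by auto
  have "b @ [y] \<in> cl (Suc j) (cone_trunc g (Suc j))" if "g @ b @ [y] \<in> trunc (Suc j)" for y
  proof -
    have "trunc_fibre (Suc j) g \<subseteq> tuples (Suc j)"
      using trunc_fibre_length[of "Suc j" _ g] j length_S[OF g] by auto
    moreover have "b @ [y] \<in> trunc_fibre (Suc j) g" using that by (simp add: trunc_fibre_def fiber_def)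
    ultimately have "b @ [y] \<in> cl (Suc j) (trunc_fibre (Suc j) g)" using subset_cl by blast
    moreover have "cl (Suc j) (cone_trunc g (Suc j)) = cl (Suc j) (trunc_fibre (Suc j) g)"
      using cl_fibre_J_eq[OF g, of "Suc j"] fiber_take_J[OF g, of "Suc j"] j by (simp add: trunc_fibre_def trunc_def)
    ultimately show ?thesis by simp
  qed
  then have "\<not> eless (Fin y) (h1 b) \<and> \<not> eless (h2 b) (Fin y)" if "g @ b @ [y] \<in> trunc (Suc j)" for y
    using that cl_respects_lower_bound[OF h(1) bd K bt] cl_respects_upper_bound[OF h(2) bd K bt] by blast
  then show ?thesis unfolding fib by (intro eivl_subset_eivl) (use fib in auto)
qed

lemma defA_fibre_image:
  assumes g: "g \<in> S" and j: "j \<le> k"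
  shows "defA SP UNIV j (fibre_map j g ` cone_trunc g j)"
proof -
  have "defA SP A ((m + j) + (k - j)) (nmap ` J)" using defA_image_J j by simp
  then have "defA SP A (m + j) (take (m + j) ` nmap ` J)"
    by (rule defA_take[OF is_structure_gen[OF st]])
  then have "defA SP UNIV (length g + j) (take (m + j) ` nmap ` J)"
    using length_S[OF g] by (auto intro: defA_mono)
  then have "defA SP UNIV j (fiber (take (m + j) ` nmap ` J) g)" by (rule defA_fiber) simp
  then show ?thesis using fiber_take_image[OF g j] by simp
qed

lemma take_fibre_image:
  assumes g: "g \<in> S" and j: "j < k"
  shows "take j ` fibre_map (Suc j) g ` cone_trunc g (Suc j) = fibre_map j g ` cone_trunc g j"
proof -
  have "take j (fibre_map (Suc j) g y) = fibre_map j g (take j y)" if "y \<in> cone_trunc g (Suc j)" for y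
    using cone_trunc_length[OF g _ that] j take_fibre_map[of j "Suc j" g y] fibre_map_take[of j y g] by simp
  then have "take j ` fibre_map (Suc j) g ` cone_trunc g (Suc j) = fibre_map j g ` take j ` cone_trunc g (Suc j)"
    by (simp add: image_image cong: image_cong)
  then show ?thesis using take_cone_trunc[OF j] by simp
qed

lemma fibre_image_snoc:
  assumes g: "g \<in> S" and j: "j < k" and b: "b \<in> cone_trunc g j"
  shows "{t. fibre_map j g b @ [t] \<in> fibre_map (Suc j) g ` cone_trunc g (Suc j)}
    = (\<lambda>y. level_coord j (g @ b @ [y])) ` {y. b @ [y] \<in> cone_trunc g (Suc j)}"
proof (intro set_eqI iffI)
  fix t assume "t \<in> {t. fibre_map j g b @ [t] \<in> fibre_map (Suc j) g ` cone_trunc g (Suc j)}"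
  then obtain y where y: "y \<in> cone_trunc g (Suc j)" "fibre_map j g b @ [t] = fibre_map (Suc j) g y" by auto
  have "length y = Suc j" using cone_trunc_length[OF g _ y(1)] j by simp
  then obtain b' v where bv: "y = b' @ [v]" "length b' = j" by (metis length_Suc_conv_rev)
  have e: "fibre_map j g b @ [t] = fibre_map j g b' @ [level_coord j (g @ b' @ [v])]"
    using y(2) fibre_map_snoc[OF bv(2)] bv by simp
  have "b' \<in> cone_trunc g j" using y(1) bv take_cone_trunc[OF j] by (force simp: image_iff)
  then have "b' \<in> trunc_fibre j g" "b \<in> trunc_fibre j g" using cone_trunc_subset[OF g, of j] j b by auto
  moreover have "fibre_map j g b' = fibre_map j g b" using e by simp
  ultimately have "b' = b" using fibre_map_inj[OF less_imp_le[OF j] length_S[OF g]] by blast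
  then show "t \<in> (\<lambda>y. level_coord j (g @ b @ [y])) ` {y. b @ [y] \<in> cone_trunc g (Suc j)}"
    using e y(1) bv by auto
next
  fix t assume "t \<in> (\<lambda>y. level_coord j (g @ b @ [y])) ` {y. b @ [y] \<in> cone_trunc g (Suc j)}"
  then obtain v where v: "b @ [v] \<in> cone_trunc g (Suc j)" "t = level_coord j (g @ b @ [v])" by auto
  have "length b = j" using cone_trunc_length[OF g _ b] j by simp
  then have "fibre_map (Suc j) g (b @ [v]) = fibre_map j g b @ [t]" using fibre_map_snoc v by simp
  then show "t \<in> {t. fibre_map j g b @ [t] \<in> fibre_map (Suc j) g ` cone_trunc g (Suc j)}"
    using v(1) by force
qed

lemma cone_fibre_cosmall:
  assumes g: "g \<in> S" and j: "j < k" and b: "b \<in> cone_trunc g j"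
  shows "small SL 1 {[y] | y. y \<in> {y. g @ b @ [y] \<in> trunc (Suc j)} - {y. b @ [y] \<in> cone_trunc g (Suc j)}}"
proof -
  obtain h1 h2 where h: "econt_on (tuples j) h1" "econt_on (tuples j) h2"
    and cone: "\<forall>a\<in>take j ` cone_trunc g (Suc j).
      {y. a @ [y] \<in> cone_trunc g (Suc j)} \<subseteq> eivl (h1 a) (h2 a) \<and>
      small SL 1 {[y] | y. y \<in> eivl (h1 a) (h2 a) - {y. a @ [y] \<in> cone_trunc g (Suc j)}}"
    using supercone_cone_trunc[OF g, of "Suc j"] j by auto
  have bK: "b \<in> take j ` cone_trunc g (Suc j)" using b take_cone_trunc[OF j] by simp
  have "{y. g @ b @ [y] \<in> trunc (Suc j)} \<subseteq> eivl (h1 b) (h2 b)"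
    using shell_fibre_bounds[OF g j b h] cone by blast
  moreover have "small SL 1 {[y] | y. y \<in> eivl (h1 b) (h2 b) - {y. b @ [y] \<in> cone_trunc g (Suc j)}}"
    using cone bK by blast
  ultimately show ?thesis by (elim small_mono) blast
qed

lemma fibre_image_level:
  assumes g: "g \<in> S" and j: "j < k" and b: "b \<in> cone_trunc g j"
  shows "{t. fibre_map j g b @ [t] \<in> fibre_map (Suc j) g ` cone_trunc g (Suc j)} \<subseteq> {0<..<1}"
    and "small SL 1 {[t] | t. t \<in> {0<..<1} - {t. fibre_map j g b @ [t] \<in> fibre_map (Suc j) g ` cone_trunc g (Suc j)}}"
proof -
  let ?\<tau> = "\<lambda>y. level_coord j (g @ b @ [y])"
  have gb: "g @ b \<in> trunc j" using b cone_trunc_subset[OF g, of j] j by (auto simp: trunc_fibre_def fiber_def)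
  have bij: "bij_betw ?\<tau> {y. g @ b @ [y] \<in> trunc (Suc j)} {0<..<1}"
    using level_coord_bij[OF j gb] by simp
  have K: "{y. b @ [y] \<in> cone_trunc g (Suc j)} \<subseteq> {y. g @ b @ [y] \<in> trunc (Suc j)}"
    using cone_trunc_subset[OF g, of "Suc j"] j by (auto simp: trunc_fibre_def fiber_def)
  show "{t. fibre_map j g b @ [t] \<in> fibre_map (Suc j) g ` cone_trunc g (Suc j)} \<subseteq> {0<..<1}"
    using fibre_image_snoc[OF g j b] bij K by (auto simp: bij_betw_def)
  have "defA SL UNIV 2 {[y, if (g @ b) @ [y] \<in> trunc (Suc j) then level_coord j ((g @ b) @ [y]) else 0] | y. True}"
    by (rule defA_level_coord_total[OF j]) (use length_S[OF g] cone_trunc_length[OF g _ b] j in simp)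
  then show "small SL 1 {[t] | t. t \<in> {0<..<1} - {t. fibre_map j g b @ [t] \<in> fibre_map (Suc j) g ` cone_trunc g (Suc j)}}"
    using small_bij_image_diff[OF st bij K cone_fibre_cosmall[OF g j b]] fibre_image_snoc[OF g j b] by simp
qed

lemma supercone_fibre_image: "g \<in> S \<Longrightarrow> j \<le> k \<Longrightarrow> supercone SL SP j (fibre_map j g ` cone_trunc g j)"
proof (induction j)
  case 0
  have "cone_trunc g 0 \<noteq> {}" using supercone_fibre_J 0 supercone_props unfolding cone_trunc_def by blast
  then have "cone_trunc g 0 = {[]}" by (auto simp: cone_trunc_def)
  then show ?case by (simp add: fibre_map_def)
next
  case (Suc j)
  then have g: "g \<in> S" and j: "j < k" by auto
  let ?X = "fibre_map (Suc j) g ` cone_trunc g (Suc j)"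
  have "{y. a @ [y] \<in> ?X} \<subseteq> {0<..<1} \<and> small SL 1 {[y] | y. y \<in> {0<..<1} - {y. a @ [y] \<in> ?X}}"
    if "a \<in> take j ` ?X" for a
    using that fibre_image_level[OF g j] take_fibre_image[OF g j] by auto
  moreover have "defA SL UNIV j (tuples j)" by (rule defA_of_structure[OF structure_tuples[OF st] st])
  ultimately show ?case
    using defA_fibre_image[OF g] Suc take_fibre_image[OF g j]
      edef_const[OF st defA_zero[OF fs]] edef_const[OF st defA_one[OF fs]] econt_const
    by (simp only: supercone.simps) (intro conjI exI[of _ "\<lambda>_. Fin 0"] exI[of _ "\<lambda>_. Fin 1"]; simp add: eivl_Fin)
qed

lemma nmap_image_subset: "nmap ` J \<subseteq> tuples (m + k)"
  using length_nmap J_subset_Z by auto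

lemma fiber_nmap_image: "g \<in> S \<Longrightarrow> fiber (nmap ` J) g = fibre_map k g ` cone_trunc g k"
  using fiber_take_image[of g k] nmap_image_subset by (simp add: take_all_iff subset_iff)

lemma supercone_family_image: "supercone_family SL SP m k S (nmap ` J)"
  unfolding supercone_family_def
proof (intro conjI)
  show "nmap ` J = {g @ y | g y. g \<in> S \<and> y \<in> fiber (nmap ` J) g}"
  proof (intro set_eqI iffI)
    fix w assume "w \<in> nmap ` J"
    then obtain g z where "w = nmap (g @ z)" "g \<in> S" "g @ z \<in> J" "length z = k"
      using J_decompose by blast
    moreover have "nmap (g @ z) = g @ fibre_map k g z" using calculation nmap_append length_S by simp
    ultimately have "w = g @ fibre_map k g z" "fibre_map k g z \<in> fiber (nmap ` J) g" "g \<in> S"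
      by (auto simp: fiber_def) (metis image_eqI)
    then show "w \<in> {g @ y | g y. g \<in> S \<and> y \<in> fiber (nmap ` J) g}" by blast
  qed (auto simp: fiber_def)
  show "\<forall>g\<in>S. supercone SL SP k (fiber (nmap ` J) g)"
    using supercone_fibre_image fiber_nmap_image by simp
qed (use S_subset nmap_image_subset defA_mono[OF defA_image_J subset_UNIV] in auto)

lemma nmap_image_subset_unit_shell: "nmap ` J \<subseteq> unit_shell m Z k"
proof
  fix w assume "w \<in> nmap ` J"
  then obtain x where x: "x \<in> Z" "w = nmap x" using J_subset_Z by auto
  have "0 < w ! (m + j) \<and> w ! (m + j) < 1" if "j < k" for j
    using x that nmap_nth_high level_coord_bounds' trunc_mem_Suc by simp
  then show "w \<in> unit_shell m Z k" using x length_nmap take_nmap by (auto simp: unit_shell_def)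
qed

lemma uniform_family_image: "A_uniform_family_shell SL SP A m k S (nmap ` J) (unit_shell m Z k)"
proof -
  have "cl j (fiber (take (m + j) ` nmap ` J) g) = cl j (fiber (take (m + j) ` unit_shell m Z k) g)"
    if "g \<in> S" "0 < j" "j \<le> k" for g j
    using that fiber_take_image cl_fiber_take_image fiber_take_unit_shell S_subset_trunc_0 by simp
  then show ?thesis
    unfolding A_uniform_family_shell_def is_shell_def
    using supercone_family_image nmap_image_subset_unit_shell defA_image_J
      cell_unit_shell[OF fs Z_defA Z_cell] defA_unit_shell[OF fs Z_defA] by auto
qed

end

theorem mainTheorem4:
  fixes SL :: "nat \<Rightarrow> 'a::linordered_field list set \<Rightarrow> bool"
    and P A :: "'a set"
    and m k :: nat
    and S J Z :: "'a list set"
  assumes "standing_assumptions SL P"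
    and "A_uniform_family_shell SL (gen SL P) A m k S J Z"
  shows "\<exists>J' F.
     A_uniform_family_shell SL (gen SL P) A m k S J'
        {g @ y | g y. g \<in> take m ` Z \<and> length y = k \<and> (\<forall>i<k. 0 < y ! i \<and> y ! i < 1)} \<and>
     fdef SL A (m + k) (m + k) Z F \<and> cont_on Z (m + k) F \<and> inj_on F Z \<and> F ` J = J'"
proof -
  have fs: "field_structure SL" and st: "is_structure SL"
    using assms(1) by (auto simp: standing_assumptions_def field_structure_def)
  have family: "supercone_family SL (gen SL P) m k S J" and shell: "is_shell SL m k S J Z"
    and J_defA: "defA (gen SL P) A (m + k) J" and Z_defA: "defA SL A (m + k) Z"
    using assms(2) by (auto simp: A_uniform_family_shell_def)
  have Z: "cell SL (m + k) Z" and J_subset_Z: "J \<subseteq> Z" using shell by (auto simp: is_shell_def)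
  have box: "{g @ y | g y. g \<in> take m ` Z \<and> length y = k \<and> (\<forall>i<k. 0 < y ! i \<and> y ! i < 1)} = unit_shell m Z k"
    by (rule unit_shell_eq) (use cell_nonempty_subset[OF Z] in simp)
  have box_shell: "cell SL (m + k) (unit_shell m Z k)" "defA SL A (m + k) (unit_shell m Z k)"
    using cell_unit_shell[OF fs Z_defA Z] defA_unit_shell[OF fs Z_defA] by auto
  show ?thesis
  proof (cases "S = {}")
    case True
    \<comment> \<open>with no fibre of \<open>J\<close> to exclude graph levels of \<open>Z\<close>, the identity map serves\<close>
    then have "J = {}" using family by (auto simp: supercone_family_def)
    show ?thesis unfolding box \<open>J = {}\<close> True
      by (intro exI[of _ "{}"] exI[of _ "\<lambda>x. x"])
        (use uniform_family_empty[OF st box_shell] fdef_id[OF st Z_defA]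
          cont_on_id cell_nonempty_subset[OF Z] in auto)
  next
    case False
    then obtain g where "g \<in> S" by blast
    then obtain hL hU where "\<And>j. j < k \<Longrightarrow> ivl_level SL Z (m + j) (hL j) (hU j)"
      using shell_levels[OF st Z family J_subset_Z] by blast
    then interpret normalised_family SL A m k Z hL hU P S J
      by unfold_locales (use fs Z Z_defA family shell J_defA in auto)
    show ?thesis unfolding box
      by (intro exI[of _ "nmap ` J"] exI[of _ nmap]) (use uniform_family_image fdef_nmap cont_nmap inj_nmap in auto)
  qed
qed

end
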